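(* Let $E,\tilde E$ be crossed module extensions of $\Pi_0$ with $\Pi_1$ and $\varphi:E\to\tilde E$ an extension equivalence. Let $(s^1,s^0)$ be a section system for $E$ and $(\tilde s^1,\tilde s^0)$ a section system for $\tilde E$ with $\tilde s^0=\varphi_0\circ s^0$ and $\varphi_1\circ s^1=\tilde s^1\circ\varphi_0|_{\mu(M_E)}$. Let $M$ be an abelian $\Pi_0$-module. Then the map $Z^2(\tilde E,M)\to Z^2(E,M)$, $\tilde z\mapsto\big((m,h,g)\mapsto\tilde z(\varphi_1(m),\varphi_0(h),\varphi_0(g))\big)$, restricts to an isomorphism $Z^2_{\mathrm{st},(\tilde s^1,\tilde s^0)}(\tilde E,M)\to Z^2_{\mathrm{st},(s^1,s^0)}(E,M)$, which induces isomorphisms $B^2_{\mathrm{st},(\tilde s^1,\tilde s^0)}(\tilde E,M)\to B^2_{\mathrm{st},(s^1,s^0)}(E,M)$ and $H^2_{\mathrm{st},(\tilde s^1,\tilde s^0)}(\tilde E,M)\to H^2_{\mathrm{st},(s^1,s^0)}(E,M)$.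
   Context: Let $\Pi_0$ be a group, $\Pi_1$ an abelian $\Pi_0$-module. A crossed module $(G,M_V,\mu)$: left action ${}^gm$, $\mu({}^gm)=g\mu(m)g^{-1}$, ${}^{\mu(n)}m=nmn^{-1}$. A crossed module extension $E$ of $\Pi_0$ with $\Pi_1$: crossed module $(G_E,M_E,\mu)$ with monomorphism $\iota:\Pi_1\to M_E$ and epimorphism $\pi:G_E\to\Pi_0$, exact sequence $\Pi_1\to M_E\to G_E\to\Pi_0$, ${}^g\iota(k)=\iota(\pi(g)k)$. An extension equivalence $\varphi:E\to\tilde E$ is a crossed module morphism, i.e. homomorphisms $\varphi_0:G_E\to G_{\tilde E}$, $\varphi_1:M_E\to M_{\tilde E}$ with $\mu\varphi_1=\varphi_0\mu$, $\varphi_1({}^gm)={}^{\varphi_0(g)}\varphi_1(m)$, such that $\varphi_1\iota=\tilde\iota$ and $\tilde\pi\varphi_0=\pi$. A section system for $E$: $s^0:\Pi_0\to G_E$ with $s^0(1)=1$, $\pi s^0=\mathrm{id}$, and $s^1:\mu(M_E)\to M_E$ with $s^1(1)=1$, $\mu s^1=\mathrm{id}$. Cochains of $E$ (with $\bar g=\pi(g)$, $M$ a $G_E$-module via $\pi$): $C^1=\mathrm{Map}(G_E,M)$, $C^2=\mathrm{Map}(M_E\times G_E\times G_E,M)$, $(dc)(m,h,g)=c(\mu(m)h)-c(hg)+\bar hc(g)$, $(dc)(p,n,k,m,h,g)=c(p,\mu(n)k,\mu(m)h)-c(pn,k,hg)+c(n\,{}^km,kh,g)-\bar kc(m,h,g)$.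 Pointed: $c(1)=0$ / $c(1,1,1)=0$. Standardisation w.r.t. $(s^1,s^0)$: for a pointed 2-cocycle $z$, $\sigma_z(g)=z(s^1(gs^0(\bar g)^{-1}),s^0(\bar g),1)$, $z^{\mathrm{std}}=z-d\sigma_z$. $Z^2_{\mathrm{st},(s^1,s^0)}$ = pointed cocycles with $z^{\mathrm{std}}=z$; $B^2_{\mathrm{st},(s^1,s^0)}=\{b\in B^2\cap C^2_{\mathrm{pt}}:b^{\mathrm{std}}=b\}$; $H^2_{\mathrm{st}}=Z^2_{\mathrm{st}}/B^2_{\mathrm{st}}$. *)

theory Defs
  imports "HOL-Algebra.Algebra" "HOL-Library.FuncSet"
begin

(* Groups are HOL-Algebra groups written multiplicatively; abelian groups
   (Pi_1, M) are comm_groups, also written multiplicatively (so the paper's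
   "+" is \<otimes>, "-" is inv, "0" is \<one>). *)

definition group_action_on ::
  "('g,'x) monoid_scheme \<Rightarrow> ('m,'y) monoid_scheme \<Rightarrow> ('g \<Rightarrow> 'm \<Rightarrow> 'm) \<Rightarrow> bool" where
  "group_action_on G H a \<longleftrightarrow>
     (\<forall>g\<in>carrier G. a g \<in> hom H H) \<and>
     (\<forall>m\<in>carrier H. a \<one>\<^bsub>G\<^esub> m = m) \<and>
     (\<forall>g\<in>carrier G. \<forall>h\<in>carrier G. \<forall>m\<in>carrier H. a (g \<otimes>\<^bsub>G\<^esub> h) m = a g (a h m))"

definition abelian_module :: "('p,'x) monoid_scheme \<Rightarrow> ('a,'y) monoid_scheme \<Rightarrow> ('p \<Rightarrow> 'a \<Rightarrow> 'a) \<Rightarrow> bool" where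
  "abelian_module P A a \<longleftrightarrow> group P \<and> comm_group A \<and> group_action_on P A a"

definition crossed_module ::
  "'g monoid \<Rightarrow> 'm monoid \<Rightarrow> ('g \<Rightarrow> 'm \<Rightarrow> 'm) \<Rightarrow> ('m \<Rightarrow> 'g) \<Rightarrow> bool" where
  "crossed_module G Mg a mu \<longleftrightarrow> group G \<and> group Mg \<and> group_action_on G Mg a \<and>
     mu \<in> hom Mg G \<and>
     (\<forall>g\<in>carrier G. \<forall>m\<in>carrier Mg. mu (a g m) = g \<otimes>\<^bsub>G\<^esub> mu m \<otimes>\<^bsub>G\<^esub> inv\<^bsub>G\<^esub> g) \<and>
     (\<forall>n\<in>carrier Mg. \<forall>m\<in>carrier Mg. a (mu n) m = n \<otimes>\<^bsub>Mg\<^esub> m \<otimes>\<^bsub>Mg\<^esub> inv\<^bsub>Mg\<^esub> n)"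

record ('p,'k,'g,'m) cmext =
  xG :: "'g monoid"
  xM :: "'m monoid"
  xact :: "'g \<Rightarrow> 'm \<Rightarrow> 'm"
  xmu :: "'m \<Rightarrow> 'g"
  xiota :: "'k \<Rightarrow> 'm"
  xpi :: "'g \<Rightarrow> 'p"

definition crossed_ext ::
  "'p monoid \<Rightarrow> 'k monoid \<Rightarrow> ('p \<Rightarrow> 'k \<Rightarrow> 'k) \<Rightarrow> ('p,'k,'g,'m) cmext \<Rightarrow> bool" where
  "crossed_ext P K aK E \<longleftrightarrow>
     abelian_module P K aK \<and>
     crossed_module (xG E) (xM E) (xact E) (xmu E) \<and>
     xiota E \<in> hom K (xM E) \<and> inj_on (xiota E) (carrier K) \<and>
     xpi E \<in> hom (xG E) P \<and> xpi E ` carrier (xG E) = carrier P \<and>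
     xiota E ` carrier K = kernel (xM E) (xG E) (xmu E) \<and>
     xmu E ` carrier (xM E) = kernel (xG E) P (xpi E) \<and>
     (\<forall>g\<in>carrier (xG E). \<forall>k\<in>carrier K.
        xact E g (xiota E k) = xiota E (aK (xpi E g) k))"

definition ext_equiv ::
  "'k monoid \<Rightarrow> ('p,'k,'g,'m) cmext \<Rightarrow> ('p,'k,'g2,'m2) cmext \<Rightarrow> ('g \<Rightarrow> 'g2) \<Rightarrow> ('m \<Rightarrow> 'm2) \<Rightarrow> bool" where
  "ext_equiv K E E' phi0 phi1 \<longleftrightarrow>
     phi0 \<in> hom (xG E) (xG E') \<and> phi1 \<in> hom (xM E) (xM E') \<and>
     (\<forall>m\<in>carrier (xM E). xmu E' (phi1 m) = phi0 (xmu E m)) \<and>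
     (\<forall>g\<in>carrier (xG E). \<forall>m\<in>carrier (xM E). phi1 (xact E g m) = xact E' (phi0 g) (phi1 m)) \<and>
     (\<forall>k\<in>carrier K. phi1 (xiota E k) = xiota E' k) \<and>
     (\<forall>g\<in>carrier (xG E). xpi E' (phi0 g) = xpi E g)"

definition section_system ::
  "'p monoid \<Rightarrow> ('p,'k,'g,'m) cmext \<Rightarrow> ('g \<Rightarrow> 'm) \<Rightarrow> ('p \<Rightarrow> 'g) \<Rightarrow> bool" where
  "section_system P E s1 s0 \<longleftrightarrow>
     s0 \<in> carrier P \<rightarrow> carrier (xG E) \<and> s0 \<one>\<^bsub>P\<^esub> = \<one>\<^bsub>xG E\<^esub> \<and>
     (\<forall>x\<in>carrier P. xpi E (s0 x) = x) \<and>
     s1 \<in> xmu E ` carrier (xM E) \<rightarrow> carrier (xM E) \<and> s1 \<one>\<^bsub>xG E\<^esub> = \<one>\<^bsub>xM E\<^esub> \<and>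
     (\<forall>g\<in>xmu E ` carrier (xM E). xmu E (s1 g) = g)"

definition dom2 :: "('p,'k,'g,'m) cmext \<Rightarrow> ('m \<times> 'g \<times> 'g) set" where
  "dom2 E = carrier (xM E) \<times> carrier (xG E) \<times> carrier (xG E)"

definition C1 :: "('p,'k,'g,'m) cmext \<Rightarrow> 'a monoid \<Rightarrow> ('g \<Rightarrow> 'a) set" where
  "C1 E A = carrier (xG E) \<rightarrow>\<^sub>E carrier A"

definition C2 :: "('p,'k,'g,'m) cmext \<Rightarrow> 'a monoid \<Rightarrow> ('m \<times> 'g \<times> 'g \<Rightarrow> 'a) set" where
  "C2 E A = dom2 E \<rightarrow>\<^sub>E carrier A"

definition C2grp :: "('p,'k,'g,'m) cmext \<Rightarrow> 'a monoid \<Rightarrow> ('m \<times> 'g \<times> 'g \<Rightarrow> 'a) monoid" where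
  "C2grp E A = \<lparr>carrier = C2 E A,
     monoid.mult = (\<lambda>a b. restrict (\<lambda>x. a x \<otimes>\<^bsub>A\<^esub> b x) (dom2 E)),
     monoid.one = restrict (\<lambda>x. \<one>\<^bsub>A\<^esub>) (dom2 E)\<rparr>"

definition d1 :: "('p,'k,'g,'m) cmext \<Rightarrow> 'a monoid \<Rightarrow> ('p \<Rightarrow> 'a \<Rightarrow> 'a) \<Rightarrow> ('g \<Rightarrow> 'a) \<Rightarrow> ('m \<times> 'g \<times> 'g \<Rightarrow> 'a)" where
  "d1 E A aA c = restrict (\<lambda>(m,h,g).
       c (xmu E m \<otimes>\<^bsub>xG E\<^esub> h) \<otimes>\<^bsub>A\<^esub> inv\<^bsub>A\<^esub> (c (h \<otimes>\<^bsub>xG E\<^esub> g)) \<otimes>\<^bsub>A\<^esub> aA (xpi E h) (c g))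
     (dom2 E)"

definition d2val :: "('p,'k,'g,'m) cmext \<Rightarrow> 'a monoid \<Rightarrow> ('p \<Rightarrow> 'a \<Rightarrow> 'a) \<Rightarrow> ('m \<times> 'g \<times> 'g \<Rightarrow> 'a)
     \<Rightarrow> 'm \<Rightarrow> 'm \<Rightarrow> 'g \<Rightarrow> 'm \<Rightarrow> 'g \<Rightarrow> 'g \<Rightarrow> 'a" where
  "d2val E A aA c p n k m h g =
      c (p, xmu E n \<otimes>\<^bsub>xG E\<^esub> k, xmu E m \<otimes>\<^bsub>xG E\<^esub> h)
      \<otimes>\<^bsub>A\<^esub> inv\<^bsub>A\<^esub> (c (p \<otimes>\<^bsub>xM E\<^esub> n, k, h \<otimes>\<^bsub>xG E\<^esub> g))
      \<otimes>\<^bsub>A\<^esub> c (n \<otimes>\<^bsub>xM E\<^esub> xact E k m, k \<otimes>\<^bsub>xG E\<^esub> h, g)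
      \<otimes>\<^bsub>A\<^esub> inv\<^bsub>A\<^esub> (aA (xpi E k) (c (m, h, g)))"

definition Z2 :: "('p,'k,'g,'m) cmext \<Rightarrow> 'a monoid \<Rightarrow> ('p \<Rightarrow> 'a \<Rightarrow> 'a) \<Rightarrow> ('m \<times> 'g \<times> 'g \<Rightarrow> 'a) set" where
  "Z2 E A aA = {z \<in> C2 E A. \<forall>p\<in>carrier (xM E). \<forall>n\<in>carrier (xM E). \<forall>k\<in>carrier (xG E).
      \<forall>m\<in>carrier (xM E). \<forall>h\<in>carrier (xG E). \<forall>g\<in>carrier (xG E).
      d2val E A aA z p n k m h g = \<one>\<^bsub>A\<^esub>}"

definition B2 :: "('p,'k,'g,'m) cmext \<Rightarrow> 'a monoid \<Rightarrow> ('p \<Rightarrow> 'a \<Rightarrow> 'a) \<Rightarrow> ('m \<times> 'g \<times> 'g \<Rightarrow> 'a) set" where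
  "B2 E A aA = d1 E A aA ` C1 E A"

definition C2pt :: "('p,'k,'g,'m) cmext \<Rightarrow> 'a monoid \<Rightarrow> ('m \<times> 'g \<times> 'g \<Rightarrow> 'a) set" where
  "C2pt E A = {c \<in> C2 E A. c (\<one>\<^bsub>xM E\<^esub>, \<one>\<^bsub>xG E\<^esub>, \<one>\<^bsub>xG E\<^esub>) = \<one>\<^bsub>A\<^esub>}"

definition sigma_std :: "('p,'k,'g,'m) cmext \<Rightarrow> ('g \<Rightarrow> 'm) \<Rightarrow> ('p \<Rightarrow> 'g)
     \<Rightarrow> ('m \<times> 'g \<times> 'g \<Rightarrow> 'a) \<Rightarrow> ('g \<Rightarrow> 'a)" where
  "sigma_std E s1 s0 z = restrict (\<lambda>g.
      z (s1 (g \<otimes>\<^bsub>xG E\<^esub> inv\<^bsub>xG E\<^esub> (s0 (xpi E g))), s0 (xpi E g), \<one>\<^bsub>xG E\<^esub>)) (carrier (xG E))"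

definition std :: "('p,'k,'g,'m) cmext \<Rightarrow> 'a monoid \<Rightarrow> ('p \<Rightarrow> 'a \<Rightarrow> 'a) \<Rightarrow> ('g \<Rightarrow> 'm) \<Rightarrow> ('p \<Rightarrow> 'g)
     \<Rightarrow> ('m \<times> 'g \<times> 'g \<Rightarrow> 'a) \<Rightarrow> ('m \<times> 'g \<times> 'g \<Rightarrow> 'a)" where
  "std E A aA s1 s0 z = restrict (\<lambda>x. z x \<otimes>\<^bsub>A\<^esub> inv\<^bsub>A\<^esub> (d1 E A aA (sigma_std E s1 s0 z) x)) (dom2 E)"

definition Z2st :: "('p,'k,'g,'m) cmext \<Rightarrow> 'a monoid \<Rightarrow> ('p \<Rightarrow> 'a \<Rightarrow> 'a) \<Rightarrow> ('g \<Rightarrow> 'm) \<Rightarrow> ('p \<Rightarrow> 'g)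
     \<Rightarrow> ('m \<times> 'g \<times> 'g \<Rightarrow> 'a) set" where
  "Z2st E A aA s1 s0 = {z \<in> Z2 E A aA \<inter> C2pt E A. std E A aA s1 s0 z = z}"

definition B2st :: "('p,'k,'g,'m) cmext \<Rightarrow> 'a monoid \<Rightarrow> ('p \<Rightarrow> 'a \<Rightarrow> 'a) \<Rightarrow> ('g \<Rightarrow> 'm) \<Rightarrow> ('p \<Rightarrow> 'g)
     \<Rightarrow> ('m \<times> 'g \<times> 'g \<Rightarrow> 'a) set" where
  "B2st E A aA s1 s0 = {b \<in> B2 E A aA \<inter> C2pt E A. std E A aA s1 s0 b = b}"

definition Z2st_grp where
  "Z2st_grp E A aA s1 s0 = (C2grp E A)\<lparr>carrier := Z2st E A aA s1 s0\<rparr>"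

definition B2st_grp where
  "B2st_grp E A aA s1 s0 = (C2grp E A)\<lparr>carrier := B2st E A aA s1 s0\<rparr>"

definition H2st_grp where
  "H2st_grp E A aA s1 s0 = Z2st_grp E A aA s1 s0 Mod B2st E A aA s1 s0"

definition pullback2 :: "('p,'k,'g,'m) cmext \<Rightarrow> ('g \<Rightarrow> 'g2) \<Rightarrow> ('m \<Rightarrow> 'm2)
     \<Rightarrow> ('m2 \<times> 'g2 \<times> 'g2 \<Rightarrow> 'a) \<Rightarrow> ('m \<times> 'g \<times> 'g \<Rightarrow> 'a)" where
  "pullback2 E phi0 phi1 z = restrict (\<lambda>(m,h,g). z (phi1 m, phi0 h, phi0 g)) (dom2 E)"

end

theory Submission
  imports Defs
begin

(*
  Fix a crossed module extension E of P with K and a section system (s1, s0).  Every h in G_E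
  has the normal form h = mu(ncomp h) s0(pi h).  From it we extract two K-valued invariants of
  the extension, kappa(m, h) (the failure of ncomp to be multiplicative) and lam(h, g), and show
  that standard 2-cocycles with values in the P-module A are classified by "standard data": a
  P-equivariant homomorphism f : K -> A together with a normalized function b : P x P -> A,
  through the explicit formula
      z(m, h, g) = f(kappa(m, h)) + b(pi h, pi g) - f(lam(h, g)),
  where f(k) = z(iota k, 1, 1) and b(x, y) = z(1, s0 x, s0 y).  The cocycle condition of this
  formula reduces, by translation invariance of the relevant K-valued expressions, to a condition
  on sections only, which involves E only through the data f and b.

  An extension equivalence (phi0, phi1) compatible with the sections commutes with ncomp, kappa
  and lam.  Hence the pullback of the standard cocycle of a datum on E' is the standard cocycle
  of the same datum on E, which makes the pullback a bijection on standard cocycles.  Standard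
  coboundaries are coboundaries of 1-cochains factoring through pi, which transports in the same
  way; the statement on H^2_st then follows from a general lemma on quotients.
*)

lemma hom_inv_general:
  assumes "h \<in> hom G H" "group G" "group H" "x \<in> carrier G"
  shows "h (inv\<^bsub>G\<^esub> x) = inv\<^bsub>H\<^esub> (h x)"
  using assms group_hom.hom_inv[of G H h x] by (simp add: group_hom_def group_hom_axioms_def)

lemma (in group) cancel_l1: "x \<in> carrier G \<Longrightarrow> y \<in> carrier G \<Longrightarrow> inv x \<otimes> (x \<otimes> y) = y"
  by (simp add: m_assoc[symmetric])

lemma (in group) cancel_l2: "x \<in> carrier G \<Longrightarrow> y \<in> carrier G \<Longrightarrow> x \<otimes> (inv x \<otimes> y) = y"
  by (simp add: m_assoc[symmetric])

text \<open>Relations of the form \<open>a d = b c\<close> compose like equalities of fractions \<open>a/b = c/d\<close>.\<close>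
lemma (in comm_group) rel_trans:
  assumes "a \<in> carrier G" "b \<in> carrier G" "c \<in> carrier G" "d \<in> carrier G" "e \<in> carrier G" "f \<in> carrier G"
    and "a \<otimes> d = b \<otimes> c" "c \<otimes> f = d \<otimes> e"
  shows "a \<otimes> f = b \<otimes> e"
proof -
  have "(c \<otimes> d) \<otimes> (a \<otimes> f) = (a \<otimes> d) \<otimes> (c \<otimes> f)" using assms(1-6) by (simp add: m_ac)
  also have "\<dots> = (b \<otimes> c) \<otimes> (d \<otimes> e)" by (simp only: assms(7,8))
  also have "\<dots> = (c \<otimes> d) \<otimes> (b \<otimes> e)" using assms(1-6) by (simp add: m_ac)
  finally have Z: "(c \<otimes> d) \<otimes> (a \<otimes> f) = (c \<otimes> d) \<otimes> (b \<otimes> e)" .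
  show ?thesis by (rule l_cancel[OF Z]) (use assms in simp_all)
qed

lemma (in comm_group) frac_eq:
  assumes "p \<in> carrier G" "q \<in> carrier G" "r \<in> carrier G" "s \<in> carrier G"
  shows "p \<otimes> inv q = r \<otimes> inv s \<longleftrightarrow> p \<otimes> s = r \<otimes> q"
proof -
  have "p \<otimes> inv q = r \<otimes> inv s \<longleftrightarrow> p = r \<otimes> inv s \<otimes> q"
    using assms inv_solve_right'[of "r \<otimes> inv s" p q] by auto
  also have "r \<otimes> inv s \<otimes> q = r \<otimes> q \<otimes> inv s" using assms by (simp add: m_ac)
  also have "p = r \<otimes> q \<otimes> inv s \<longleftrightarrow> r \<otimes> q = p \<otimes> s"
    using assms inv_solve_right[of p "r \<otimes> q" s] by auto
  finally show ?thesis by auto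
qed

lemma (in comm_group) alternating_four_eq_one:
  assumes "a \<in> carrier G" "b \<in> carrier G" "c \<in> carrier G" "d \<in> carrier G"
  shows "a \<otimes> inv b \<otimes> c \<otimes> inv d = \<one> \<longleftrightarrow> a \<otimes> c = b \<otimes> d"
proof -
  have "a \<otimes> inv b \<otimes> c \<otimes> inv d = (a \<otimes> c) \<otimes> inv (b \<otimes> d)" using assms by (simp add: m_ac inv_mult)
  also have "\<dots> = \<one> \<longleftrightarrow> a \<otimes> c = \<one> \<otimes> (b \<otimes> d)"
    using assms inv_solve_right'[of "\<one>" "a \<otimes> c" "b \<otimes> d"] by simp
  finally show ?thesis using assms by simp
qed

lemma (in comm_group) swap_inv:
  assumes "u \<in> carrier G" "v \<in> carrier G" "w \<in> carrier G" "t \<in> carrier G" and e: "u \<otimes> v = w \<otimes> t"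
  shows "inv u \<otimes> w = inv t \<otimes> v"
proof -
  have "inv u \<otimes> w = inv u \<otimes> w \<otimes> (t \<otimes> inv t)" using assms(1-4) by simp
  also have "\<dots> = inv u \<otimes> (w \<otimes> t) \<otimes> inv t" using assms(1-4) by (simp add: m_assoc)
  also have "\<dots> = inv u \<otimes> (u \<otimes> v) \<otimes> inv t" using e by simp
  also have "\<dots> = inv t \<otimes> v" using assms(1-4) by (simp add: m_comm m_assoc[symmetric] cancel_l1)
  finally show ?thesis .
qed

lemma image_r_coset:
  assumes "h \<in> hom G G'" "H \<subseteq> carrier G" "a \<in> carrier G"
  shows "h ` (H #>\<^bsub>G\<^esub> a) = h ` H #>\<^bsub>G'\<^esub> h a"
proof -
  have "h ` (H #>\<^bsub>G\<^esub> a) = (\<lambda>x. h (x \<otimes>\<^bsub>G\<^esub> a)) ` H" unfolding r_coset_def by auto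
  also have "\<dots> = (\<lambda>x. h x \<otimes>\<^bsub>G'\<^esub> h a) ` H"
    using assms hom_mult[OF assms(1)] by (intro image_cong) auto
  also have "\<dots> = h ` H #>\<^bsub>G'\<^esub> h a" unfolding r_coset_def by auto
  finally show ?thesis .
qed

lemma iso_image_Mod:
  assumes hh: "h \<in> hom G G'" and bj: "bij_betw h (carrier G) (carrier G')"
    and HG: "H \<subseteq> carrier G" and HH: "h ` H = H'"
    and mc: "\<And>x y. x \<in> carrier G \<Longrightarrow> y \<in> carrier G \<Longrightarrow> x \<otimes>\<^bsub>G\<^esub> y \<in> carrier G"
  shows "(\<lambda>S. h ` S) \<in> iso (G Mod H) (G' Mod H')"
proof -
  have hc: "\<And>x. x \<in> carrier G \<Longrightarrow> h x \<in> carrier G'" using hom_in_carrier[OF hh] by blast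
  have hm: "\<And>x y. x \<in> carrier G \<Longrightarrow> y \<in> carrier G \<Longrightarrow> h (x \<otimes>\<^bsub>G\<^esub> y) = h x \<otimes>\<^bsub>G'\<^esub> h y"
    using hom_mult[OF hh] by blast
  have img: "\<And>a. a \<in> carrier G \<Longrightarrow> h ` (H #>\<^bsub>G\<^esub> a) = H' #>\<^bsub>G'\<^esub> h a"
    using image_r_coset[OF hh HG] HH by simp
  have sub: "\<And>S. S \<in> rcosets\<^bsub>G\<^esub> H \<Longrightarrow> S \<subseteq> carrier G"
    unfolding RCOSETS_def r_coset_def using HG mc by auto
  show ?thesis
  proof (rule isoI)
    show "(\<lambda>S. h ` S) \<in> hom (G Mod H) (G' Mod H')"
    proof (rule homI)
      fix S assume "S \<in> carrier (G Mod H)"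
      then obtain a where a: "a \<in> carrier G" "S = H #>\<^bsub>G\<^esub> a" unfolding FactGroup_def RCOSETS_def by auto
      show "h ` S \<in> carrier (G' Mod H')" unfolding FactGroup_def RCOSETS_def using a img hc by auto
    next
      fix S T assume S: "S \<in> carrier (G Mod H)" and T: "T \<in> carrier (G Mod H)"
      have ST: "S \<subseteq> carrier G" "T \<subseteq> carrier G" using S T sub unfolding FactGroup_def by auto
      have "h ` (\<Union>s\<in>S. \<Union>t\<in>T. {s \<otimes>\<^bsub>G\<^esub> t}) = (\<Union>s\<in>S. \<Union>t\<in>T. {h (s \<otimes>\<^bsub>G\<^esub> t)})" by auto
      also have "\<dots> = (\<Union>s\<in>S. \<Union>t\<in>T. {h s \<otimes>\<^bsub>G'\<^esub> h t})" using ST hm by (intro SUP_cong refl) auto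
      also have "\<dots> = (\<Union>s\<in>h ` S. \<Union>t\<in>h ` T. {s \<otimes>\<^bsub>G'\<^esub> t})" by blast
      finally show "h ` (S \<otimes>\<^bsub>G Mod H\<^esub> T) = h ` S \<otimes>\<^bsub>G' Mod H'\<^esub> h ` T"
        unfolding FactGroup_def set_mult_def by simp
    qed
  next
    have inj: "inj_on h (carrier G)" using bj bij_betw_def by blast
    show "bij_betw (\<lambda>S. h ` S) (carrier (G Mod H)) (carrier (G' Mod H'))"
    proof (rule bij_betwI')
      fix S T assume "S \<in> carrier (G Mod H)" "T \<in> carrier (G Mod H)"
      then have "S \<subseteq> carrier G" "T \<subseteq> carrier G" using sub unfolding FactGroup_def by auto
      then show "(h ` S = h ` T) = (S = T)" using inj_on_image_eq_iff[OF inj] by blast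
    next
      fix S assume "S \<in> carrier (G Mod H)"
      then obtain a where a: "a \<in> carrier G" "S = H #>\<^bsub>G\<^esub> a" unfolding FactGroup_def RCOSETS_def by auto
      show "h ` S \<in> carrier (G' Mod H')" unfolding FactGroup_def RCOSETS_def using a img hc by auto
    next
      fix T assume "T \<in> carrier (G' Mod H')"
      then obtain b where b: "b \<in> carrier G'" "T = H' #>\<^bsub>G'\<^esub> b" unfolding FactGroup_def RCOSETS_def by auto
      then obtain a where a: "a \<in> carrier G" "b = h a" using bj unfolding bij_betw_def by auto
      show "\<exists>S \<in> carrier (G Mod H). T = h ` S"
        using a b img unfolding FactGroup_def RCOSETS_def by auto
    qed
  qed
qed

section \<open>A crossed module extension with a section system\<close>

locale sectioned_ext =
  fixes P :: "'p monoid" and K :: "'k monoid" and aK :: "'p \<Rightarrow> 'k \<Rightarrow> 'k"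
    and E :: "('p,'k,'g,'m) cmext" and s1 :: "'g \<Rightarrow> 'm" and s0 :: "'p \<Rightarrow> 'g"
  assumes ext: "crossed_ext P K aK E" and sec: "section_system P E s1 s0"
begin

abbreviation "G \<equiv> xG E"
abbreviation "M \<equiv> xM E"
abbreviation "act \<equiv> xact E"
abbreviation "mu \<equiv> xmu E"
abbreviation "iota \<equiv> xiota E"
abbreviation "proj \<equiv> xpi E"

lemma grpP: "group P" using ext unfolding crossed_ext_def abelian_module_def by auto
lemma cK: "comm_group K" using ext unfolding crossed_ext_def abelian_module_def by auto
lemma grpG: "group G" using ext unfolding crossed_ext_def crossed_module_def by auto
lemma grpM: "group M" using ext unfolding crossed_ext_def crossed_module_def by auto

sublocale gP: group P by (rule grpP)
sublocale gK: comm_group K by (rule cK)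
sublocale gG: group G by (rule grpG)
sublocale gM: group M by (rule grpM)

lemma aK_hom: "x \<in> carrier P \<Longrightarrow> aK x \<in> hom K K"
  using ext unfolding crossed_ext_def abelian_module_def group_action_on_def by auto
lemma aK_closed: "x \<in> carrier P \<Longrightarrow> k \<in> carrier K \<Longrightarrow> aK x k \<in> carrier K"
  using hom_in_carrier[OF aK_hom] by blast
lemma aK_comp: "x \<in> carrier P \<Longrightarrow> y \<in> carrier P \<Longrightarrow> k \<in> carrier K \<Longrightarrow> aK x (aK y k) = aK (x \<otimes>\<^bsub>P\<^esub> y) k"
  using ext unfolding crossed_ext_def abelian_module_def group_action_on_def by auto
lemma aK_mult: "x \<in> carrier P \<Longrightarrow> k \<in> carrier K \<Longrightarrow> l \<in> carrier K \<Longrightarrow> aK x (k \<otimes>\<^bsub>K\<^esub> l) = aK x k \<otimes>\<^bsub>K\<^esub> aK x l"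
  using hom_mult[OF aK_hom] by blast

lemma act_hom: "g \<in> carrier G \<Longrightarrow> act g \<in> hom M M"
  using ext unfolding crossed_ext_def crossed_module_def group_action_on_def by auto
lemma act_one: "m \<in> carrier M \<Longrightarrow> act \<one>\<^bsub>G\<^esub> m = m"
  using ext unfolding crossed_ext_def crossed_module_def group_action_on_def by auto
lemma act_comp: "g \<in> carrier G \<Longrightarrow> h \<in> carrier G \<Longrightarrow> m \<in> carrier M \<Longrightarrow> act (g \<otimes>\<^bsub>G\<^esub> h) m = act g (act h m)"
  using ext unfolding crossed_ext_def crossed_module_def group_action_on_def by auto
lemma act_closed[simp]: "g \<in> carrier G \<Longrightarrow> m \<in> carrier M \<Longrightarrow> act g m \<in> carrier M"
  using hom_in_carrier[OF act_hom] by blast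
lemma act_mult: "g \<in> carrier G \<Longrightarrow> m \<in> carrier M \<Longrightarrow> n \<in> carrier M \<Longrightarrow> act g (m \<otimes>\<^bsub>M\<^esub> n) = act g m \<otimes>\<^bsub>M\<^esub> act g n"
  using hom_mult[OF act_hom] by blast
lemma act_1: "g \<in> carrier G \<Longrightarrow> act g \<one>\<^bsub>M\<^esub> = \<one>\<^bsub>M\<^esub>"
  using hom_one[OF act_hom grpM grpM] by blast
lemma mu_hom: "mu \<in> hom M G"
  using ext unfolding crossed_ext_def crossed_module_def by auto
lemma mu_closed[simp]: "m \<in> carrier M \<Longrightarrow> mu m \<in> carrier G"
  using hom_in_carrier[OF mu_hom] by blast
lemma mu_mult: "m \<in> carrier M \<Longrightarrow> n \<in> carrier M \<Longrightarrow> mu (m \<otimes>\<^bsub>M\<^esub> n) = mu m \<otimes>\<^bsub>G\<^esub> mu n"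
  using hom_mult[OF mu_hom] by blast
lemma mu_one[simp]: "mu \<one>\<^bsub>M\<^esub> = \<one>\<^bsub>G\<^esub>"
  using hom_one[OF mu_hom grpM grpG] .
lemma mu_inv: "m \<in> carrier M \<Longrightarrow> mu (inv\<^bsub>M\<^esub> m) = inv\<^bsub>G\<^esub> (mu m)"
  using hom_inv_general[OF mu_hom grpM grpG] .
lemma mu_act: "g \<in> carrier G \<Longrightarrow> m \<in> carrier M \<Longrightarrow> mu (act g m) = g \<otimes>\<^bsub>G\<^esub> mu m \<otimes>\<^bsub>G\<^esub> inv\<^bsub>G\<^esub> g"
  using ext unfolding crossed_ext_def crossed_module_def by auto
lemma act_mu: "n \<in> carrier M \<Longrightarrow> m \<in> carrier M \<Longrightarrow> act (mu n) m = n \<otimes>\<^bsub>M\<^esub> m \<otimes>\<^bsub>M\<^esub> inv\<^bsub>M\<^esub> n"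
  using ext unfolding crossed_ext_def crossed_module_def by auto

lemma iota_hom: "iota \<in> hom K M" using ext unfolding crossed_ext_def by auto
lemma iota_inj: "inj_on iota (carrier K)" using ext unfolding crossed_ext_def by auto
lemma iota_closed[simp]: "k \<in> carrier K \<Longrightarrow> iota k \<in> carrier M" using hom_in_carrier[OF iota_hom] by blast
lemma iota_mult: "k \<in> carrier K \<Longrightarrow> l \<in> carrier K \<Longrightarrow> iota (k \<otimes>\<^bsub>K\<^esub> l) = iota k \<otimes>\<^bsub>M\<^esub> iota l"
  using hom_mult[OF iota_hom] by blast
lemma iota_img: "iota ` carrier K = kernel M G mu" using ext unfolding crossed_ext_def by auto
lemma proj_hom: "proj \<in> hom G P" using ext unfolding crossed_ext_def by auto
lemma proj_closed[simp]: "g \<in> carrier G \<Longrightarrow> proj g \<in> carrier P" using hom_in_carrier[OF proj_hom] by blast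
lemma proj_mult: "g \<in> carrier G \<Longrightarrow> h \<in> carrier G \<Longrightarrow> proj (g \<otimes>\<^bsub>G\<^esub> h) = proj g \<otimes>\<^bsub>P\<^esub> proj h"
  using hom_mult[OF proj_hom] by blast
lemma proj_one[simp]: "proj \<one>\<^bsub>G\<^esub> = \<one>\<^bsub>P\<^esub>"
  using hom_one[OF proj_hom grpG grpP] .
lemma proj_inv: "g \<in> carrier G \<Longrightarrow> proj (inv\<^bsub>G\<^esub> g) = inv\<^bsub>P\<^esub> (proj g)"
  using hom_inv_general[OF proj_hom grpG grpP] .
lemma mu_img: "mu ` carrier M = kernel G P proj" using ext unfolding crossed_ext_def by auto
lemma act_iota: "g \<in> carrier G \<Longrightarrow> k \<in> carrier K \<Longrightarrow> act g (iota k) = iota (aK (proj g) k)"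
  using ext unfolding crossed_ext_def by auto

lemma s0_closed[simp]: "x \<in> carrier P \<Longrightarrow> s0 x \<in> carrier G" using sec unfolding section_system_def by auto
lemma s0_one[simp]: "s0 \<one>\<^bsub>P\<^esub> = \<one>\<^bsub>G\<^esub>" using sec unfolding section_system_def by auto
lemma proj_s0[simp]: "x \<in> carrier P \<Longrightarrow> proj (s0 x) = x" using sec unfolding section_system_def by auto
lemma s1_closed: "g \<in> mu ` carrier M \<Longrightarrow> s1 g \<in> carrier M" using sec unfolding section_system_def by auto
lemma s1_one[simp]: "s1 \<one>\<^bsub>G\<^esub> = \<one>\<^bsub>M\<^esub>" using sec unfolding section_system_def by auto
lemma mu_s1: "g \<in> mu ` carrier M \<Longrightarrow> mu (s1 g) = g" using sec unfolding section_system_def by auto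

lemma proj_mu[simp]: "m \<in> carrier M \<Longrightarrow> proj (mu m) = \<one>\<^bsub>P\<^esub>"
  using mu_img unfolding kernel_def by auto
lemma in_mu_img: "g \<in> carrier G \<Longrightarrow> proj g = \<one>\<^bsub>P\<^esub> \<Longrightarrow> g \<in> mu ` carrier M"
  using mu_img unfolding kernel_def by auto
lemma mu_iota[simp]: "k \<in> carrier K \<Longrightarrow> mu (iota k) = \<one>\<^bsub>G\<^esub>"
  using iota_img unfolding kernel_def by auto
lemma in_iota_img: "u \<in> carrier M \<Longrightarrow> mu u = \<one>\<^bsub>G\<^esub> \<Longrightarrow> u \<in> iota ` carrier K"
  using iota_img unfolding kernel_def by auto

lemma proj_mu_mult[simp]: "m \<in> carrier M \<Longrightarrow> h \<in> carrier G \<Longrightarrow> proj (mu m \<otimes>\<^bsub>G\<^esub> h) = proj h"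
  by (simp add: proj_mult)

text \<open>The kernel of \<open>mu\<close> is central in \<open>M\<close> (Peiffer identity).\<close>
lemma central: "u \<in> carrier M \<Longrightarrow> mu u = \<one>\<^bsub>G\<^esub> \<Longrightarrow> m \<in> carrier M \<Longrightarrow> u \<otimes>\<^bsub>M\<^esub> m = m \<otimes>\<^bsub>M\<^esub> u"
proof -
  assume u: "u \<in> carrier M" "mu u = \<one>\<^bsub>G\<^esub>" and m: "m \<in> carrier M"
  have "m = u \<otimes>\<^bsub>M\<^esub> m \<otimes>\<^bsub>M\<^esub> inv\<^bsub>M\<^esub> u" using act_mu[OF u(1) m] u act_one[OF m] by simp
  then have "m \<otimes>\<^bsub>M\<^esub> u = u \<otimes>\<^bsub>M\<^esub> m \<otimes>\<^bsub>M\<^esub> inv\<^bsub>M\<^esub> u \<otimes>\<^bsub>M\<^esub> u" by simp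
  also have "\<dots> = u \<otimes>\<^bsub>M\<^esub> m" using u m by (simp add: gM.m_assoc)
  finally show ?thesis by simp
qed

lemma act_central: "g \<in> carrier G \<Longrightarrow> u \<in> carrier M \<Longrightarrow> mu u = \<one>\<^bsub>G\<^esub> \<Longrightarrow> mu (act g u) = \<one>\<^bsub>G\<^esub>"
  by (simp add: mu_act)

subsection \<open>Normal form with respect to the sections\<close>

text \<open>Every \<open>h\<close> factors as \<open>mu (ncomp h) \<otimes> s0 (proj h)\<close>, with \<open>ncomp h\<close> chosen by \<open>s1\<close>.\<close>
definition ncomp :: "'g \<Rightarrow> 'm" where "ncomp h = s1 (h \<otimes>\<^bsub>G\<^esub> inv\<^bsub>G\<^esub> s0 (proj h))"

lemma ncomp_arg: "h \<in> carrier G \<Longrightarrow> h \<otimes>\<^bsub>G\<^esub> inv\<^bsub>G\<^esub> s0 (proj h) \<in> mu ` carrier M"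
  by (rule in_mu_img) (auto simp: proj_mult proj_inv)
lemma ncomp_closed[simp]: "h \<in> carrier G \<Longrightarrow> ncomp h \<in> carrier M"
  unfolding ncomp_def by (rule s1_closed[OF ncomp_arg])
lemma mu_ncomp: "h \<in> carrier G \<Longrightarrow> mu (ncomp h) = h \<otimes>\<^bsub>G\<^esub> inv\<^bsub>G\<^esub> s0 (proj h)"
  unfolding ncomp_def by (rule mu_s1[OF ncomp_arg])
lemma normal_form: "h \<in> carrier G \<Longrightarrow> mu (ncomp h) \<otimes>\<^bsub>G\<^esub> s0 (proj h) = h"
  by (simp add: mu_ncomp gG.m_assoc)
lemma ncomp_s0[simp]: "x \<in> carrier P \<Longrightarrow> ncomp (s0 x) = \<one>\<^bsub>M\<^esub>"
  unfolding ncomp_def by simp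
lemma ncomp_one[simp]: "ncomp \<one>\<^bsub>G\<^esub> = \<one>\<^bsub>M\<^esub>"
  unfolding ncomp_def by simp
lemma ncomp_s1: "y \<in> mu ` carrier M \<Longrightarrow> x \<in> carrier P \<Longrightarrow> ncomp (y \<otimes>\<^bsub>G\<^esub> s0 x) = s1 y"
proof -
  assume y: "y \<in> mu ` carrier M" and x: "x \<in> carrier P"
  then obtain m where m: "m \<in> carrier M" "y = mu m" by auto
  have "proj (y \<otimes>\<^bsub>G\<^esub> s0 x) = x" using m x by simp
  then show ?thesis unfolding ncomp_def using m x by (simp add: gG.m_assoc)
qed

definition iota_inv :: "'m \<Rightarrow> 'k" where "iota_inv u = the_inv_into (carrier K) iota u"

lemma iota_inv_iota[simp]: "k \<in> carrier K \<Longrightarrow> iota_inv (iota k) = k"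
  unfolding iota_inv_def by (rule the_inv_into_f_f[OF iota_inj])
lemma iota_iota_inv: "u \<in> carrier M \<Longrightarrow> mu u = \<one>\<^bsub>G\<^esub> \<Longrightarrow> iota (iota_inv u) = u"
  unfolding iota_inv_def by (rule f_the_inv_into_f[OF iota_inj in_iota_img])
lemma iota_inv_closed: "u \<in> carrier M \<Longrightarrow> mu u = \<one>\<^bsub>G\<^esub> \<Longrightarrow> iota_inv u \<in> carrier K"
  unfolding iota_inv_def by (rule the_inv_into_into[OF iota_inj in_iota_img]) simp_all
lemma iota_inv_mult: "u \<in> carrier M \<Longrightarrow> mu u = \<one>\<^bsub>G\<^esub> \<Longrightarrow> v \<in> carrier M \<Longrightarrow> mu v = \<one>\<^bsub>G\<^esub>
   \<Longrightarrow> iota_inv (u \<otimes>\<^bsub>M\<^esub> v) = iota_inv u \<otimes>\<^bsub>K\<^esub> iota_inv v"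
proof -
  assume u: "u \<in> carrier M" "mu u = \<one>\<^bsub>G\<^esub>" and v: "v \<in> carrier M" "mu v = \<one>\<^bsub>G\<^esub>"
  have "iota (iota_inv u \<otimes>\<^bsub>K\<^esub> iota_inv v) = u \<otimes>\<^bsub>M\<^esub> v"
    using iota_mult[OF iota_inv_closed[OF u] iota_inv_closed[OF v]] iota_iota_inv[OF u] iota_iota_inv[OF v] by simp
  then have "iota_inv (u \<otimes>\<^bsub>M\<^esub> v) = iota_inv (iota (iota_inv u \<otimes>\<^bsub>K\<^esub> iota_inv v))" by simp
  also have "\<dots> = iota_inv u \<otimes>\<^bsub>K\<^esub> iota_inv v" using iota_inv_closed[OF u] iota_inv_closed[OF v] by (simp only: iota_inv_iota gK.m_closed)
  finally show ?thesis .
qed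
lemma iota_inv_one[simp]: "iota_inv \<one>\<^bsub>M\<^esub> = \<one>\<^bsub>K\<^esub>"
  using iota_inv_iota[of "\<one>\<^bsub>K\<^esub>"] hom_one[OF iota_hom gK.is_group grpM] by simp
lemma iota_inv_act: "g \<in> carrier G \<Longrightarrow> u \<in> carrier M \<Longrightarrow> mu u = \<one>\<^bsub>G\<^esub> \<Longrightarrow> iota_inv (act g u) = aK (proj g) (iota_inv u)"
proof -
  assume g: "g \<in> carrier G" and u: "u \<in> carrier M" "mu u = \<one>\<^bsub>G\<^esub>"
  have "act g u = iota (aK (proj g) (iota_inv u))" using act_iota[OF g iota_inv_closed[OF u]] iota_iota_inv[OF u] by simp
  then have "iota_inv (act g u) = iota_inv (iota (aK (proj g) (iota_inv u)))" by simp
  then show ?thesis using g u aK_closed iota_inv_closed iota_inv_iota by simp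
qed

subsection \<open>The invariant \<open>kappa\<close>: failure of \<open>ncomp\<close> to be multiplicative\<close>

text \<open>\<open>m \<otimes> ncomp h\<close> and \<open>ncomp (mu m \<otimes> h)\<close> have the same image under \<open>mu\<close>, so they differ
  by the central element \<open>defect m h\<close>, which comes from \<open>kappa m h \<in> K\<close>.\<close>

definition defect :: "'m \<Rightarrow> 'g \<Rightarrow> 'm" where
  "defect m h = m \<otimes>\<^bsub>M\<^esub> ncomp h \<otimes>\<^bsub>M\<^esub> inv\<^bsub>M\<^esub> ncomp (mu m \<otimes>\<^bsub>G\<^esub> h)"
definition kappa :: "'m \<Rightarrow> 'g \<Rightarrow> 'k" where "kappa m h = iota_inv (defect m h)"

lemma defect_closed[simp]: "m \<in> carrier M \<Longrightarrow> h \<in> carrier G \<Longrightarrow> defect m h \<in> carrier M"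
  unfolding defect_def by simp

lemma mu_defect[simp]: "m \<in> carrier M \<Longrightarrow> h \<in> carrier G \<Longrightarrow> mu (defect m h) = \<one>\<^bsub>G\<^esub>"
  unfolding defect_def
  by (simp add: mu_mult mu_inv mu_ncomp gG.inv_mult_group gG.m_assoc gG.cancel_l1 gG.cancel_l2)

lemma defect_eq: "m \<in> carrier M \<Longrightarrow> h \<in> carrier G \<Longrightarrow> m \<otimes>\<^bsub>M\<^esub> ncomp h = defect m h \<otimes>\<^bsub>M\<^esub> ncomp (mu m \<otimes>\<^bsub>G\<^esub> h)"
  unfolding defect_def by (simp add: gM.m_assoc)

lemma kappa_closed[simp]: "m \<in> carrier M \<Longrightarrow> h \<in> carrier G \<Longrightarrow> kappa m h \<in> carrier K"
  unfolding kappa_def by (rule iota_inv_closed) simp_all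

text \<open>Multiplicativity of the defect in the first argument, using centrality of the kernel.\<close>
lemma defect_mult:
  assumes p: "p \<in> carrier M" and n: "n \<in> carrier M" and k: "k \<in> carrier G"
  shows "defect (p \<otimes>\<^bsub>M\<^esub> n) k = defect p (mu n \<otimes>\<^bsub>G\<^esub> k) \<otimes>\<^bsub>M\<^esub> defect n k"
proof -
  let ?C = "defect n k" and ?N1 = "ncomp (mu n \<otimes>\<^bsub>G\<^esub> k)" and ?N2 = "ncomp (mu (p \<otimes>\<^bsub>M\<^esub> n) \<otimes>\<^bsub>G\<^esub> k)"
  have C: "?C \<in> carrier M" "mu ?C = \<one>\<^bsub>G\<^esub>" using n k by simp_all
  have N2: "ncomp (mu p \<otimes>\<^bsub>G\<^esub> (mu n \<otimes>\<^bsub>G\<^esub> k)) = ?N2" using p n k by (simp add: mu_mult gG.m_assoc)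
  have "defect p (mu n \<otimes>\<^bsub>G\<^esub> k) \<otimes>\<^bsub>M\<^esub> ?C = p \<otimes>\<^bsub>M\<^esub> ?N1 \<otimes>\<^bsub>M\<^esub> (inv\<^bsub>M\<^esub> ?N2 \<otimes>\<^bsub>M\<^esub> ?C)"
    unfolding defect_def[of p] using p n k N2 by (simp add: gM.m_assoc)
  also have "inv\<^bsub>M\<^esub> ?N2 \<otimes>\<^bsub>M\<^esub> ?C = ?C \<otimes>\<^bsub>M\<^esub> inv\<^bsub>M\<^esub> ?N2"
    using central[OF C, of "inv\<^bsub>M\<^esub> ?N2"] p n k by simp
  also have "p \<otimes>\<^bsub>M\<^esub> ?N1 \<otimes>\<^bsub>M\<^esub> (?C \<otimes>\<^bsub>M\<^esub> inv\<^bsub>M\<^esub> ?N2) = p \<otimes>\<^bsub>M\<^esub> (?N1 \<otimes>\<^bsub>M\<^esub> ?C) \<otimes>\<^bsub>M\<^esub> inv\<^bsub>M\<^esub> ?N2"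
    using p n k by (simp add: gM.m_assoc)
  also have "?N1 \<otimes>\<^bsub>M\<^esub> ?C = ?C \<otimes>\<^bsub>M\<^esub> ?N1"
    using central[OF C, of ?N1] n k by simp
  also have "?C \<otimes>\<^bsub>M\<^esub> ?N1 = n \<otimes>\<^bsub>M\<^esub> ncomp k" using defect_eq[OF n k] by simp
  finally show ?thesis unfolding defect_def using p n k by (simp add: gM.m_assoc)
qed

lemma kappa_mult:
  assumes p: "p \<in> carrier M" and n: "n \<in> carrier M" and k: "k \<in> carrier G"
  shows "kappa (p \<otimes>\<^bsub>M\<^esub> n) k = kappa p (mu n \<otimes>\<^bsub>G\<^esub> k) \<otimes>\<^bsub>K\<^esub> kappa n k"
  unfolding kappa_def defect_mult[OF assms] using p n k by (simp add: iota_inv_mult)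

lemma defect_central: "u \<in> carrier M \<Longrightarrow> mu u = \<one>\<^bsub>G\<^esub> \<Longrightarrow> g \<in> carrier G \<Longrightarrow> defect u g = u"
  unfolding defect_def by (simp add: gM.m_assoc)

lemma kappa_central: "u \<in> carrier M \<Longrightarrow> mu u = \<one>\<^bsub>G\<^esub> \<Longrightarrow> g \<in> carrier G \<Longrightarrow> kappa u g = iota_inv u"
  unfolding kappa_def by (simp add: defect_central)

lemma kappa_one[simp]: "g \<in> carrier G \<Longrightarrow> kappa \<one>\<^bsub>M\<^esub> g = \<one>\<^bsub>K\<^esub>"
  by (simp add: kappa_central)

lemma kappa_s1: "y \<in> mu ` carrier M \<Longrightarrow> x \<in> carrier P \<Longrightarrow> kappa (s1 y) (s0 x) = \<one>\<^bsub>K\<^esub>"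
proof -
  assume y: "y \<in> mu ` carrier M" and x: "x \<in> carrier P"
  have "defect (s1 y) (s0 x) = \<one>\<^bsub>M\<^esub>" unfolding defect_def using y x
    by (simp add: mu_s1 ncomp_s1 s1_closed)
  then show ?thesis unfolding kappa_def by simp
qed

lemma kappa_ncomp_s0: "h \<in> carrier G \<Longrightarrow> kappa (ncomp h) (s0 (proj h)) = \<one>\<^bsub>K\<^esub>"
proof -
  assume h: "h \<in> carrier G"
  have "defect (ncomp h) (s0 (proj h)) = \<one>\<^bsub>M\<^esub>" unfolding defect_def using h
    by (simp add: normal_form)
  then show ?thesis unfolding kappa_def by simp
qed

subsection \<open>The invariant \<open>lam\<close> and its behaviour under \<open>mu\<close>-translation\<close>

text \<open>\<open>lam h g\<close> measures how the normal forms of \<open>h\<close> and \<open>g\<close> combine to that of \<open>h \<otimes> g\<close>;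
  it is the \<open>K\<close>-valued part of every standard cocycle on the pair \<open>(h, g)\<close>.\<close>

definition lam :: "'g \<Rightarrow> 'g \<Rightarrow> 'k" where
  "lam h g = kappa (act (s0 (proj h)) (ncomp g)) (s0 (proj h) \<otimes>\<^bsub>G\<^esub> s0 (proj g))
     \<otimes>\<^bsub>K\<^esub> kappa (ncomp h) (s0 (proj h) \<otimes>\<^bsub>G\<^esub> g)"

lemma lam_closed[simp]: "h \<in> carrier G \<Longrightarrow> g \<in> carrier G \<Longrightarrow> lam h g \<in> carrier K"
  unfolding lam_def by simp

lemma lam_one[simp]: "h \<in> carrier G \<Longrightarrow> lam h \<one>\<^bsub>G\<^esub> = \<one>\<^bsub>K\<^esub>"
  unfolding lam_def by (simp add: act_1 kappa_ncomp_s0)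

lemma lam_mu_left:
  assumes n: "n \<in> carrier M" and k: "k \<in> carrier G" and h: "h \<in> carrier G"
  shows "lam (mu n \<otimes>\<^bsub>G\<^esub> k) h \<otimes>\<^bsub>K\<^esub> kappa n k = kappa n (k \<otimes>\<^bsub>G\<^esub> h) \<otimes>\<^bsub>K\<^esub> lam k h"
proof -
  define s where "s = s0 (proj k)"
  have s: "s \<in> carrier G" unfolding s_def using k by simp
  have nk: "ncomp k \<in> carrier M" "ncomp (mu n \<otimes>\<^bsub>G\<^esub> k) \<in> carrier M" using n k by simp_all
  have e1: "mu (ncomp k) \<otimes>\<^bsub>G\<^esub> (s \<otimes>\<^bsub>G\<^esub> h) = k \<otimes>\<^bsub>G\<^esub> h"
    unfolding s_def using k h by (simp add: normal_form gG.m_assoc[symmetric])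
  have e2: "mu (ncomp (mu n \<otimes>\<^bsub>G\<^esub> k)) \<otimes>\<^bsub>G\<^esub> (s \<otimes>\<^bsub>G\<^esub> h) = mu n \<otimes>\<^bsub>G\<^esub> k \<otimes>\<^bsub>G\<^esub> h"
    unfolding s_def using n k h normal_form[of "mu n \<otimes>\<^bsub>G\<^esub> k"] by (simp add: gG.m_assoc[symmetric])
  have R1: "kappa (n \<otimes>\<^bsub>M\<^esub> ncomp k) (s \<otimes>\<^bsub>G\<^esub> h) = kappa n (k \<otimes>\<^bsub>G\<^esub> h) \<otimes>\<^bsub>K\<^esub> kappa (ncomp k) (s \<otimes>\<^bsub>G\<^esub> h)"
    using kappa_mult[OF n nk(1), of "s \<otimes>\<^bsub>G\<^esub> h"] e1 s h by simp
  have R3: "kappa (defect n k \<otimes>\<^bsub>M\<^esub> ncomp (mu n \<otimes>\<^bsub>G\<^esub> k)) (s \<otimes>\<^bsub>G\<^esub> h) = kappa n k \<otimes>\<^bsub>K\<^esub> kappa (ncomp (mu n \<otimes>\<^bsub>G\<^esub> k)) (s \<otimes>\<^bsub>G\<^esub> h)"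
    using kappa_mult[OF defect_closed[OF n k] nk(2), of "s \<otimes>\<^bsub>G\<^esub> h"] s h n k
    by (simp add: kappa_central kappa_def[symmetric])
  have star: "kappa n (k \<otimes>\<^bsub>G\<^esub> h) \<otimes>\<^bsub>K\<^esub> kappa (ncomp k) (s \<otimes>\<^bsub>G\<^esub> h) = kappa n k \<otimes>\<^bsub>K\<^esub> kappa (ncomp (mu n \<otimes>\<^bsub>G\<^esub> k)) (s \<otimes>\<^bsub>G\<^esub> h)"
    using R1 R3 defect_eq[OF n k] by simp
  define Q where "Q = kappa (act s (ncomp h)) (s \<otimes>\<^bsub>G\<^esub> s0 (proj h))"
  have Q: "Q \<in> carrier K" unfolding Q_def using s h by simp
  have L1: "lam (mu n \<otimes>\<^bsub>G\<^esub> k) h = Q \<otimes>\<^bsub>K\<^esub> kappa (ncomp (mu n \<otimes>\<^bsub>G\<^esub> k)) (s \<otimes>\<^bsub>G\<^esub> h)"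
    unfolding lam_def Q_def s_def using n k by simp
  have L2: "lam k h = Q \<otimes>\<^bsub>K\<^esub> kappa (ncomp k) (s \<otimes>\<^bsub>G\<^esub> h)"
    unfolding lam_def Q_def s_def by simp
  have "lam (mu n \<otimes>\<^bsub>G\<^esub> k) h \<otimes>\<^bsub>K\<^esub> kappa n k = Q \<otimes>\<^bsub>K\<^esub> (kappa n k \<otimes>\<^bsub>K\<^esub> kappa (ncomp (mu n \<otimes>\<^bsub>G\<^esub> k)) (s \<otimes>\<^bsub>G\<^esub> h))"
    unfolding L1 using Q n k s h by (simp add: gK.m_ac)
  also have "\<dots> = Q \<otimes>\<^bsub>K\<^esub> (kappa n (k \<otimes>\<^bsub>G\<^esub> h) \<otimes>\<^bsub>K\<^esub> kappa (ncomp k) (s \<otimes>\<^bsub>G\<^esub> h))" using star by simp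
  also have "\<dots> = kappa n (k \<otimes>\<^bsub>G\<^esub> h) \<otimes>\<^bsub>K\<^esub> lam k h"
    unfolding L2 using Q n k s h by (simp add: gK.m_ac)
  finally show ?thesis .
qed

text \<open>Conjugating the relation \<open>m \<otimes> ncomp h = defect m h \<otimes> ncomp (mu m \<otimes> h)\<close> by an arbitrary
  \<open>s\<close> and applying \<open>kappa\<close>.\<close>
lemma kappa_act_relation:
  assumes m: "m \<in> carrier M" and s: "s \<in> carrier G" and h: "h \<in> carrier G"
  defines "t \<equiv> s0 (proj h)"
  shows "kappa (act s m) (s \<otimes>\<^bsub>G\<^esub> h) \<otimes>\<^bsub>K\<^esub> kappa (act s (ncomp h)) (s \<otimes>\<^bsub>G\<^esub> t)
       = aK (proj s) (kappa m h) \<otimes>\<^bsub>K\<^esub> kappa (act s (ncomp (mu m \<otimes>\<^bsub>G\<^esub> h))) (s \<otimes>\<^bsub>G\<^esub> t)"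
proof -
  have t: "t \<in> carrier G" unfolding t_def using h by simp
  have mh: "mu m \<otimes>\<^bsub>G\<^esub> h \<in> carrier G" using m h by simp
  have a: "act s m \<otimes>\<^bsub>M\<^esub> act s (ncomp h) = act s (defect m h) \<otimes>\<^bsub>M\<^esub> act s (ncomp (mu m \<otimes>\<^bsub>G\<^esub> h))"
    using defect_eq[OF m h] s m h by (simp add: act_mult[symmetric])
  have g1: "mu (act s (ncomp h)) \<otimes>\<^bsub>G\<^esub> (s \<otimes>\<^bsub>G\<^esub> t) = s \<otimes>\<^bsub>G\<^esub> h"
    using s h normal_form[OF h] unfolding t_def by (simp add: mu_act gG.m_assoc gG.cancel_l1)
  have g2: "mu (act s (ncomp (mu m \<otimes>\<^bsub>G\<^esub> h))) \<otimes>\<^bsub>G\<^esub> (s \<otimes>\<^bsub>G\<^esub> t) \<in> carrier G" using s t mh by simp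
  have cen: "mu (act s (defect m h)) = \<one>\<^bsub>G\<^esub>" using s m h by (simp add: act_central)
  have "kappa (act s m \<otimes>\<^bsub>M\<^esub> act s (ncomp h)) (s \<otimes>\<^bsub>G\<^esub> t)
      = kappa (act s m) (s \<otimes>\<^bsub>G\<^esub> h) \<otimes>\<^bsub>K\<^esub> kappa (act s (ncomp h)) (s \<otimes>\<^bsub>G\<^esub> t)"
    using kappa_mult[of "act s m" "act s (ncomp h)" "s \<otimes>\<^bsub>G\<^esub> t"] g1 s t m h by simp
  moreover have "kappa (act s (defect m h)) (mu (act s (ncomp (mu m \<otimes>\<^bsub>G\<^esub> h))) \<otimes>\<^bsub>G\<^esub> (s \<otimes>\<^bsub>G\<^esub> t))
      = aK (proj s) (kappa m h)"
    using kappa_central[OF _ cen g2] iota_inv_act[of s "defect m h"] s m h unfolding kappa_def by simp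
  then have "kappa (act s (defect m h) \<otimes>\<^bsub>M\<^esub> act s (ncomp (mu m \<otimes>\<^bsub>G\<^esub> h))) (s \<otimes>\<^bsub>G\<^esub> t)
      = aK (proj s) (kappa m h) \<otimes>\<^bsub>K\<^esub> kappa (act s (ncomp (mu m \<otimes>\<^bsub>G\<^esub> h))) (s \<otimes>\<^bsub>G\<^esub> t)"
    using kappa_mult[of "act s (defect m h)" "act s (ncomp (mu m \<otimes>\<^bsub>G\<^esub> h))" "s \<otimes>\<^bsub>G\<^esub> t"] s t m h mh
    by simp
  ultimately show ?thesis using a by simp
qed

text \<open>Moving the action of \<open>k\<close> past its normal-form component \<open>ncomp k\<close>.\<close>
lemma kappa_ncomp_act_relation:
  assumes m: "m \<in> carrier M" and k: "k \<in> carrier G" and h: "h \<in> carrier G"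
  defines "s \<equiv> s0 (proj k)"
  shows "kappa (ncomp k) (s \<otimes>\<^bsub>G\<^esub> (mu m \<otimes>\<^bsub>G\<^esub> h)) \<otimes>\<^bsub>K\<^esub> kappa (act s m) (s \<otimes>\<^bsub>G\<^esub> h)
       = kappa (act k m) (k \<otimes>\<^bsub>G\<^esub> h) \<otimes>\<^bsub>K\<^esub> kappa (ncomp k) (s \<otimes>\<^bsub>G\<^esub> h)"
proof -
  have s: "s \<in> carrier G" unfolding s_def using k by simp
  have swap: "act k m \<otimes>\<^bsub>M\<^esub> ncomp k = ncomp k \<otimes>\<^bsub>M\<^esub> act s m"
  proof -
    have "act k m = act (mu (ncomp k) \<otimes>\<^bsub>G\<^esub> s) m" unfolding s_def using normal_form[OF k] by simp
    also have "\<dots> = ncomp k \<otimes>\<^bsub>M\<^esub> act s m \<otimes>\<^bsub>M\<^esub> inv\<^bsub>M\<^esub> ncomp k" using k s m by (simp add: act_comp act_mu)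
    finally show ?thesis using k s m by (simp add: gM.m_assoc)
  qed
  have "mu (act s m) \<otimes>\<^bsub>G\<^esub> (s \<otimes>\<^bsub>G\<^esub> h) = s \<otimes>\<^bsub>G\<^esub> (mu m \<otimes>\<^bsub>G\<^esub> h)"
    using s m h by (simp add: mu_act gG.m_assoc gG.cancel_l1)
  then have "kappa (ncomp k \<otimes>\<^bsub>M\<^esub> act s m) (s \<otimes>\<^bsub>G\<^esub> h)
      = kappa (ncomp k) (s \<otimes>\<^bsub>G\<^esub> (mu m \<otimes>\<^bsub>G\<^esub> h)) \<otimes>\<^bsub>K\<^esub> kappa (act s m) (s \<otimes>\<^bsub>G\<^esub> h)"
    using kappa_mult[of "ncomp k" "act s m" "s \<otimes>\<^bsub>G\<^esub> h"] s m h k by simp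
  moreover have "mu (ncomp k) \<otimes>\<^bsub>G\<^esub> (s \<otimes>\<^bsub>G\<^esub> h) = k \<otimes>\<^bsub>G\<^esub> h"
    unfolding s_def using k h by (simp add: normal_form gG.m_assoc[symmetric])
  then have "kappa (act k m \<otimes>\<^bsub>M\<^esub> ncomp k) (s \<otimes>\<^bsub>G\<^esub> h)
      = kappa (act k m) (k \<otimes>\<^bsub>G\<^esub> h) \<otimes>\<^bsub>K\<^esub> kappa (ncomp k) (s \<otimes>\<^bsub>G\<^esub> h)"
    using kappa_mult[of "act k m" "ncomp k" "s \<otimes>\<^bsub>G\<^esub> h"] s m h k by simp
  ultimately show ?thesis using swap by simp
qed

lemma lam_mu_right:
  assumes m: "m \<in> carrier M" and k: "k \<in> carrier G" and h: "h \<in> carrier G"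
  shows "lam k (mu m \<otimes>\<^bsub>G\<^esub> h) \<otimes>\<^bsub>K\<^esub> aK (proj k) (kappa m h) = kappa (act k m) (k \<otimes>\<^bsub>G\<^esub> h) \<otimes>\<^bsub>K\<^esub> lam k h"
proof -
  define s t where "s = s0 (proj k)" and "t = s0 (proj h)"
  have st: "s \<in> carrier G" "t \<in> carrier G" unfolding s_def t_def using k h by simp_all
  define A1 B C D E1 F1 G1 where "A1 = kappa (act s m) (s \<otimes>\<^bsub>G\<^esub> h)"
    and "B = kappa (act s (ncomp h)) (s \<otimes>\<^bsub>G\<^esub> t)" and "C = aK (proj k) (kappa m h)"
    and "D = kappa (act s (ncomp (mu m \<otimes>\<^bsub>G\<^esub> h))) (s \<otimes>\<^bsub>G\<^esub> t)"
    and "E1 = kappa (ncomp k) (s \<otimes>\<^bsub>G\<^esub> (mu m \<otimes>\<^bsub>G\<^esub> h))"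
    and "F1 = kappa (act k m) (k \<otimes>\<^bsub>G\<^esub> h)" and "G1 = kappa (ncomp k) (s \<otimes>\<^bsub>G\<^esub> h)"
  have cl: "A1 \<in> carrier K" "B \<in> carrier K" "C \<in> carrier K" "D \<in> carrier K" "E1 \<in> carrier K" "F1 \<in> carrier K" "G1 \<in> carrier K"
    unfolding A1_def B_def C_def D_def E1_def F1_def G1_def using st m h k by (simp_all add: aK_closed)
  have h1: "A1 \<otimes>\<^bsub>K\<^esub> B = C \<otimes>\<^bsub>K\<^esub> D"
    using kappa_act_relation[OF m st(1) h] unfolding A1_def B_def C_def D_def s_def t_def using k by simp
  have h2: "E1 \<otimes>\<^bsub>K\<^esub> A1 = F1 \<otimes>\<^bsub>K\<^esub> G1"
    using kappa_ncomp_act_relation[OF m k h] unfolding A1_def E1_def F1_def G1_def s_def .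
  have L1: "lam k (mu m \<otimes>\<^bsub>G\<^esub> h) = D \<otimes>\<^bsub>K\<^esub> E1"
    unfolding lam_def D_def E1_def s_def t_def using m h by simp
  have L2: "lam k h = B \<otimes>\<^bsub>K\<^esub> G1"
    unfolding lam_def B_def G1_def s_def t_def by simp
  have "A1 \<otimes>\<^bsub>K\<^esub> (D \<otimes>\<^bsub>K\<^esub> E1 \<otimes>\<^bsub>K\<^esub> C) = (C \<otimes>\<^bsub>K\<^esub> D) \<otimes>\<^bsub>K\<^esub> (E1 \<otimes>\<^bsub>K\<^esub> A1)"
    using cl by (simp add: gK.m_ac)
  also have "\<dots> = (A1 \<otimes>\<^bsub>K\<^esub> B) \<otimes>\<^bsub>K\<^esub> (F1 \<otimes>\<^bsub>K\<^esub> G1)" using h1 h2 by simp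
  also have "\<dots> = A1 \<otimes>\<^bsub>K\<^esub> (F1 \<otimes>\<^bsub>K\<^esub> (B \<otimes>\<^bsub>K\<^esub> G1))" using cl by (simp add: gK.m_ac)
  finally have X: "A1 \<otimes>\<^bsub>K\<^esub> (D \<otimes>\<^bsub>K\<^esub> E1 \<otimes>\<^bsub>K\<^esub> C) = A1 \<otimes>\<^bsub>K\<^esub> (F1 \<otimes>\<^bsub>K\<^esub> (B \<otimes>\<^bsub>K\<^esub> G1))" .
  have "D \<otimes>\<^bsub>K\<^esub> E1 \<otimes>\<^bsub>K\<^esub> C = F1 \<otimes>\<^bsub>K\<^esub> (B \<otimes>\<^bsub>K\<^esub> G1)"
    by (rule gK.l_cancel[OF X]) (use cl in simp_all)
  then show ?thesis unfolding L1 L2 C_def F1_def .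
qed

text \<open>\<open>lamL k h g\<close> and \<open>lamR k h g\<close> are the two ways of combining \<open>lam\<close> over a triple; a standard
  cocycle is associative in its last two arguments exactly when \<open>b\<close> compensates their difference.
  The key fact is that the relation \<open>lamL \<cdot> lamR' = lamR \<cdot> lamL'\<close> between two triples is insensitive to
  \<open>mu\<close>-translations in each argument, so it reduces to triples of sections.\<close>

definition lamL :: "'g \<Rightarrow> 'g \<Rightarrow> 'g \<Rightarrow> 'k" where "lamL k h g = lam k (h \<otimes>\<^bsub>G\<^esub> g) \<otimes>\<^bsub>K\<^esub> aK (proj k) (lam h g)"
definition lamR :: "'g \<Rightarrow> 'g \<Rightarrow> 'g \<Rightarrow> 'k" where "lamR k h g = lam k h \<otimes>\<^bsub>K\<^esub> lam (k \<otimes>\<^bsub>G\<^esub> h) g"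

lemma lamL_closed[simp]: "k \<in> carrier G \<Longrightarrow> h \<in> carrier G \<Longrightarrow> g \<in> carrier G \<Longrightarrow> lamL k h g \<in> carrier K"
  unfolding lamL_def by (simp add: aK_closed)
lemma lamR_closed[simp]: "k \<in> carrier G \<Longrightarrow> h \<in> carrier G \<Longrightarrow> g \<in> carrier G \<Longrightarrow> lamR k h g \<in> carrier K"
  unfolding lamR_def by simp

lemma lam_rel_shift1:
  assumes n: "n \<in> carrier M" and k: "k \<in> carrier G" and h: "h \<in> carrier G" and g: "g \<in> carrier G"
  shows "lamL (mu n \<otimes>\<^bsub>G\<^esub> k) h g \<otimes>\<^bsub>K\<^esub> lamR k h g = lamR (mu n \<otimes>\<^bsub>G\<^esub> k) h g \<otimes>\<^bsub>K\<^esub> lamL k h g"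
proof -
  have nk: "mu n \<otimes>\<^bsub>G\<^esub> k \<in> carrier G" using n k by simp
  have kh: "k \<otimes>\<^bsub>G\<^esub> h \<in> carrier G" "h \<otimes>\<^bsub>G\<^esub> g \<in> carrier G" using k h g by simp_all
  have u1: "lam (mu n \<otimes>\<^bsub>G\<^esub> k) h \<otimes>\<^bsub>K\<^esub> kappa n k = kappa n (k \<otimes>\<^bsub>G\<^esub> h) \<otimes>\<^bsub>K\<^esub> lam k h"
    by (rule lam_mu_left[OF n k h])
  have u2: "lam (mu n \<otimes>\<^bsub>G\<^esub> k \<otimes>\<^bsub>G\<^esub> h) g \<otimes>\<^bsub>K\<^esub> kappa n (k \<otimes>\<^bsub>G\<^esub> h) = kappa n (k \<otimes>\<^bsub>G\<^esub> (h \<otimes>\<^bsub>G\<^esub> g)) \<otimes>\<^bsub>K\<^esub> lam (k \<otimes>\<^bsub>G\<^esub> h) g"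
    using lam_mu_left[OF n kh(1) g] n k h g by (simp add: gG.m_assoc)
  have u3: "lam (mu n \<otimes>\<^bsub>G\<^esub> k) (h \<otimes>\<^bsub>G\<^esub> g) \<otimes>\<^bsub>K\<^esub> kappa n k = kappa n (k \<otimes>\<^bsub>G\<^esub> (h \<otimes>\<^bsub>G\<^esub> g)) \<otimes>\<^bsub>K\<^esub> lam k (h \<otimes>\<^bsub>G\<^esub> g)"
    by (rule lam_mu_left[OF n k kh(2)])
  have x: "proj (mu n \<otimes>\<^bsub>G\<^esub> k) = proj k" using n k by simp
  define Xv where "Xv = aK (proj k) (lam h g)"
  have Xv: "Xv \<in> carrier K" unfolding Xv_def using k h g by (simp add: aK_closed)
  note cl = Xv n k h g nk kh
  let ?Z = "kappa n k \<otimes>\<^bsub>K\<^esub> kappa n (k \<otimes>\<^bsub>G\<^esub> h)"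
  have "?Z \<otimes>\<^bsub>K\<^esub> (lamL (mu n \<otimes>\<^bsub>G\<^esub> k) h g \<otimes>\<^bsub>K\<^esub> lamR k h g)
     = (lam (mu n \<otimes>\<^bsub>G\<^esub> k) (h \<otimes>\<^bsub>G\<^esub> g) \<otimes>\<^bsub>K\<^esub> kappa n k) \<otimes>\<^bsub>K\<^esub> (Xv \<otimes>\<^bsub>K\<^esub> lam k h \<otimes>\<^bsub>K\<^esub> lam (k \<otimes>\<^bsub>G\<^esub> h) g \<otimes>\<^bsub>K\<^esub> kappa n (k \<otimes>\<^bsub>G\<^esub> h))"
    unfolding lamL_def lamR_def x Xv_def[symmetric] using cl by (simp add: gK.m_ac)
  also have "\<dots> = kappa n (k \<otimes>\<^bsub>G\<^esub> (h \<otimes>\<^bsub>G\<^esub> g)) \<otimes>\<^bsub>K\<^esub> lam k (h \<otimes>\<^bsub>G\<^esub> g) \<otimes>\<^bsub>K\<^esub> (Xv \<otimes>\<^bsub>K\<^esub> lam k h \<otimes>\<^bsub>K\<^esub> lam (k \<otimes>\<^bsub>G\<^esub> h) g \<otimes>\<^bsub>K\<^esub> kappa n (k \<otimes>\<^bsub>G\<^esub> h))"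
    unfolding u3 ..
  also have "\<dots> = (lam (mu n \<otimes>\<^bsub>G\<^esub> k) h \<otimes>\<^bsub>K\<^esub> kappa n k) \<otimes>\<^bsub>K\<^esub> (lam (mu n \<otimes>\<^bsub>G\<^esub> k \<otimes>\<^bsub>G\<^esub> h) g \<otimes>\<^bsub>K\<^esub> kappa n (k \<otimes>\<^bsub>G\<^esub> h)) \<otimes>\<^bsub>K\<^esub> (lam k (h \<otimes>\<^bsub>G\<^esub> g) \<otimes>\<^bsub>K\<^esub> Xv)"
    unfolding u1 u2 using cl by (simp add: gK.m_ac)
  also have "\<dots> = ?Z \<otimes>\<^bsub>K\<^esub> (lamR (mu n \<otimes>\<^bsub>G\<^esub> k) h g \<otimes>\<^bsub>K\<^esub> lamL k h g)"
    unfolding lamL_def lamR_def Xv_def[symmetric] using cl by (simp add: gK.m_ac)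
  finally show ?thesis using gK.l_cancel cl by (meson gK.m_closed kappa_closed lamL_closed lamR_closed)
qed

lemma lam_rel_shift2:
  assumes m: "m \<in> carrier M" and k: "k \<in> carrier G" and h: "h \<in> carrier G" and g: "g \<in> carrier G"
  shows "lamL k (mu m \<otimes>\<^bsub>G\<^esub> h) g \<otimes>\<^bsub>K\<^esub> lamR k h g = lamR k (mu m \<otimes>\<^bsub>G\<^esub> h) g \<otimes>\<^bsub>K\<^esub> lamL k h g"
proof -
  define x where "x = proj k"
  have x: "x \<in> carrier P" unfolding x_def using k by simp
  have mh: "mu m \<otimes>\<^bsub>G\<^esub> h \<in> carrier G" using m h by simp
  have kh: "k \<otimes>\<^bsub>G\<^esub> h \<in> carrier G" "h \<otimes>\<^bsub>G\<^esub> g \<in> carrier G" using k h g by simp_all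
  have am: "act k m \<in> carrier M" using k m by simp
  have v1: "lam k (mu m \<otimes>\<^bsub>G\<^esub> h) \<otimes>\<^bsub>K\<^esub> aK x (kappa m h) = kappa (act k m) (k \<otimes>\<^bsub>G\<^esub> h) \<otimes>\<^bsub>K\<^esub> lam k h"
    unfolding x_def by (rule lam_mu_right[OF m k h])
  have v2: "lam k (mu m \<otimes>\<^bsub>G\<^esub> h \<otimes>\<^bsub>G\<^esub> g) \<otimes>\<^bsub>K\<^esub> aK x (kappa m (h \<otimes>\<^bsub>G\<^esub> g)) = kappa (act k m) (k \<otimes>\<^bsub>G\<^esub> (h \<otimes>\<^bsub>G\<^esub> g)) \<otimes>\<^bsub>K\<^esub> lam k (h \<otimes>\<^bsub>G\<^esub> g)"
    unfolding x_def using lam_mu_right[OF m k kh(2)] m h g by (simp add: gG.m_assoc)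
  have e3: "mu (act k m) \<otimes>\<^bsub>G\<^esub> (k \<otimes>\<^bsub>G\<^esub> h) = k \<otimes>\<^bsub>G\<^esub> (mu m \<otimes>\<^bsub>G\<^esub> h)"
    using k m h by (simp add: mu_act gG.m_assoc gG.cancel_l1)
  have v3: "lam (k \<otimes>\<^bsub>G\<^esub> (mu m \<otimes>\<^bsub>G\<^esub> h)) g \<otimes>\<^bsub>K\<^esub> kappa (act k m) (k \<otimes>\<^bsub>G\<^esub> h) = kappa (act k m) (k \<otimes>\<^bsub>G\<^esub> (h \<otimes>\<^bsub>G\<^esub> g)) \<otimes>\<^bsub>K\<^esub> lam (k \<otimes>\<^bsub>G\<^esub> h) g"
    using lam_mu_left[OF am kh(1) g] e3 k h g by (simp add: gG.m_assoc)
  have v4: "aK x (lam (mu m \<otimes>\<^bsub>G\<^esub> h) g) \<otimes>\<^bsub>K\<^esub> aK x (kappa m h) = aK x (kappa m (h \<otimes>\<^bsub>G\<^esub> g)) \<otimes>\<^bsub>K\<^esub> aK x (lam h g)"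
  proof -
    have "aK x (lam (mu m \<otimes>\<^bsub>G\<^esub> h) g \<otimes>\<^bsub>K\<^esub> kappa m h) = aK x (kappa m (h \<otimes>\<^bsub>G\<^esub> g) \<otimes>\<^bsub>K\<^esub> lam h g)"
      using lam_mu_left[OF m h g] by simp
    then show ?thesis using x m h g mh kh by (simp add: aK_mult)
  qed
  have xx: "proj (k \<otimes>\<^bsub>G\<^esub> (mu m \<otimes>\<^bsub>G\<^esub> h)) = proj (k \<otimes>\<^bsub>G\<^esub> h)" using k m h by (simp add: proj_mult)
  note cl = x m k h g mh kh am
  let ?Z = "aK x (kappa m (h \<otimes>\<^bsub>G\<^esub> g)) \<otimes>\<^bsub>K\<^esub> aK x (kappa m h) \<otimes>\<^bsub>K\<^esub> kappa (act k m) (k \<otimes>\<^bsub>G\<^esub> h)"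
  have "?Z \<otimes>\<^bsub>K\<^esub> (lamL k (mu m \<otimes>\<^bsub>G\<^esub> h) g \<otimes>\<^bsub>K\<^esub> lamR k h g)
    = (lam k (mu m \<otimes>\<^bsub>G\<^esub> h \<otimes>\<^bsub>G\<^esub> g) \<otimes>\<^bsub>K\<^esub> aK x (kappa m (h \<otimes>\<^bsub>G\<^esub> g))) \<otimes>\<^bsub>K\<^esub> (aK x (lam (mu m \<otimes>\<^bsub>G\<^esub> h) g) \<otimes>\<^bsub>K\<^esub> aK x (kappa m h))
       \<otimes>\<^bsub>K\<^esub> (lam k h \<otimes>\<^bsub>K\<^esub> lam (k \<otimes>\<^bsub>G\<^esub> h) g \<otimes>\<^bsub>K\<^esub> kappa (act k m) (k \<otimes>\<^bsub>G\<^esub> h))"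
    unfolding lamL_def lamR_def x_def[symmetric] using cl by (simp add: gK.m_ac aK_closed)
  also have "\<dots> = (kappa (act k m) (k \<otimes>\<^bsub>G\<^esub> (h \<otimes>\<^bsub>G\<^esub> g)) \<otimes>\<^bsub>K\<^esub> lam k (h \<otimes>\<^bsub>G\<^esub> g)) \<otimes>\<^bsub>K\<^esub> (aK x (kappa m (h \<otimes>\<^bsub>G\<^esub> g)) \<otimes>\<^bsub>K\<^esub> aK x (lam h g))
       \<otimes>\<^bsub>K\<^esub> (lam k h \<otimes>\<^bsub>K\<^esub> lam (k \<otimes>\<^bsub>G\<^esub> h) g \<otimes>\<^bsub>K\<^esub> kappa (act k m) (k \<otimes>\<^bsub>G\<^esub> h))"
    unfolding v2 v4 ..
  also have "\<dots> = (kappa (act k m) (k \<otimes>\<^bsub>G\<^esub> h) \<otimes>\<^bsub>K\<^esub> lam k h) \<otimes>\<^bsub>K\<^esub> (kappa (act k m) (k \<otimes>\<^bsub>G\<^esub> (h \<otimes>\<^bsub>G\<^esub> g)) \<otimes>\<^bsub>K\<^esub> lam (k \<otimes>\<^bsub>G\<^esub> h) g)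
       \<otimes>\<^bsub>K\<^esub> (lam k (h \<otimes>\<^bsub>G\<^esub> g) \<otimes>\<^bsub>K\<^esub> aK x (lam h g) \<otimes>\<^bsub>K\<^esub> aK x (kappa m (h \<otimes>\<^bsub>G\<^esub> g)))"
    using cl by (simp add: gK.m_ac aK_closed)
  also have "\<dots> = (lam k (mu m \<otimes>\<^bsub>G\<^esub> h) \<otimes>\<^bsub>K\<^esub> aK x (kappa m h)) \<otimes>\<^bsub>K\<^esub> (lam (k \<otimes>\<^bsub>G\<^esub> (mu m \<otimes>\<^bsub>G\<^esub> h)) g \<otimes>\<^bsub>K\<^esub> kappa (act k m) (k \<otimes>\<^bsub>G\<^esub> h))
       \<otimes>\<^bsub>K\<^esub> (lam k (h \<otimes>\<^bsub>G\<^esub> g) \<otimes>\<^bsub>K\<^esub> aK x (lam h g) \<otimes>\<^bsub>K\<^esub> aK x (kappa m (h \<otimes>\<^bsub>G\<^esub> g)))"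
    unfolding v1 v3 ..
  also have "\<dots> = ?Z \<otimes>\<^bsub>K\<^esub> (lamR k (mu m \<otimes>\<^bsub>G\<^esub> h) g \<otimes>\<^bsub>K\<^esub> lamL k h g)"
    unfolding lamL_def lamR_def x_def[symmetric] using cl by (simp add: gK.m_ac aK_closed)
  finally have Z: "?Z \<otimes>\<^bsub>K\<^esub> (lamL k (mu m \<otimes>\<^bsub>G\<^esub> h) g \<otimes>\<^bsub>K\<^esub> lamR k h g) = ?Z \<otimes>\<^bsub>K\<^esub> (lamR k (mu m \<otimes>\<^bsub>G\<^esub> h) g \<otimes>\<^bsub>K\<^esub> lamL k h g)" .
  show ?thesis by (rule gK.l_cancel[OF Z]) (use cl in \<open>simp_all add: aK_closed\<close>)
qed

lemma lam_rel_shift3: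
  assumes m: "m \<in> carrier M" and k: "k \<in> carrier G" and h: "h \<in> carrier G" and g: "g \<in> carrier G"
  shows "lamL k h (mu m \<otimes>\<^bsub>G\<^esub> g) \<otimes>\<^bsub>K\<^esub> lamR k h g = lamR k h (mu m \<otimes>\<^bsub>G\<^esub> g) \<otimes>\<^bsub>K\<^esub> lamL k h g"
proof -
  define x where "x = proj k"
  define xy where "xy = proj (k \<otimes>\<^bsub>G\<^esub> h)"
  have x: "x \<in> carrier P" "xy \<in> carrier P" unfolding x_def xy_def using k h by simp_all
  have mg: "mu m \<otimes>\<^bsub>G\<^esub> g \<in> carrier G" using m g by simp
  have kh: "k \<otimes>\<^bsub>G\<^esub> h \<in> carrier G" "h \<otimes>\<^bsub>G\<^esub> g \<in> carrier G" using k h g by simp_all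
  have am: "act h m \<in> carrier M" "act (k \<otimes>\<^bsub>G\<^esub> h) m \<in> carrier M" using k h m by simp_all
  have w1: "lam (k \<otimes>\<^bsub>G\<^esub> h) (mu m \<otimes>\<^bsub>G\<^esub> g) \<otimes>\<^bsub>K\<^esub> aK xy (kappa m g) = kappa (act (k \<otimes>\<^bsub>G\<^esub> h) m) (k \<otimes>\<^bsub>G\<^esub> (h \<otimes>\<^bsub>G\<^esub> g)) \<otimes>\<^bsub>K\<^esub> lam (k \<otimes>\<^bsub>G\<^esub> h) g"
    unfolding xy_def using lam_mu_right[OF m kh(1) g] k h g by (simp add: gG.m_assoc)
  have w2: "aK x (lam h (mu m \<otimes>\<^bsub>G\<^esub> g)) \<otimes>\<^bsub>K\<^esub> aK xy (kappa m g) = aK x (kappa (act h m) (h \<otimes>\<^bsub>G\<^esub> g)) \<otimes>\<^bsub>K\<^esub> aK x (lam h g)"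
  proof -
    have "aK x (lam h (mu m \<otimes>\<^bsub>G\<^esub> g) \<otimes>\<^bsub>K\<^esub> aK (proj h) (kappa m g)) = aK x (kappa (act h m) (h \<otimes>\<^bsub>G\<^esub> g) \<otimes>\<^bsub>K\<^esub> lam h g)"
      using lam_mu_right[OF m h g] by simp
    moreover have "aK x (aK (proj h) (kappa m g)) = aK xy (kappa m g)"
      unfolding x_def xy_def using k h m g by (simp add: aK_comp proj_mult)
    ultimately show ?thesis using x m h g mg kh am by (simp add: aK_mult aK_closed)
  qed
  have e3: "mu (act h m) \<otimes>\<^bsub>G\<^esub> (h \<otimes>\<^bsub>G\<^esub> g) = h \<otimes>\<^bsub>G\<^esub> (mu m \<otimes>\<^bsub>G\<^esub> g)"
    using g m h by (simp add: mu_act gG.m_assoc gG.cancel_l1)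
  have w3: "lam k (h \<otimes>\<^bsub>G\<^esub> (mu m \<otimes>\<^bsub>G\<^esub> g)) \<otimes>\<^bsub>K\<^esub> aK x (kappa (act h m) (h \<otimes>\<^bsub>G\<^esub> g)) = kappa (act (k \<otimes>\<^bsub>G\<^esub> h) m) (k \<otimes>\<^bsub>G\<^esub> (h \<otimes>\<^bsub>G\<^esub> g)) \<otimes>\<^bsub>K\<^esub> lam k (h \<otimes>\<^bsub>G\<^esub> g)"
    unfolding x_def using lam_mu_right[OF am(1) k kh(2)] e3 k h m by (simp add: act_comp)
  note cl = x m k h g mg kh am
  let ?Z = "aK x (kappa (act h m) (h \<otimes>\<^bsub>G\<^esub> g)) \<otimes>\<^bsub>K\<^esub> aK xy (kappa m g)"
  have "?Z \<otimes>\<^bsub>K\<^esub> (lamL k h (mu m \<otimes>\<^bsub>G\<^esub> g) \<otimes>\<^bsub>K\<^esub> lamR k h g)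
    = (lam k (h \<otimes>\<^bsub>G\<^esub> (mu m \<otimes>\<^bsub>G\<^esub> g)) \<otimes>\<^bsub>K\<^esub> aK x (kappa (act h m) (h \<otimes>\<^bsub>G\<^esub> g))) \<otimes>\<^bsub>K\<^esub> (aK x (lam h (mu m \<otimes>\<^bsub>G\<^esub> g)) \<otimes>\<^bsub>K\<^esub> aK xy (kappa m g))
       \<otimes>\<^bsub>K\<^esub> (lam k h \<otimes>\<^bsub>K\<^esub> lam (k \<otimes>\<^bsub>G\<^esub> h) g)"
    unfolding lamL_def lamR_def x_def[symmetric] using cl by (simp add: gK.m_ac aK_closed)
  also have "\<dots> = (kappa (act (k \<otimes>\<^bsub>G\<^esub> h) m) (k \<otimes>\<^bsub>G\<^esub> (h \<otimes>\<^bsub>G\<^esub> g)) \<otimes>\<^bsub>K\<^esub> lam k (h \<otimes>\<^bsub>G\<^esub> g)) \<otimes>\<^bsub>K\<^esub> (aK x (kappa (act h m) (h \<otimes>\<^bsub>G\<^esub> g)) \<otimes>\<^bsub>K\<^esub> aK x (lam h g))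
       \<otimes>\<^bsub>K\<^esub> (lam k h \<otimes>\<^bsub>K\<^esub> lam (k \<otimes>\<^bsub>G\<^esub> h) g)"
    unfolding w2 w3 ..
  also have "\<dots> = lam k h \<otimes>\<^bsub>K\<^esub> (kappa (act (k \<otimes>\<^bsub>G\<^esub> h) m) (k \<otimes>\<^bsub>G\<^esub> (h \<otimes>\<^bsub>G\<^esub> g)) \<otimes>\<^bsub>K\<^esub> lam (k \<otimes>\<^bsub>G\<^esub> h) g)
       \<otimes>\<^bsub>K\<^esub> (lam k (h \<otimes>\<^bsub>G\<^esub> g) \<otimes>\<^bsub>K\<^esub> aK x (lam h g) \<otimes>\<^bsub>K\<^esub> aK x (kappa (act h m) (h \<otimes>\<^bsub>G\<^esub> g)))"
    using cl by (simp add: gK.m_ac aK_closed)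
  also have "\<dots> = lam k h \<otimes>\<^bsub>K\<^esub> (lam (k \<otimes>\<^bsub>G\<^esub> h) (mu m \<otimes>\<^bsub>G\<^esub> g) \<otimes>\<^bsub>K\<^esub> aK xy (kappa m g))
       \<otimes>\<^bsub>K\<^esub> (lam k (h \<otimes>\<^bsub>G\<^esub> g) \<otimes>\<^bsub>K\<^esub> aK x (lam h g) \<otimes>\<^bsub>K\<^esub> aK x (kappa (act h m) (h \<otimes>\<^bsub>G\<^esub> g)))"
    unfolding w1 ..
  also have "\<dots> = ?Z \<otimes>\<^bsub>K\<^esub> (lamR k h (mu m \<otimes>\<^bsub>G\<^esub> g) \<otimes>\<^bsub>K\<^esub> lamL k h g)"
    unfolding lamL_def lamR_def x_def[symmetric] using cl by (simp add: gK.m_ac aK_closed)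
  finally have Z: "?Z \<otimes>\<^bsub>K\<^esub> (lamL k h (mu m \<otimes>\<^bsub>G\<^esub> g) \<otimes>\<^bsub>K\<^esub> lamR k h g) = ?Z \<otimes>\<^bsub>K\<^esub> (lamR k h (mu m \<otimes>\<^bsub>G\<^esub> g) \<otimes>\<^bsub>K\<^esub> lamL k h g)" .
  show ?thesis by (rule gK.l_cancel[OF Z]) (use cl in \<open>simp_all add: aK_closed\<close>)
qed

lemma lam_rel_sections:
  assumes k: "k \<in> carrier G" and h: "h \<in> carrier G" and g: "g \<in> carrier G"
  shows "lamL k h g \<otimes>\<^bsub>K\<^esub> lamR (s0 (proj k)) (s0 (proj h)) (s0 (proj g)) = lamR k h g \<otimes>\<^bsub>K\<^esub> lamL (s0 (proj k)) (s0 (proj h)) (s0 (proj g))"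
proof -
  define s t r where "s = s0 (proj k)" and "t = s0 (proj h)" and "r = s0 (proj g)"
  have st: "s \<in> carrier G" "t \<in> carrier G" "r \<in> carrier G" unfolding s_def t_def r_def using k h g by simp_all
  have 1: "lamL k h g \<otimes>\<^bsub>K\<^esub> lamR s h g = lamR k h g \<otimes>\<^bsub>K\<^esub> lamL s h g"
    using lam_rel_shift1[OF ncomp_closed[OF k] st(1) h g] normal_form[OF k] unfolding s_def by simp
  have 2: "lamL s h g \<otimes>\<^bsub>K\<^esub> lamR s t g = lamR s h g \<otimes>\<^bsub>K\<^esub> lamL s t g"
    using lam_rel_shift2[OF ncomp_closed[OF h] st(1) st(2) g] normal_form[OF h] unfolding t_def by simp
  have 3: "lamL s t g \<otimes>\<^bsub>K\<^esub> lamR s t r = lamR s t g \<otimes>\<^bsub>K\<^esub> lamL s t r"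
    using lam_rel_shift3[OF ncomp_closed[OF g] st(1) st(2) st(3)] normal_form[OF g] unfolding r_def by simp
  have 12: "lamL k h g \<otimes>\<^bsub>K\<^esub> lamR s t g = lamR k h g \<otimes>\<^bsub>K\<^esub> lamL s t g"
    by (rule gK.rel_trans[OF _ _ _ _ _ _ 1 2]) (use k h g st in simp_all)
  have "lamL k h g \<otimes>\<^bsub>K\<^esub> lamR s t r = lamR k h g \<otimes>\<^bsub>K\<^esub> lamL s t r"
    by (rule gK.rel_trans[OF _ _ _ _ _ _ 12 3]) (use k h g st in simp_all)
  then show ?thesis unfolding s_def t_def r_def .
qed

end

section \<open>Cochains with coefficients in an abelian \<open>P\<close>-module\<close>

locale ext_coeffs = sectioned_ext P K aK E s1 s0
  for P :: "'p monoid" and K :: "'k monoid" and aK and E :: "('p,'k,'g,'m) cmext" and s1 s0 +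
  fixes A :: "'v monoid" and aA :: "'p \<Rightarrow> 'v \<Rightarrow> 'v"
  assumes modA: "abelian_module P A aA"
begin

lemma cA: "comm_group A" using modA unfolding abelian_module_def by auto
sublocale gA: comm_group A by (rule cA)

lemma aA_hom: "x \<in> carrier P \<Longrightarrow> aA x \<in> hom A A"
  using modA unfolding abelian_module_def group_action_on_def by auto
lemma aA_closed[simp]: "x \<in> carrier P \<Longrightarrow> a \<in> carrier A \<Longrightarrow> aA x a \<in> carrier A"
  using hom_in_carrier[OF aA_hom] by blast
lemma aA_mult: "x \<in> carrier P \<Longrightarrow> a \<in> carrier A \<Longrightarrow> b \<in> carrier A \<Longrightarrow> aA x (a \<otimes>\<^bsub>A\<^esub> b) = aA x a \<otimes>\<^bsub>A\<^esub> aA x b"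
  using hom_mult[OF aA_hom] by blast
lemma aA_1[simp]: "x \<in> carrier P \<Longrightarrow> aA x \<one>\<^bsub>A\<^esub> = \<one>\<^bsub>A\<^esub>"
  using hom_one[OF aA_hom gA.is_group gA.is_group] by blast
lemma aA_inv: "x \<in> carrier P \<Longrightarrow> a \<in> carrier A \<Longrightarrow> aA x (inv\<^bsub>A\<^esub> a) = inv\<^bsub>A\<^esub> (aA x a)"
  using hom_inv_general[OF aA_hom gA.is_group gA.is_group] by blast
lemma aA_one[simp]: "a \<in> carrier A \<Longrightarrow> aA \<one>\<^bsub>P\<^esub> a = a"
  using modA unfolding abelian_module_def group_action_on_def by auto
lemma aA_comp: "x \<in> carrier P \<Longrightarrow> y \<in> carrier P \<Longrightarrow> a \<in> carrier A \<Longrightarrow> aA x (aA y a) = aA (x \<otimes>\<^bsub>P\<^esub> y) a"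
  using modA unfolding abelian_module_def group_action_on_def by auto

lemma C2_closed: "z \<in> C2 E A \<Longrightarrow> m \<in> carrier M \<Longrightarrow> h \<in> carrier G \<Longrightarrow> g \<in> carrier G \<Longrightarrow> z (m,h,g) \<in> carrier A"
  unfolding C2_def dom2_def by auto

lemma Z2_identity:
  assumes z: "z \<in> Z2 E A aA" and p: "p \<in> carrier M" and n: "n \<in> carrier M" and k: "k \<in> carrier G"
    and m: "m \<in> carrier M" and h: "h \<in> carrier G" and g: "g \<in> carrier G"
  shows "z (p, mu n \<otimes>\<^bsub>G\<^esub> k, mu m \<otimes>\<^bsub>G\<^esub> h) \<otimes>\<^bsub>A\<^esub> z (n \<otimes>\<^bsub>M\<^esub> act k m, k \<otimes>\<^bsub>G\<^esub> h, g)
       = z (p \<otimes>\<^bsub>M\<^esub> n, k, h \<otimes>\<^bsub>G\<^esub> g) \<otimes>\<^bsub>A\<^esub> aA (proj k) (z (m, h, g))"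
proof -
  have zc: "z \<in> C2 E A" using z unfolding Z2_def by auto
  have "d2val E A aA z p n k m h g = \<one>\<^bsub>A\<^esub>" using z p n k m h g unfolding Z2_def by auto
  then show ?thesis unfolding d2val_def
    using gA.alternating_four_eq_one C2_closed[OF zc] p n k m h g by simp
qed

lemma Z2I:
  assumes zc: "z \<in> C2 E A"
    and e: "\<And>p n k m h g. p \<in> carrier M \<Longrightarrow> n \<in> carrier M \<Longrightarrow> k \<in> carrier G \<Longrightarrow> m \<in> carrier M \<Longrightarrow> h \<in> carrier G \<Longrightarrow> g \<in> carrier G \<Longrightarrow>
       z (p, mu n \<otimes>\<^bsub>G\<^esub> k, mu m \<otimes>\<^bsub>G\<^esub> h) \<otimes>\<^bsub>A\<^esub> z (n \<otimes>\<^bsub>M\<^esub> act k m, k \<otimes>\<^bsub>G\<^esub> h, g)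
       = z (p \<otimes>\<^bsub>M\<^esub> n, k, h \<otimes>\<^bsub>G\<^esub> g) \<otimes>\<^bsub>A\<^esub> aA (proj k) (z (m, h, g))"
  shows "z \<in> Z2 E A aA"
  unfolding Z2_def using zc
  by (auto simp: d2val_def gA.alternating_four_eq_one C2_closed e)

text \<open>For a pointed cocycle the condition splits into five identities, each involving only values
  with a trivial first or third argument; conversely these identities imply the cocycle condition.\<close>

context
  fixes z assumes z: "z \<in> Z2 E A aA" and pt: "z (\<one>\<^bsub>M\<^esub>, \<one>\<^bsub>G\<^esub>, \<one>\<^bsub>G\<^esub>) = \<one>\<^bsub>A\<^esub>"
begin

lemma Z2_C2: "z \<in> C2 E A" using z unfolding Z2_def by auto

lemma Z2_closed: "m \<in> carrier M \<Longrightarrow> h \<in> carrier G \<Longrightarrow> g \<in> carrier G \<Longrightarrow> z (m,h,g) \<in> carrier A"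
  by (rule C2_closed[OF Z2_C2])

lemma Z2_one_one: "g \<in> carrier G \<Longrightarrow> z (\<one>\<^bsub>M\<^esub>, \<one>\<^bsub>G\<^esub>, g) = \<one>\<^bsub>A\<^esub>"
proof -
  assume g: "g \<in> carrier G"
  have "z (\<one>\<^bsub>M\<^esub>, \<one>\<^bsub>G\<^esub>, g) = z (\<one>\<^bsub>M\<^esub>, \<one>\<^bsub>G\<^esub>, g) \<otimes>\<^bsub>A\<^esub> z (\<one>\<^bsub>M\<^esub>, \<one>\<^bsub>G\<^esub>, g)"
    using Z2_identity[OF z, of "\<one>\<^bsub>M\<^esub>" "\<one>\<^bsub>M\<^esub>" "\<one>\<^bsub>G\<^esub>" "\<one>\<^bsub>M\<^esub>" "\<one>\<^bsub>G\<^esub>" g] g pt Z2_closed[of "\<one>\<^bsub>M\<^esub>" "\<one>\<^bsub>G\<^esub>" g]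
    by (simp add: act_1)
  then show ?thesis using Z2_closed[of "\<one>\<^bsub>M\<^esub>" "\<one>\<^bsub>G\<^esub>" g] g by simp
qed

lemma Z2_mult_first:
  "p \<in> carrier M \<Longrightarrow> n \<in> carrier M \<Longrightarrow> k \<in> carrier G \<Longrightarrow>
   z (p \<otimes>\<^bsub>M\<^esub> n, k, \<one>\<^bsub>G\<^esub>) = z (p, mu n \<otimes>\<^bsub>G\<^esub> k, \<one>\<^bsub>G\<^esub>) \<otimes>\<^bsub>A\<^esub> z (n, k, \<one>\<^bsub>G\<^esub>)"
  using Z2_identity[OF z, of p n k "\<one>\<^bsub>M\<^esub>" "\<one>\<^bsub>G\<^esub>" "\<one>\<^bsub>G\<^esub>"] pt Z2_closed[of "p \<otimes>\<^bsub>M\<^esub> n" k "\<one>\<^bsub>G\<^esub>"]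
  by (simp add: act_1)

lemma Z2_one_first: "k \<in> carrier G \<Longrightarrow> z (\<one>\<^bsub>M\<^esub>, k, \<one>\<^bsub>G\<^esub>) = \<one>\<^bsub>A\<^esub>"
proof -
  assume k: "k \<in> carrier G"
  have "z (\<one>\<^bsub>M\<^esub>, k, \<one>\<^bsub>G\<^esub>) = z (\<one>\<^bsub>M\<^esub>, k, \<one>\<^bsub>G\<^esub>) \<otimes>\<^bsub>A\<^esub> z (\<one>\<^bsub>M\<^esub>, k, \<one>\<^bsub>G\<^esub>)"
    using Z2_mult_first[of "\<one>\<^bsub>M\<^esub>" "\<one>\<^bsub>M\<^esub>" k] k by simp
  then show ?thesis using Z2_closed[of "\<one>\<^bsub>M\<^esub>" k "\<one>\<^bsub>G\<^esub>"] k by simp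
qed

lemma Z2_split:
  "m \<in> carrier M \<Longrightarrow> h \<in> carrier G \<Longrightarrow> g \<in> carrier G \<Longrightarrow>
   z (m, h, g) = z (m, h, \<one>\<^bsub>G\<^esub>) \<otimes>\<^bsub>A\<^esub> z (\<one>\<^bsub>M\<^esub>, h, g)"
  using Z2_identity[OF z, of m "\<one>\<^bsub>M\<^esub>" h "\<one>\<^bsub>M\<^esub>" "\<one>\<^bsub>G\<^esub>" g] Z2_one_one[of g] Z2_closed[of m h g]
  by (simp add: act_1)

lemma Z2_act_relation:
  "k \<in> carrier G \<Longrightarrow> m \<in> carrier M \<Longrightarrow> h \<in> carrier G \<Longrightarrow>
   z (\<one>\<^bsub>M\<^esub>, k, mu m \<otimes>\<^bsub>G\<^esub> h) \<otimes>\<^bsub>A\<^esub> z (act k m, k \<otimes>\<^bsub>G\<^esub> h, \<one>\<^bsub>G\<^esub>)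
   = z (\<one>\<^bsub>M\<^esub>, k, h) \<otimes>\<^bsub>A\<^esub> aA (proj k) (z (m, h, \<one>\<^bsub>G\<^esub>))"
  using Z2_identity[OF z, of "\<one>\<^bsub>M\<^esub>" "\<one>\<^bsub>M\<^esub>" k m h "\<one>\<^bsub>G\<^esub>"] by simp

lemma Z2_mu_relation:
  "n \<in> carrier M \<Longrightarrow> k \<in> carrier G \<Longrightarrow> h \<in> carrier G \<Longrightarrow>
   z (\<one>\<^bsub>M\<^esub>, mu n \<otimes>\<^bsub>G\<^esub> k, h) \<otimes>\<^bsub>A\<^esub> z (n, k \<otimes>\<^bsub>G\<^esub> h, \<one>\<^bsub>G\<^esub>)
   = z (n, k, \<one>\<^bsub>G\<^esub>) \<otimes>\<^bsub>A\<^esub> z (\<one>\<^bsub>M\<^esub>, k, h)"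
  using Z2_identity[OF z, of "\<one>\<^bsub>M\<^esub>" n k "\<one>\<^bsub>M\<^esub>" h "\<one>\<^bsub>G\<^esub>"] Z2_one_first[of h] Z2_split[of n k h] Z2_closed[of n k h]
  by (simp add: act_1)

lemma Z2_group_cocycle:
  "k \<in> carrier G \<Longrightarrow> h \<in> carrier G \<Longrightarrow> g \<in> carrier G \<Longrightarrow>
   z (\<one>\<^bsub>M\<^esub>, k, h) \<otimes>\<^bsub>A\<^esub> z (\<one>\<^bsub>M\<^esub>, k \<otimes>\<^bsub>G\<^esub> h, g)
   = z (\<one>\<^bsub>M\<^esub>, k, h \<otimes>\<^bsub>G\<^esub> g) \<otimes>\<^bsub>A\<^esub> aA (proj k) (z (\<one>\<^bsub>M\<^esub>, h, g))"
  using Z2_identity[OF z, of "\<one>\<^bsub>M\<^esub>" "\<one>\<^bsub>M\<^esub>" k "\<one>\<^bsub>M\<^esub>" h g] by (simp add: act_1)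

end

lemma reduced_expand:
  assumes P1: "\<And>m h g. m \<in> carrier M \<Longrightarrow> h \<in> carrier G \<Longrightarrow> g \<in> carrier G \<Longrightarrow>
          z (m, h, g) = z (m, h, \<one>\<^bsub>G\<^esub>) \<otimes>\<^bsub>A\<^esub> z (\<one>\<^bsub>M\<^esub>, h, g)"
    and PA1: "\<And>p n k. p \<in> carrier M \<Longrightarrow> n \<in> carrier M \<Longrightarrow> k \<in> carrier G \<Longrightarrow>
          z (p \<otimes>\<^bsub>M\<^esub> n, k, \<one>\<^bsub>G\<^esub>) = z (p, mu n \<otimes>\<^bsub>G\<^esub> k, \<one>\<^bsub>G\<^esub>) \<otimes>\<^bsub>A\<^esub> z (n, k, \<one>\<^bsub>G\<^esub>)"
    and p: "p \<in> carrier M" and n: "n \<in> carrier M" and k: "k \<in> carrier G" and g: "g \<in> carrier G"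
  shows "z (p \<otimes>\<^bsub>M\<^esub> n, k, g) = z (p, mu n \<otimes>\<^bsub>G\<^esub> k, \<one>\<^bsub>G\<^esub>) \<otimes>\<^bsub>A\<^esub> z (n, k, \<one>\<^bsub>G\<^esub>) \<otimes>\<^bsub>A\<^esub> z (\<one>\<^bsub>M\<^esub>, k, g)"
  using P1[of "p \<otimes>\<^bsub>M\<^esub> n" k g] PA1[OF p n k] p n k g by simp

lemma Z2_from_reduced:
  assumes zc: "z \<in> C2 E A"
    and P1: "\<And>m h g. m \<in> carrier M \<Longrightarrow> h \<in> carrier G \<Longrightarrow> g \<in> carrier G \<Longrightarrow>
          z (m, h, g) = z (m, h, \<one>\<^bsub>G\<^esub>) \<otimes>\<^bsub>A\<^esub> z (\<one>\<^bsub>M\<^esub>, h, g)"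
    and PA1: "\<And>p n k. p \<in> carrier M \<Longrightarrow> n \<in> carrier M \<Longrightarrow> k \<in> carrier G \<Longrightarrow>
          z (p \<otimes>\<^bsub>M\<^esub> n, k, \<one>\<^bsub>G\<^esub>) = z (p, mu n \<otimes>\<^bsub>G\<^esub> k, \<one>\<^bsub>G\<^esub>) \<otimes>\<^bsub>A\<^esub> z (n, k, \<one>\<^bsub>G\<^esub>)"
    and PA2: "\<And>k m h. k \<in> carrier G \<Longrightarrow> m \<in> carrier M \<Longrightarrow> h \<in> carrier G \<Longrightarrow>
          z (\<one>\<^bsub>M\<^esub>, k, mu m \<otimes>\<^bsub>G\<^esub> h) \<otimes>\<^bsub>A\<^esub> z (act k m, k \<otimes>\<^bsub>G\<^esub> h, \<one>\<^bsub>G\<^esub>)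
           = z (\<one>\<^bsub>M\<^esub>, k, h) \<otimes>\<^bsub>A\<^esub> aA (proj k) (z (m, h, \<one>\<^bsub>G\<^esub>))"
    and PA3: "\<And>n k h. n \<in> carrier M \<Longrightarrow> k \<in> carrier G \<Longrightarrow> h \<in> carrier G \<Longrightarrow>
          z (\<one>\<^bsub>M\<^esub>, mu n \<otimes>\<^bsub>G\<^esub> k, h) \<otimes>\<^bsub>A\<^esub> z (n, k \<otimes>\<^bsub>G\<^esub> h, \<one>\<^bsub>G\<^esub>)
           = z (n, k, \<one>\<^bsub>G\<^esub>) \<otimes>\<^bsub>A\<^esub> z (\<one>\<^bsub>M\<^esub>, k, h)"
    and PB: "\<And>k h g. k \<in> carrier G \<Longrightarrow> h \<in> carrier G \<Longrightarrow> g \<in> carrier G \<Longrightarrow>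
          z (\<one>\<^bsub>M\<^esub>, k, h) \<otimes>\<^bsub>A\<^esub> z (\<one>\<^bsub>M\<^esub>, k \<otimes>\<^bsub>G\<^esub> h, g)
           = z (\<one>\<^bsub>M\<^esub>, k, h \<otimes>\<^bsub>G\<^esub> g) \<otimes>\<^bsub>A\<^esub> aA (proj k) (z (\<one>\<^bsub>M\<^esub>, h, g))"
  shows "z \<in> Z2 E A aA"
proof (rule Z2I[OF zc])
  note cl = C2_closed[OF zc]
  fix p n k m h g
  assume p: "p \<in> carrier M" and n: "n \<in> carrier M" and k: "k \<in> carrier G"
    and m: "m \<in> carrier M" and h: "h \<in> carrier G" and g: "g \<in> carrier G"
  define x where "x = proj k"
  have x: "x \<in> carrier P" unfolding x_def using k by simp
  have g1: "mu n \<otimes>\<^bsub>G\<^esub> k \<in> carrier G" "mu m \<otimes>\<^bsub>G\<^esub> h \<in> carrier G" "k \<otimes>\<^bsub>G\<^esub> h \<in> carrier G"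
     "h \<otimes>\<^bsub>G\<^esub> g \<in> carrier G" "k \<otimes>\<^bsub>G\<^esub> (mu m \<otimes>\<^bsub>G\<^esub> h) \<in> carrier G" "act k m \<in> carrier M"
    using n k m h g by simp_all
  have e: "mu (act k m) \<otimes>\<^bsub>G\<^esub> (k \<otimes>\<^bsub>G\<^esub> h) = k \<otimes>\<^bsub>G\<^esub> (mu m \<otimes>\<^bsub>G\<^esub> h)"
    using k m h by (simp add: mu_act gG.m_assoc gG.cancel_l1)
  let ?a1 = "z (p, mu n \<otimes>\<^bsub>G\<^esub> k, \<one>\<^bsub>G\<^esub>)"
  let ?a2 = "z (n, k, \<one>\<^bsub>G\<^esub>)"
  let ?a3 = "z (act k m, k \<otimes>\<^bsub>G\<^esub> h, \<one>\<^bsub>G\<^esub>)"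
  let ?a4 = "z (m, h, \<one>\<^bsub>G\<^esub>)"
  let ?a5 = "z (n, k \<otimes>\<^bsub>G\<^esub> (mu m \<otimes>\<^bsub>G\<^esub> h), \<one>\<^bsub>G\<^esub>)"
  let ?b1 = "z (\<one>\<^bsub>M\<^esub>, mu n \<otimes>\<^bsub>G\<^esub> k, mu m \<otimes>\<^bsub>G\<^esub> h)"
  let ?b2 = "z (\<one>\<^bsub>M\<^esub>, k, mu m \<otimes>\<^bsub>G\<^esub> h)"
  let ?b3 = "z (\<one>\<^bsub>M\<^esub>, k, h)"
  let ?b4 = "z (\<one>\<^bsub>M\<^esub>, k \<otimes>\<^bsub>G\<^esub> h, g)"
  let ?b5 = "z (\<one>\<^bsub>M\<^esub>, k, h \<otimes>\<^bsub>G\<^esub> g)"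
  let ?b6 = "z (\<one>\<^bsub>M\<^esub>, h, g)"
  have c: "?a1 \<in> carrier A" "?a2 \<in> carrier A" "?a3 \<in> carrier A" "?a4 \<in> carrier A" "?a5 \<in> carrier A"
    "?b1 \<in> carrier A" "?b2 \<in> carrier A" "?b3 \<in> carrier A" "?b4 \<in> carrier A" "?b5 \<in> carrier A" "?b6 \<in> carrier A"
    using cl p n k m h g g1 by simp_all
  have z1: "z (p, mu n \<otimes>\<^bsub>G\<^esub> k, mu m \<otimes>\<^bsub>G\<^esub> h) = ?a1 \<otimes>\<^bsub>A\<^esub> ?b1" using P1[OF p g1(1) g1(2)] .
  have z3: "z (n \<otimes>\<^bsub>M\<^esub> act k m, k \<otimes>\<^bsub>G\<^esub> h, g) = ?a5 \<otimes>\<^bsub>A\<^esub> ?a3 \<otimes>\<^bsub>A\<^esub> ?b4"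
    using reduced_expand[OF P1 PA1 n g1(6) g1(3) g] e by simp
  have z2: "z (p \<otimes>\<^bsub>M\<^esub> n, k, h \<otimes>\<^bsub>G\<^esub> g) = ?a1 \<otimes>\<^bsub>A\<^esub> ?a2 \<otimes>\<^bsub>A\<^esub> ?b5"
    by (rule reduced_expand[OF P1 PA1 p n k g1(4)])
  have z4: "aA (proj k) (z (m, h, g)) = aA x ?a4 \<otimes>\<^bsub>A\<^esub> aA x ?b6"
    unfolding x_def using P1[of m h g] m h g c k by (simp add: aA_mult)
  have r3: "?b1 \<otimes>\<^bsub>A\<^esub> ?a5 = ?a2 \<otimes>\<^bsub>A\<^esub> ?b2" using PA3[OF n k g1(2)] .
  have r2: "?b2 \<otimes>\<^bsub>A\<^esub> ?a3 = ?b3 \<otimes>\<^bsub>A\<^esub> aA x ?a4" unfolding x_def using PA2[OF k m h] .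
  have rb: "?b3 \<otimes>\<^bsub>A\<^esub> ?b4 = ?b5 \<otimes>\<^bsub>A\<^esub> aA x ?b6" unfolding x_def using PB[OF k h g] .
  have "z (p, mu n \<otimes>\<^bsub>G\<^esub> k, mu m \<otimes>\<^bsub>G\<^esub> h) \<otimes>\<^bsub>A\<^esub> z (n \<otimes>\<^bsub>M\<^esub> act k m, k \<otimes>\<^bsub>G\<^esub> h, g)
      = ?a1 \<otimes>\<^bsub>A\<^esub> (?b1 \<otimes>\<^bsub>A\<^esub> ?a5) \<otimes>\<^bsub>A\<^esub> ?a3 \<otimes>\<^bsub>A\<^esub> ?b4"
    unfolding z1 z3 using c by (simp add: gA.m_ac)
  also have "\<dots> = ?a1 \<otimes>\<^bsub>A\<^esub> ?a2 \<otimes>\<^bsub>A\<^esub> (?b2 \<otimes>\<^bsub>A\<^esub> ?a3) \<otimes>\<^bsub>A\<^esub> ?b4"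
    unfolding r3 using c by (simp add: gA.m_ac)
  also have "\<dots> = ?a1 \<otimes>\<^bsub>A\<^esub> ?a2 \<otimes>\<^bsub>A\<^esub> aA x ?a4 \<otimes>\<^bsub>A\<^esub> (?b3 \<otimes>\<^bsub>A\<^esub> ?b4)"
    unfolding r2 using c x by (simp add: gA.m_ac)
  also have "\<dots> = z (p \<otimes>\<^bsub>M\<^esub> n, k, h \<otimes>\<^bsub>G\<^esub> g) \<otimes>\<^bsub>A\<^esub> aA (proj k) (z (m, h, g))"
    unfolding rb z2 z4 using c x by (simp add: gA.m_ac)
  finally show "z (p, mu n \<otimes>\<^bsub>G\<^esub> k, mu m \<otimes>\<^bsub>G\<^esub> h) \<otimes>\<^bsub>A\<^esub> z (n \<otimes>\<^bsub>M\<^esub> act k m, k \<otimes>\<^bsub>G\<^esub> h, g)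
       = z (p \<otimes>\<^bsub>M\<^esub> n, k, h \<otimes>\<^bsub>G\<^esub> g) \<otimes>\<^bsub>A\<^esub> aA (proj k) (z (m, h, g))" .
qed

definition std_data :: "('k \<Rightarrow> 'v) \<Rightarrow> ('p \<Rightarrow> 'p \<Rightarrow> 'v) \<Rightarrow> bool" where
  "std_data f b \<longleftrightarrow> f \<in> hom K A \<and> (\<forall>x\<in>carrier P. \<forall>k\<in>carrier K. f (aK x k) = aA x (f k))
     \<and> (\<forall>x\<in>carrier P. \<forall>y\<in>carrier P. b x y \<in> carrier A) \<and> (\<forall>x\<in>carrier P. b x \<one>\<^bsub>P\<^esub> = \<one>\<^bsub>A\<^esub>)"

definition stdv :: "('k \<Rightarrow> 'v) \<Rightarrow> ('p \<Rightarrow> 'p \<Rightarrow> 'v) \<Rightarrow> 'm \<Rightarrow> 'g \<Rightarrow> 'g \<Rightarrow> 'v" where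
  "stdv f b m h g = f (kappa m h) \<otimes>\<^bsub>A\<^esub> b (proj h) (proj g) \<otimes>\<^bsub>A\<^esub> inv\<^bsub>A\<^esub> (f (lam h g))"

definition std_cochain :: "('k \<Rightarrow> 'v) \<Rightarrow> ('p \<Rightarrow> 'p \<Rightarrow> 'v) \<Rightarrow> 'm \<times> 'g \<times> 'g \<Rightarrow> 'v" where "std_cochain f b = restrict (\<lambda>(m,h,g). stdv f b m h g) (dom2 E)"

text \<open>The cocycle condition of \<open>std_cochain f b\<close> on a triple with trivial first argument.\<close>
definition assoc_cond :: "('k \<Rightarrow> 'v) \<Rightarrow> ('p \<Rightarrow> 'p \<Rightarrow> 'v) \<Rightarrow> 'g \<Rightarrow> 'g \<Rightarrow> 'g \<Rightarrow> bool" where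
  "assoc_cond f b k h g \<longleftrightarrow> b (proj k) (proj h) \<otimes>\<^bsub>A\<^esub> b (proj k \<otimes>\<^bsub>P\<^esub> proj h) (proj g) \<otimes>\<^bsub>A\<^esub> f (lamL k h g)
     = b (proj k) (proj h \<otimes>\<^bsub>P\<^esub> proj g) \<otimes>\<^bsub>A\<^esub> aA (proj k) (b (proj h) (proj g)) \<otimes>\<^bsub>A\<^esub> f (lamR k h g)"

context
  fixes f b assumes gd: "std_data f b"
begin

lemma data_f_hom: "f \<in> hom K A" using gd unfolding std_data_def by auto
lemma data_f_closed[simp]: "k \<in> carrier K \<Longrightarrow> f k \<in> carrier A" using hom_in_carrier[OF data_f_hom] by blast
lemma data_f_mult: "k \<in> carrier K \<Longrightarrow> l \<in> carrier K \<Longrightarrow> f (k \<otimes>\<^bsub>K\<^esub> l) = f k \<otimes>\<^bsub>A\<^esub> f l" using hom_mult[OF data_f_hom] by blast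
lemma data_f_one[simp]: "f \<one>\<^bsub>K\<^esub> = \<one>\<^bsub>A\<^esub>" using hom_one[OF data_f_hom gK.is_group gA.is_group] .
lemma data_f_equivariant: "x \<in> carrier P \<Longrightarrow> k \<in> carrier K \<Longrightarrow> f (aK x k) = aA x (f k)" using gd unfolding std_data_def by auto
lemma data_b_closed[simp]: "x \<in> carrier P \<Longrightarrow> y \<in> carrier P \<Longrightarrow> b x y \<in> carrier A" using gd unfolding std_data_def by auto
lemma data_b_one[simp]: "x \<in> carrier P \<Longrightarrow> b x \<one>\<^bsub>P\<^esub> = \<one>\<^bsub>A\<^esub>" using gd unfolding std_data_def by auto

lemma stdv_closed[simp]: "m \<in> carrier M \<Longrightarrow> h \<in> carrier G \<Longrightarrow> g \<in> carrier G \<Longrightarrow> stdv f b m h g \<in> carrier A"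
  unfolding stdv_def by simp

lemma std_cochain_C2: "std_cochain f b \<in> C2 E A"
  unfolding std_cochain_def C2_def dom2_def by auto

lemma std_cochain_val: "m \<in> carrier M \<Longrightarrow> h \<in> carrier G \<Longrightarrow> g \<in> carrier G \<Longrightarrow> std_cochain f b (m,h,g) = stdv f b m h g"
  unfolding std_cochain_def dom2_def by simp

lemma stdv_g1: "m \<in> carrier M \<Longrightarrow> h \<in> carrier G \<Longrightarrow> stdv f b m h \<one>\<^bsub>G\<^esub> = f (kappa m h)"
  unfolding stdv_def by simp

lemma stdv_m1: "h \<in> carrier G \<Longrightarrow> g \<in> carrier G \<Longrightarrow> stdv f b \<one>\<^bsub>M\<^esub> h g = b (proj h) (proj g) \<otimes>\<^bsub>A\<^esub> inv\<^bsub>A\<^esub> (f (lam h g))"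
  unfolding stdv_def by simp

lemma data_f_lamL: "k \<in> carrier G \<Longrightarrow> h \<in> carrier G \<Longrightarrow> g \<in> carrier G \<Longrightarrow>
   f (lamL k h g) = f (lam k (h \<otimes>\<^bsub>G\<^esub> g)) \<otimes>\<^bsub>A\<^esub> aA (proj k) (f (lam h g))"
  unfolding lamL_def by (simp add: data_f_mult aK_closed data_f_equivariant)
lemma data_f_lamR: "k \<in> carrier G \<Longrightarrow> h \<in> carrier G \<Longrightarrow> g \<in> carrier G \<Longrightarrow>
   f (lamR k h g) = f (lam k h) \<otimes>\<^bsub>A\<^esub> f (lam (k \<otimes>\<^bsub>G\<^esub> h) g)"
  unfolding lamR_def by (simp add: data_f_mult)

lemma stdv_assoc_iff:
  assumes k: "k \<in> carrier G" and h: "h \<in> carrier G" and g: "g \<in> carrier G"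
  shows "stdv f b \<one>\<^bsub>M\<^esub> k h \<otimes>\<^bsub>A\<^esub> stdv f b \<one>\<^bsub>M\<^esub> (k \<otimes>\<^bsub>G\<^esub> h) g
      = stdv f b \<one>\<^bsub>M\<^esub> k (h \<otimes>\<^bsub>G\<^esub> g) \<otimes>\<^bsub>A\<^esub> aA (proj k) (stdv f b \<one>\<^bsub>M\<^esub> h g) \<longleftrightarrow> assoc_cond f b k h g"
proof -
  define x y w where "x = proj k" and "y = proj h" and "w = proj g"
  have xyw: "x \<in> carrier P" "y \<in> carrier P" "w \<in> carrier P" unfolding x_def y_def w_def using k h g by simp_all
  have kh: "k \<otimes>\<^bsub>G\<^esub> h \<in> carrier G" "h \<otimes>\<^bsub>G\<^esub> g \<in> carrier G" using k h g by simp_all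
  define b1 b2 b3 b4 where "b1 = b x y" and "b2 = b (x \<otimes>\<^bsub>P\<^esub> y) w" and "b3 = b x (y \<otimes>\<^bsub>P\<^esub> w)" and "b4 = aA x (b y w)"
  define l1 l2 l3 l4 where "l1 = f (lam k h)" and "l2 = f (lam (k \<otimes>\<^bsub>G\<^esub> h) g)" and "l3 = f (lam k (h \<otimes>\<^bsub>G\<^esub> g))" and "l4 = aA x (f (lam h g))"
  have c: "b1 \<in> carrier A" "b2 \<in> carrier A" "b3 \<in> carrier A" "b4 \<in> carrier A"
      "l1 \<in> carrier A" "l2 \<in> carrier A" "l3 \<in> carrier A" "l4 \<in> carrier A"
    unfolding b1_def b2_def b3_def b4_def l1_def l2_def l3_def l4_def using xyw k h g kh by simp_all
  have L: "stdv f b \<one>\<^bsub>M\<^esub> k h \<otimes>\<^bsub>A\<^esub> stdv f b \<one>\<^bsub>M\<^esub> (k \<otimes>\<^bsub>G\<^esub> h) g = (b1 \<otimes>\<^bsub>A\<^esub> b2) \<otimes>\<^bsub>A\<^esub> inv\<^bsub>A\<^esub> (l1 \<otimes>\<^bsub>A\<^esub> l2)"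
    unfolding stdv_m1[OF k h] stdv_m1[OF kh(1) g] b1_def b2_def l1_def l2_def x_def y_def w_def
    using k h g kh by (simp add: proj_mult gA.m_ac gA.inv_mult)
  have R: "stdv f b \<one>\<^bsub>M\<^esub> k (h \<otimes>\<^bsub>G\<^esub> g) \<otimes>\<^bsub>A\<^esub> aA (proj k) (stdv f b \<one>\<^bsub>M\<^esub> h g) = (b3 \<otimes>\<^bsub>A\<^esub> b4) \<otimes>\<^bsub>A\<^esub> inv\<^bsub>A\<^esub> (l3 \<otimes>\<^bsub>A\<^esub> l4)"
    unfolding stdv_m1[OF k kh(2)] stdv_m1[OF h g] b3_def b4_def l3_def l4_def x_def y_def w_def
    using k h g kh by (simp add: proj_mult gA.m_ac gA.inv_mult aA_mult aA_inv)
  have B: "assoc_cond f b k h g \<longleftrightarrow> (b1 \<otimes>\<^bsub>A\<^esub> b2) \<otimes>\<^bsub>A\<^esub> (l3 \<otimes>\<^bsub>A\<^esub> l4) = (b3 \<otimes>\<^bsub>A\<^esub> b4) \<otimes>\<^bsub>A\<^esub> (l1 \<otimes>\<^bsub>A\<^esub> l2)"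
    unfolding assoc_cond_def data_f_lamL[OF k h g] data_f_lamR[OF k h g] b1_def b2_def b3_def b4_def l1_def l2_def l3_def l4_def x_def y_def w_def
    using k h g kh by (simp add: gA.m_ac)
  show ?thesis unfolding L R B using c by (simp add: gA.frac_eq)
qed

text \<open>By the translation invariance of the defect of \<open>lam\<close>, \<open>assoc_cond\<close> holds everywhere once it
  holds on triples of sections.\<close>
lemma assoc_cond_all:
  assumes base: "\<And>x y w. x \<in> carrier P \<Longrightarrow> y \<in> carrier P \<Longrightarrow> w \<in> carrier P \<Longrightarrow> assoc_cond f b (s0 x) (s0 y) (s0 w)"
    and k: "k \<in> carrier G" and h: "h \<in> carrier G" and g: "g \<in> carrier G"
  shows "assoc_cond f b k h g"
proof -
  define x y w where "x = proj k" and "y = proj h" and "w = proj g"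
  have xyw: "x \<in> carrier P" "y \<in> carrier P" "w \<in> carrier P" unfolding x_def y_def w_def using k h g by simp_all
  define s t r where "s = s0 x" and "t = s0 y" and "r = s0 w"
  have str: "s \<in> carrier G" "t \<in> carrier G" "r \<in> carrier G" unfolding s_def t_def r_def using xyw by simp_all
  define \<beta>1 \<beta>2 where "\<beta>1 = b x y \<otimes>\<^bsub>A\<^esub> b (x \<otimes>\<^bsub>P\<^esub> y) w" and "\<beta>2 = b x (y \<otimes>\<^bsub>P\<^esub> w) \<otimes>\<^bsub>A\<^esub> aA x (b y w)"
  have bc: "\<beta>1 \<in> carrier A" "\<beta>2 \<in> carrier A" unfolding \<beta>1_def \<beta>2_def using xyw by simp_all
  have B0: "\<beta>1 \<otimes>\<^bsub>A\<^esub> f (lamL s t r) = \<beta>2 \<otimes>\<^bsub>A\<^esub> f (lamR s t r)"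
    using base[OF xyw] unfolding assoc_cond_def \<beta>1_def \<beta>2_def s_def t_def r_def using xyw by simp
  have PQ: "f (lamL k h g) \<otimes>\<^bsub>A\<^esub> f (lamR s t r) = f (lamR k h g) \<otimes>\<^bsub>A\<^esub> f (lamL s t r)"
    using lam_rel_sections[OF k h g] unfolding s_def t_def r_def x_def y_def w_def
    by (metis data_f_mult lamL_closed lamR_closed k h g s0_closed proj_closed)
  note cl = bc lamL_closed[OF k h g] lamR_closed[OF k h g] lamL_closed[OF str] lamR_closed[OF str]
  have "f (lamR s t r) \<otimes>\<^bsub>A\<^esub> (\<beta>1 \<otimes>\<^bsub>A\<^esub> f (lamL k h g)) = \<beta>1 \<otimes>\<^bsub>A\<^esub> (f (lamL k h g) \<otimes>\<^bsub>A\<^esub> f (lamR s t r))"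
    using cl by (simp add: gA.m_ac)
  also have "\<dots> = \<beta>1 \<otimes>\<^bsub>A\<^esub> (f (lamR k h g) \<otimes>\<^bsub>A\<^esub> f (lamL s t r))" unfolding PQ ..
  also have "\<dots> = (\<beta>1 \<otimes>\<^bsub>A\<^esub> f (lamL s t r)) \<otimes>\<^bsub>A\<^esub> f (lamR k h g)" using cl by (simp add: gA.m_ac)
  also have "\<dots> = (\<beta>2 \<otimes>\<^bsub>A\<^esub> f (lamR s t r)) \<otimes>\<^bsub>A\<^esub> f (lamR k h g)" unfolding B0 ..
  also have "\<dots> = f (lamR s t r) \<otimes>\<^bsub>A\<^esub> (\<beta>2 \<otimes>\<^bsub>A\<^esub> f (lamR k h g))" using cl by (simp add: gA.m_ac)
  finally have Z: "f (lamR s t r) \<otimes>\<^bsub>A\<^esub> (\<beta>1 \<otimes>\<^bsub>A\<^esub> f (lamL k h g)) = f (lamR s t r) \<otimes>\<^bsub>A\<^esub> (\<beta>2 \<otimes>\<^bsub>A\<^esub> f (lamR k h g))" .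
  have "\<beta>1 \<otimes>\<^bsub>A\<^esub> f (lamL k h g) = \<beta>2 \<otimes>\<^bsub>A\<^esub> f (lamR k h g)"
    by (rule gA.l_cancel[OF Z]) (use cl in simp_all)
  then show ?thesis unfolding assoc_cond_def \<beta>1_def \<beta>2_def x_def y_def w_def using xyw by (simp add: gA.m_assoc)
qed

text \<open>The standard cochain of a datum satisfying \<open>assoc_cond\<close> on sections is a cocycle; the other
  reduced identities hold by the identities of \<open>kappa\<close> and \<open>lam\<close>.\<close>
lemma std_cochain_Z2:
  assumes base: "\<And>x y w. x \<in> carrier P \<Longrightarrow> y \<in> carrier P \<Longrightarrow> w \<in> carrier P \<Longrightarrow> assoc_cond f b (s0 x) (s0 y) (s0 w)"
  shows "std_cochain f b \<in> Z2 E A aA"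
proof (rule Z2_from_reduced[OF std_cochain_C2])
  fix m h g assume a: "m \<in> carrier M" "h \<in> carrier G" "g \<in> carrier G"
  show "std_cochain f b (m, h, g) = std_cochain f b (m, h, \<one>\<^bsub>G\<^esub>) \<otimes>\<^bsub>A\<^esub> std_cochain f b (\<one>\<^bsub>M\<^esub>, h, g)"
    using a by (simp add: std_cochain_val stdv_g1 stdv_m1) (simp add: stdv_def gA.m_assoc)
next
  fix p n k assume a: "p \<in> carrier M" "n \<in> carrier M" "k \<in> carrier G"
  show "std_cochain f b (p \<otimes>\<^bsub>M\<^esub> n, k, \<one>\<^bsub>G\<^esub>) = std_cochain f b (p, mu n \<otimes>\<^bsub>G\<^esub> k, \<one>\<^bsub>G\<^esub>) \<otimes>\<^bsub>A\<^esub> std_cochain f b (n, k, \<one>\<^bsub>G\<^esub>)"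
    using a by (simp add: std_cochain_val stdv_g1 kappa_mult data_f_mult)
next
  fix k m h assume a: "k \<in> carrier G" "m \<in> carrier M" "h \<in> carrier G"
  have c: "f (lam k (mu m \<otimes>\<^bsub>G\<^esub> h)) \<in> carrier A" "aA (proj k) (f (kappa m h)) \<in> carrier A"
     "f (kappa (act k m) (k \<otimes>\<^bsub>G\<^esub> h)) \<in> carrier A" "f (lam k h) \<in> carrier A" using a by simp_all
  have e: "f (lam k (mu m \<otimes>\<^bsub>G\<^esub> h)) \<otimes>\<^bsub>A\<^esub> aA (proj k) (f (kappa m h)) = f (kappa (act k m) (k \<otimes>\<^bsub>G\<^esub> h)) \<otimes>\<^bsub>A\<^esub> f (lam k h)"
    using arg_cong[OF lam_mu_right[OF a(2,1,3)], of f] a by (simp add: data_f_mult aK_closed data_f_equivariant)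
  have s: "inv\<^bsub>A\<^esub> f (lam k (mu m \<otimes>\<^bsub>G\<^esub> h)) \<otimes>\<^bsub>A\<^esub> f (kappa (act k m) (k \<otimes>\<^bsub>G\<^esub> h)) = inv\<^bsub>A\<^esub> f (lam k h) \<otimes>\<^bsub>A\<^esub> aA (proj k) (f (kappa m h))"
    by (rule gA.swap_inv[OF c e])
  show "std_cochain f b (\<one>\<^bsub>M\<^esub>, k, mu m \<otimes>\<^bsub>G\<^esub> h) \<otimes>\<^bsub>A\<^esub> std_cochain f b (act k m, k \<otimes>\<^bsub>G\<^esub> h, \<one>\<^bsub>G\<^esub>)
           = std_cochain f b (\<one>\<^bsub>M\<^esub>, k, h) \<otimes>\<^bsub>A\<^esub> aA (proj k) (std_cochain f b (m, h, \<one>\<^bsub>G\<^esub>))"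
    using a s c by (simp add: std_cochain_val stdv_g1 stdv_m1 gA.m_assoc)
next
  fix n k h assume a: "n \<in> carrier M" "k \<in> carrier G" "h \<in> carrier G"
  have c: "f (lam (mu n \<otimes>\<^bsub>G\<^esub> k) h) \<in> carrier A" "f (kappa n k) \<in> carrier A"
     "f (kappa n (k \<otimes>\<^bsub>G\<^esub> h)) \<in> carrier A" "f (lam k h) \<in> carrier A" using a by simp_all
  have e: "f (lam (mu n \<otimes>\<^bsub>G\<^esub> k) h) \<otimes>\<^bsub>A\<^esub> f (kappa n k) = f (kappa n (k \<otimes>\<^bsub>G\<^esub> h)) \<otimes>\<^bsub>A\<^esub> f (lam k h)"
    using arg_cong[OF lam_mu_left[OF a], of f] a by (simp add: data_f_mult)
  have s: "inv\<^bsub>A\<^esub> f (lam (mu n \<otimes>\<^bsub>G\<^esub> k) h) \<otimes>\<^bsub>A\<^esub> f (kappa n (k \<otimes>\<^bsub>G\<^esub> h)) = inv\<^bsub>A\<^esub> f (lam k h) \<otimes>\<^bsub>A\<^esub> f (kappa n k)"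
    by (rule gA.swap_inv[OF c e])
  show "std_cochain f b (\<one>\<^bsub>M\<^esub>, mu n \<otimes>\<^bsub>G\<^esub> k, h) \<otimes>\<^bsub>A\<^esub> std_cochain f b (n, k \<otimes>\<^bsub>G\<^esub> h, \<one>\<^bsub>G\<^esub>)
           = std_cochain f b (n, k, \<one>\<^bsub>G\<^esub>) \<otimes>\<^bsub>A\<^esub> std_cochain f b (\<one>\<^bsub>M\<^esub>, k, h)"
  proof -
    have "std_cochain f b (\<one>\<^bsub>M\<^esub>, mu n \<otimes>\<^bsub>G\<^esub> k, h) \<otimes>\<^bsub>A\<^esub> std_cochain f b (n, k \<otimes>\<^bsub>G\<^esub> h, \<one>\<^bsub>G\<^esub>)
       = b (proj k) (proj h) \<otimes>\<^bsub>A\<^esub> (inv\<^bsub>A\<^esub> f (lam (mu n \<otimes>\<^bsub>G\<^esub> k) h) \<otimes>\<^bsub>A\<^esub> f (kappa n (k \<otimes>\<^bsub>G\<^esub> h)))"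
      using a c by (simp add: std_cochain_val stdv_g1 stdv_m1 gA.m_assoc)
    also have "\<dots> = b (proj k) (proj h) \<otimes>\<^bsub>A\<^esub> (inv\<^bsub>A\<^esub> f (lam k h) \<otimes>\<^bsub>A\<^esub> f (kappa n k))" unfolding s ..
    also have "\<dots> = std_cochain f b (n, k, \<one>\<^bsub>G\<^esub>) \<otimes>\<^bsub>A\<^esub> std_cochain f b (\<one>\<^bsub>M\<^esub>, k, h)"
      using a c by (simp add: std_cochain_val stdv_g1 stdv_m1 gA.m_ac)
    finally show ?thesis .
  qed
next
  fix k h g assume a: "k \<in> carrier G" "h \<in> carrier G" "g \<in> carrier G"
  have "assoc_cond f b k h g" by (rule assoc_cond_all[OF base a])
  then show "std_cochain f b (\<one>\<^bsub>M\<^esub>, k, h) \<otimes>\<^bsub>A\<^esub> std_cochain f b (\<one>\<^bsub>M\<^esub>, k \<otimes>\<^bsub>G\<^esub> h, g)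
           = std_cochain f b (\<one>\<^bsub>M\<^esub>, k, h \<otimes>\<^bsub>G\<^esub> g) \<otimes>\<^bsub>A\<^esub> aA (proj k) (std_cochain f b (\<one>\<^bsub>M\<^esub>, h, g))"
    using stdv_assoc_iff[OF a] a by (simp add: std_cochain_val)
qed

lemma std_cochain_pt: "std_cochain f b (\<one>\<^bsub>M\<^esub>, \<one>\<^bsub>G\<^esub>, \<one>\<^bsub>G\<^esub>) = \<one>\<^bsub>A\<^esub>"
  by (simp add: std_cochain_val stdv_g1)

lemma std_cochain_vanish: "y \<in> mu ` carrier M \<Longrightarrow> x \<in> carrier P \<Longrightarrow> std_cochain f b (s1 y, s0 x, \<one>\<^bsub>G\<^esub>) = \<one>\<^bsub>A\<^esub>"
  by (simp add: std_cochain_val stdv_g1 s1_closed kappa_s1)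

end

subsection \<open>Classification of standard cocycles by standard data\<close>

text \<open>The datum read off from a cochain, and the normalization condition characterizing
  standard cocycles (see \<open>std_iff\<close> below).\<close>
definition zK :: "('m \<times> 'g \<times> 'g \<Rightarrow> 'v) \<Rightarrow> 'k \<Rightarrow> 'v" where
  "zK z k = z (iota k, \<one>\<^bsub>G\<^esub>, \<one>\<^bsub>G\<^esub>)"
definition zP :: "('m \<times> 'g \<times> 'g \<Rightarrow> 'v) \<Rightarrow> 'p \<Rightarrow> 'p \<Rightarrow> 'v" where
  "zP z x y = z (\<one>\<^bsub>M\<^esub>, s0 x, s0 y)"
definition vanishes_on_sections :: "('m \<times> 'g \<times> 'g \<Rightarrow> 'v) \<Rightarrow> bool" where
  "vanishes_on_sections z \<longleftrightarrow> (\<forall>y\<in>mu ` carrier M. \<forall>x\<in>carrier P. z (s1 y, s0 x, \<one>\<^bsub>G\<^esub>) = \<one>\<^bsub>A\<^esub>)"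

lemma ncomp_vanish: "vanishes_on_sections z \<Longrightarrow> h \<in> carrier G \<Longrightarrow> x \<in> carrier P \<Longrightarrow> z (ncomp h, s0 x, \<one>\<^bsub>G\<^esub>) = \<one>\<^bsub>A\<^esub>"
  unfolding vanishes_on_sections_def ncomp_def using ncomp_arg by blast

context
  fixes z assumes z: "z \<in> Z2 E A aA" and pt: "z (\<one>\<^bsub>M\<^esub>, \<one>\<^bsub>G\<^esub>, \<one>\<^bsub>G\<^esub>) = \<one>\<^bsub>A\<^esub>"
begin

lemma Z2_central_first:
  assumes c: "c \<in> carrier M" "mu c = \<one>\<^bsub>G\<^esub>" and g: "g \<in> carrier G"
  shows "z (c, g, \<one>\<^bsub>G\<^esub>) = z (c, \<one>\<^bsub>G\<^esub>, \<one>\<^bsub>G\<^esub>)"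
  using Z2_mu_relation[OF z pt c(1), of "\<one>\<^bsub>G\<^esub>" g] c g Z2_one_one[OF z pt g]
    Z2_closed[OF z pt, of c g "\<one>\<^bsub>G\<^esub>"] Z2_closed[OF z pt, of c "\<one>\<^bsub>G\<^esub>" "\<one>\<^bsub>G\<^esub>"]
  by simp

lemma zK_closed: "k \<in> carrier K \<Longrightarrow> zK z k \<in> carrier A"
  unfolding zK_def using Z2_closed[OF z pt] by simp

lemma zK_hom: "zK z \<in> hom K A"
proof (rule homI)
  fix k l assume "k \<in> carrier K" "l \<in> carrier K"
  then show "zK z (k \<otimes>\<^bsub>K\<^esub> l) = zK z k \<otimes>\<^bsub>A\<^esub> zK z l"
    unfolding zK_def using Z2_mult_first[OF z pt, of "iota k" "iota l" "\<one>\<^bsub>G\<^esub>"] by (simp add: iota_mult)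
qed (rule zK_closed)

lemma zK_equivariant:
  assumes x: "x \<in> carrier P" and k: "k \<in> carrier K"
  shows "zK z (aK x k) = aA x (zK z k)"
proof -
  have "z (\<one>\<^bsub>M\<^esub>, s0 x, mu (iota k) \<otimes>\<^bsub>G\<^esub> \<one>\<^bsub>G\<^esub>) \<otimes>\<^bsub>A\<^esub> z (act (s0 x) (iota k), s0 x \<otimes>\<^bsub>G\<^esub> \<one>\<^bsub>G\<^esub>, \<one>\<^bsub>G\<^esub>)
         = z (\<one>\<^bsub>M\<^esub>, s0 x, \<one>\<^bsub>G\<^esub>) \<otimes>\<^bsub>A\<^esub> aA (proj (s0 x)) (z (iota k, \<one>\<^bsub>G\<^esub>, \<one>\<^bsub>G\<^esub>))"
    using Z2_act_relation[OF z pt, of "s0 x" "iota k" "\<one>\<^bsub>G\<^esub>"] x k by simp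
  then have "z (iota (aK x k), s0 x, \<one>\<^bsub>G\<^esub>) = aA x (z (iota k, \<one>\<^bsub>G\<^esub>, \<one>\<^bsub>G\<^esub>))"
    using x k Z2_one_first[OF z pt, of "s0 x"] Z2_closed[OF z pt, of "iota (aK x k)" "s0 x" "\<one>\<^bsub>G\<^esub>"]
      Z2_closed[OF z pt, of "iota k" "\<one>\<^bsub>G\<^esub>" "\<one>\<^bsub>G\<^esub>"]
    by (simp add: act_iota aK_closed)
  then show ?thesis unfolding zK_def using Z2_central_first[of "iota (aK x k)" "s0 x"] x k by (simp add: aK_closed)
qed

lemma std_data_of_cocycle: "std_data (zK z) (zP z)"
  unfolding std_data_def using zK_hom zK_equivariant Z2_closed[OF z pt] Z2_one_first[OF z pt]
  by (auto simp: zP_def)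

context
  assumes sp: "vanishes_on_sections z"
begin

lemma std_cocycle_g1:
  assumes m: "m \<in> carrier M" and h: "h \<in> carrier G"
  shows "z (m, h, \<one>\<^bsub>G\<^esub>) = zK z (kappa m h)"
proof -
  define y where "y = proj h"
  have y: "y \<in> carrier P" unfolding y_def using h by simp
  have mh: "mu m \<otimes>\<^bsub>G\<^esub> h \<in> carrier G" using m h by simp
  note cl = Z2_closed[OF z pt]
  have "z (m \<otimes>\<^bsub>M\<^esub> ncomp h, s0 y, \<one>\<^bsub>G\<^esub>) = z (m, mu (ncomp h) \<otimes>\<^bsub>G\<^esub> s0 y, \<one>\<^bsub>G\<^esub>) \<otimes>\<^bsub>A\<^esub> z (ncomp h, s0 y, \<one>\<^bsub>G\<^esub>)"
    using Z2_mult_first[OF z pt, of m "ncomp h" "s0 y"] m h y by simp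
  also have "\<dots> = z (m, h, \<one>\<^bsub>G\<^esub>)" unfolding y_def using normal_form[OF h] ncomp_vanish[OF sp h] m h cl by simp
  finally have 1: "z (m \<otimes>\<^bsub>M\<^esub> ncomp h, s0 y, \<one>\<^bsub>G\<^esub>) = z (m, h, \<one>\<^bsub>G\<^esub>)" .
  have "z (defect m h \<otimes>\<^bsub>M\<^esub> ncomp (mu m \<otimes>\<^bsub>G\<^esub> h), s0 y, \<one>\<^bsub>G\<^esub>)
      = z (defect m h, mu (ncomp (mu m \<otimes>\<^bsub>G\<^esub> h)) \<otimes>\<^bsub>G\<^esub> s0 y, \<one>\<^bsub>G\<^esub>) \<otimes>\<^bsub>A\<^esub> z (ncomp (mu m \<otimes>\<^bsub>G\<^esub> h), s0 y, \<one>\<^bsub>G\<^esub>)"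
    using Z2_mult_first[OF z pt, of "defect m h" "ncomp (mu m \<otimes>\<^bsub>G\<^esub> h)" "s0 y"] m h y by simp
  also have "\<dots> = z (defect m h, mu m \<otimes>\<^bsub>G\<^esub> h, \<one>\<^bsub>G\<^esub>)"
    using normal_form[OF mh] ncomp_vanish[OF sp mh y] m h cl unfolding y_def by simp
  also have "\<dots> = z (defect m h, \<one>\<^bsub>G\<^esub>, \<one>\<^bsub>G\<^esub>)" using Z2_central_first[of "defect m h" "mu m \<otimes>\<^bsub>G\<^esub> h"] m h by simp
  also have "\<dots> = zK z (kappa m h)" unfolding zK_def kappa_def using iota_iota_inv[of "defect m h"] m h by simp
  finally show ?thesis using 1 defect_eq[OF m h] by simp
qed

lemma std_cocycle_m1:
  assumes h: "h \<in> carrier G" and g: "g \<in> carrier G"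
  shows "z (\<one>\<^bsub>M\<^esub>, h, g) = zP z (proj h) (proj g) \<otimes>\<^bsub>A\<^esub> inv\<^bsub>A\<^esub> zK z (lam h g)"
proof -
  define x y where "x = proj h" and "y = proj g"
  have xy: "x \<in> carrier P" "y \<in> carrier P" unfolding x_def y_def using h g by simp_all
  have sx: "s0 x \<in> carrier G" "s0 y \<in> carrier G" "s0 x \<otimes>\<^bsub>G\<^esub> g \<in> carrier G" "s0 x \<otimes>\<^bsub>G\<^esub> s0 y \<in> carrier G"
    using xy g by simp_all
  note cl = Z2_closed[OF z pt]
  have 1: "z (\<one>\<^bsub>M\<^esub>, h, g) \<otimes>\<^bsub>A\<^esub> z (ncomp h, s0 x \<otimes>\<^bsub>G\<^esub> g, \<one>\<^bsub>G\<^esub>) = z (\<one>\<^bsub>M\<^esub>, s0 x, g)"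
    using Z2_mu_relation[OF z pt, of "ncomp h" "s0 x" g] normal_form[OF h] ncomp_vanish[OF sp h xy(1)] h g xy cl
    unfolding x_def by simp
  have 2: "z (\<one>\<^bsub>M\<^esub>, s0 x, g) \<otimes>\<^bsub>A\<^esub> z (act (s0 x) (ncomp g), s0 x \<otimes>\<^bsub>G\<^esub> s0 y, \<one>\<^bsub>G\<^esub>) = z (\<one>\<^bsub>M\<^esub>, s0 x, s0 y)"
    using Z2_act_relation[OF z pt, of "s0 x" "ncomp g" "s0 y"] normal_form[OF g] ncomp_vanish[OF sp g xy(2)] g xy cl
    unfolding y_def by simp
  have "z (\<one>\<^bsub>M\<^esub>, h, g) \<otimes>\<^bsub>A\<^esub> zK z (lam h g)
     = z (\<one>\<^bsub>M\<^esub>, h, g) \<otimes>\<^bsub>A\<^esub> z (ncomp h, s0 x \<otimes>\<^bsub>G\<^esub> g, \<one>\<^bsub>G\<^esub>) \<otimes>\<^bsub>A\<^esub> z (act (s0 x) (ncomp g), s0 x \<otimes>\<^bsub>G\<^esub> s0 y, \<one>\<^bsub>G\<^esub>)"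
    unfolding lam_def x_def[symmetric] y_def[symmetric]
    using std_cocycle_g1 h g sx xy cl zK_hom zK_closed by (simp add: hom_mult gA.m_ac)
  also have "\<dots> = zP z x y" unfolding 1 2 zP_def ..
  finally show ?thesis unfolding x_def y_def
    using gA.inv_solve_right[of "z (\<one>\<^bsub>M\<^esub>, h, g)" "zP z (proj h) (proj g)" "zK z (lam h g)"]
      cl h g zK_closed std_data_of_cocycle unfolding std_data_def by simp
qed

lemma std_cocycle_formula:
  assumes "m \<in> carrier M" "h \<in> carrier G" "g \<in> carrier G"
  shows "z (m, h, g) = stdv (zK z) (zP z) m h g"
  unfolding stdv_def
  using Z2_split[OF z pt assms] std_cocycle_g1[OF assms(1,2)] std_cocycle_m1[OF assms(2,3)] zK_closed assms
    std_data_of_cocycle unfolding std_data_def by (simp add: gA.m_assoc)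

end

end

subsection \<open>Standardization\<close>

lemma sigma_val: "g \<in> carrier G \<Longrightarrow> sigma_std E s1 s0 z g = z (ncomp g, s0 (proj g), \<one>\<^bsub>G\<^esub>)"
  unfolding sigma_std_def ncomp_def by simp

lemma d1_val: "m \<in> carrier M \<Longrightarrow> h \<in> carrier G \<Longrightarrow> g \<in> carrier G \<Longrightarrow>
  d1 E A aA c (m, h, g) = c (mu m \<otimes>\<^bsub>G\<^esub> h) \<otimes>\<^bsub>A\<^esub> inv\<^bsub>A\<^esub> c (h \<otimes>\<^bsub>G\<^esub> g) \<otimes>\<^bsub>A\<^esub> aA (proj h) (c g)"
  unfolding d1_def dom2_def by simp

lemma C2_ext: "z \<in> C2 E A \<Longrightarrow> restrict z (dom2 E) = z"
  unfolding C2_def by (simp add: PiE_iff extensional_restrict)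

lemma std_iff:
  assumes z: "z \<in> Z2 E A aA" and pt: "z (\<one>\<^bsub>M\<^esub>, \<one>\<^bsub>G\<^esub>, \<one>\<^bsub>G\<^esub>) = \<one>\<^bsub>A\<^esub>"
  shows "std E A aA s1 s0 z = z \<longleftrightarrow> vanishes_on_sections z"
proof
  note cl = Z2_closed[OF z pt]
  assume st: "std E A aA s1 s0 z = z"
  have d0: "\<And>m h g. m \<in> carrier M \<Longrightarrow> h \<in> carrier G \<Longrightarrow> g \<in> carrier G \<Longrightarrow> d1 E A aA (sigma_std E s1 s0 z) (m,h,g) = \<one>\<^bsub>A\<^esub>"
  proof -
    fix m h g assume a: "m \<in> carrier M" "h \<in> carrier G" "g \<in> carrier G"
    have "std E A aA s1 s0 z (m,h,g) = z (m,h,g)" using st by simp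
    then have e: "z (m,h,g) \<otimes>\<^bsub>A\<^esub> inv\<^bsub>A\<^esub> (d1 E A aA (sigma_std E s1 s0 z) (m,h,g)) = z (m,h,g)"
      unfolding std_def dom2_def using a by simp
    have sc: "\<And>g. g \<in> carrier G \<Longrightarrow> sigma_std E s1 s0 z g \<in> carrier A" using cl by (simp add: sigma_val)
    have "d1 E A aA (sigma_std E s1 s0 z) (m,h,g) \<in> carrier A" using a sc by (simp add: d1_val)
    then show "d1 E A aA (sigma_std E s1 s0 z) (m,h,g) = \<one>\<^bsub>A\<^esub>" using e cl a by simp
  qed
  show "vanishes_on_sections z" unfolding vanishes_on_sections_def
  proof (intro ballI)
    fix y x assume y: "y \<in> mu ` carrier M" and x: "x \<in> carrier P"
    then obtain m where m: "m \<in> carrier M" "y = mu m" by auto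
    have s1: "sigma_std E s1 s0 z \<one>\<^bsub>G\<^esub> = \<one>\<^bsub>A\<^esub>" using pt by (simp add: sigma_val)
    have s2: "sigma_std E s1 s0 z (s0 x) = \<one>\<^bsub>A\<^esub>" using x Z2_one_first[OF z pt, of "s0 x"] by (simp add: sigma_val)
    have "sigma_std E s1 s0 z (mu m \<otimes>\<^bsub>G\<^esub> s0 x) \<in> carrier A" using m x cl by (simp add: sigma_val)
    then have "sigma_std E s1 s0 z (mu m \<otimes>\<^bsub>G\<^esub> s0 x) = \<one>\<^bsub>A\<^esub>" using d0[of m "s0 x" "\<one>\<^bsub>G\<^esub>"] m x s1 s2 by (simp add: d1_val)
    then show "z (s1 y, s0 x, \<one>\<^bsub>G\<^esub>) = \<one>\<^bsub>A\<^esub>" using m x y by (simp add: sigma_val ncomp_s1)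
  qed
next
  note zc = Z2_C2[OF z pt]
  assume sp: "vanishes_on_sections z"
  have s: "\<And>g. g \<in> carrier G \<Longrightarrow> sigma_std E s1 s0 z g = \<one>\<^bsub>A\<^esub>" using ncomp_vanish[OF sp] by (simp add: sigma_val)
  have "std E A aA s1 s0 z = restrict z (dom2 E)"
    unfolding std_def dom2_def
    by (rule restrict_ext) (auto simp: d1_val s C2_closed[OF zc])
  then show "std E A aA s1 s0 z = z" using C2_ext[OF zc] by simp
qed

lemma Z2st_char: "z \<in> Z2st E A aA s1 s0 \<longleftrightarrow> z \<in> Z2 E A aA \<and> z (\<one>\<^bsub>M\<^esub>, \<one>\<^bsub>G\<^esub>, \<one>\<^bsub>G\<^esub>) = \<one>\<^bsub>A\<^esub> \<and> vanishes_on_sections z"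
  unfolding Z2st_def C2pt_def using std_iff unfolding Z2_def by blast

lemma Z2st_C2: "z \<in> Z2st E A aA s1 s0 \<Longrightarrow> z \<in> C2 E A"
  unfolding Z2st_def Z2_def by auto

lemma Z2_mult:
  assumes a: "a \<in> Z2 E A aA" and b: "b \<in> Z2 E A aA"
  shows "restrict (\<lambda>x. a x \<otimes>\<^bsub>A\<^esub> b x) (dom2 E) \<in> Z2 E A aA" (is "?c \<in> _")
proof -
  have ac: "a \<in> C2 E A" and bc: "b \<in> C2 E A" using a b unfolding Z2_def by auto
  note cla = C2_closed[OF ac] and clb = C2_closed[OF bc]
  have cv: "\<And>m h g. m \<in> carrier M \<Longrightarrow> h \<in> carrier G \<Longrightarrow> g \<in> carrier G \<Longrightarrow> ?c (m,h,g) = a (m,h,g) \<otimes>\<^bsub>A\<^esub> b (m,h,g)"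
    unfolding dom2_def by simp
  have cC2: "?c \<in> C2 E A" unfolding C2_def dom2_def using cla clb by auto
  show ?thesis
  proof (rule Z2I[OF cC2])
    fix p n k m h g
    assume p: "p \<in> carrier M" and n: "n \<in> carrier M" and k: "k \<in> carrier G"
      and m: "m \<in> carrier M" and h: "h \<in> carrier G" and g: "g \<in> carrier G"
    have g1: "mu n \<otimes>\<^bsub>G\<^esub> k \<in> carrier G" "mu m \<otimes>\<^bsub>G\<^esub> h \<in> carrier G" "n \<otimes>\<^bsub>M\<^esub> act k m \<in> carrier M"
      "k \<otimes>\<^bsub>G\<^esub> h \<in> carrier G" "p \<otimes>\<^bsub>M\<^esub> n \<in> carrier M" "h \<otimes>\<^bsub>G\<^esub> g \<in> carrier G" using p n k m h g by simp_all
    define a1 a2 a3 a4 where "a1 = a (p, mu n \<otimes>\<^bsub>G\<^esub> k, mu m \<otimes>\<^bsub>G\<^esub> h)" and "a2 = a (n \<otimes>\<^bsub>M\<^esub> act k m, k \<otimes>\<^bsub>G\<^esub> h, g)"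
      and "a3 = a (p \<otimes>\<^bsub>M\<^esub> n, k, h \<otimes>\<^bsub>G\<^esub> g)" and "a4 = a (m, h, g)"
    define b1 b2 b3 b4 where "b1 = b (p, mu n \<otimes>\<^bsub>G\<^esub> k, mu m \<otimes>\<^bsub>G\<^esub> h)" and "b2 = b (n \<otimes>\<^bsub>M\<^esub> act k m, k \<otimes>\<^bsub>G\<^esub> h, g)"
      and "b3 = b (p \<otimes>\<^bsub>M\<^esub> n, k, h \<otimes>\<^bsub>G\<^esub> g)" and "b4 = b (m, h, g)"
    have cl: "a1 \<in> carrier A" "a2 \<in> carrier A" "a3 \<in> carrier A" "a4 \<in> carrier A"
      "b1 \<in> carrier A" "b2 \<in> carrier A" "b3 \<in> carrier A" "b4 \<in> carrier A"
      unfolding a1_def a2_def a3_def a4_def b1_def b2_def b3_def b4_def using cla clb p n k m h g g1 by simp_all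
    have ea: "a1 \<otimes>\<^bsub>A\<^esub> a2 = a3 \<otimes>\<^bsub>A\<^esub> aA (proj k) a4"
      unfolding a1_def a2_def a3_def a4_def by (rule Z2_identity[OF a p n k m h g])
    have eb: "b1 \<otimes>\<^bsub>A\<^esub> b2 = b3 \<otimes>\<^bsub>A\<^esub> aA (proj k) b4"
      unfolding b1_def b2_def b3_def b4_def by (rule Z2_identity[OF b p n k m h g])
    have "(a1 \<otimes>\<^bsub>A\<^esub> b1) \<otimes>\<^bsub>A\<^esub> (a2 \<otimes>\<^bsub>A\<^esub> b2) = (a1 \<otimes>\<^bsub>A\<^esub> a2) \<otimes>\<^bsub>A\<^esub> (b1 \<otimes>\<^bsub>A\<^esub> b2)" using cl by (simp add: gA.m_ac)
    also have "\<dots> = (a3 \<otimes>\<^bsub>A\<^esub> aA (proj k) a4) \<otimes>\<^bsub>A\<^esub> (b3 \<otimes>\<^bsub>A\<^esub> aA (proj k) b4)" unfolding ea eb ..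
    also have "\<dots> = (a3 \<otimes>\<^bsub>A\<^esub> b3) \<otimes>\<^bsub>A\<^esub> aA (proj k) (a4 \<otimes>\<^bsub>A\<^esub> b4)" using cl k by (simp add: aA_mult gA.m_ac)
    finally show "?c (p, mu n \<otimes>\<^bsub>G\<^esub> k, mu m \<otimes>\<^bsub>G\<^esub> h) \<otimes>\<^bsub>A\<^esub> ?c (n \<otimes>\<^bsub>M\<^esub> act k m, k \<otimes>\<^bsub>G\<^esub> h, g)
       = ?c (p \<otimes>\<^bsub>M\<^esub> n, k, h \<otimes>\<^bsub>G\<^esub> g) \<otimes>\<^bsub>A\<^esub> aA (proj k) (?c (m, h, g))"
      unfolding cv[OF p g1(1) g1(2)] cv[OF g1(3) g1(4) g] cv[OF g1(5) k g1(6)] cv[OF m h g]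
      unfolding a1_def a2_def a3_def a4_def b1_def b2_def b3_def b4_def .
  qed
qed

lemma Z2st_mult:
  assumes a: "a \<in> Z2st E A aA s1 s0" and b: "b \<in> Z2st E A aA s1 s0"
  shows "restrict (\<lambda>x. a x \<otimes>\<^bsub>A\<^esub> b x) (dom2 E) \<in> Z2st E A aA s1 s0"
proof -
  have "a \<in> Z2 E A aA" "a (\<one>\<^bsub>M\<^esub>, \<one>\<^bsub>G\<^esub>, \<one>\<^bsub>G\<^esub>) = \<one>\<^bsub>A\<^esub>" "vanishes_on_sections a"
    and "b \<in> Z2 E A aA" "b (\<one>\<^bsub>M\<^esub>, \<one>\<^bsub>G\<^esub>, \<one>\<^bsub>G\<^esub>) = \<one>\<^bsub>A\<^esub>" "vanishes_on_sections b"
    using a b Z2st_char by auto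
  then show ?thesis using Z2_mult Z2st_char unfolding vanishes_on_sections_def dom2_def
    by (auto simp: s1_closed)
qed

lemma C1_closed: "c \<in> C1 E A \<Longrightarrow> g \<in> carrier G \<Longrightarrow> c g \<in> carrier A"
  unfolding C1_def by auto

lemma d1_C2: "c \<in> C1 E A \<Longrightarrow> d1 E A aA c \<in> C2 E A"
  unfolding d1_def C2_def dom2_def by (auto simp: C1_closed)

lemma d1_Z2:
  assumes c: "c \<in> C1 E A" shows "d1 E A aA c \<in> Z2 E A aA"
proof (rule Z2I[OF d1_C2[OF c]])
  note cc = C1_closed[OF c]
  fix p n k m h g
  assume p: "p \<in> carrier M" and n: "n \<in> carrier M" and k: "k \<in> carrier G"
    and m: "m \<in> carrier M" and h: "h \<in> carrier G" and g: "g \<in> carrier G"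
  define x y where "x = proj k" and "y = proj h"
  have xy: "x \<in> carrier P" "y \<in> carrier P" unfolding x_def y_def using k h by simp_all
  have e1: "mu p \<otimes>\<^bsub>G\<^esub> (mu n \<otimes>\<^bsub>G\<^esub> k) = mu (p \<otimes>\<^bsub>M\<^esub> n) \<otimes>\<^bsub>G\<^esub> k" using p n k by (simp add: mu_mult gG.m_assoc)
  have e2: "mu (n \<otimes>\<^bsub>M\<^esub> act k m) \<otimes>\<^bsub>G\<^esub> (k \<otimes>\<^bsub>G\<^esub> h) = mu n \<otimes>\<^bsub>G\<^esub> k \<otimes>\<^bsub>G\<^esub> (mu m \<otimes>\<^bsub>G\<^esub> h)"
    using n k m h by (simp add: mu_mult mu_act gG.m_assoc gG.cancel_l1)
  have e3: "k \<otimes>\<^bsub>G\<^esub> h \<otimes>\<^bsub>G\<^esub> g = k \<otimes>\<^bsub>G\<^esub> (h \<otimes>\<^bsub>G\<^esub> g)" using k h g by (simp add: gG.m_assoc)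
  have e4: "proj (k \<otimes>\<^bsub>G\<^esub> h) = x \<otimes>\<^bsub>P\<^esub> y" unfolding x_def y_def using k h by (simp add: proj_mult)
  define C1v C2v C3v C4v C5v C6v where "C1v = c (mu (p \<otimes>\<^bsub>M\<^esub> n) \<otimes>\<^bsub>G\<^esub> k)"
    and "C2v = c (mu n \<otimes>\<^bsub>G\<^esub> k \<otimes>\<^bsub>G\<^esub> (mu m \<otimes>\<^bsub>G\<^esub> h))" and "C3v = aA x (c (mu m \<otimes>\<^bsub>G\<^esub> h))"
    and "C4v = c (k \<otimes>\<^bsub>G\<^esub> (h \<otimes>\<^bsub>G\<^esub> g))" and "C5v = aA (x \<otimes>\<^bsub>P\<^esub> y) (c g)" and "C6v = aA x (c (h \<otimes>\<^bsub>G\<^esub> g))"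
  have cl: "C1v \<in> carrier A" "C2v \<in> carrier A" "C3v \<in> carrier A" "C4v \<in> carrier A" "C5v \<in> carrier A" "C6v \<in> carrier A"
    unfolding C1v_def C2v_def C3v_def C4v_def C5v_def C6v_def using p n k m h g xy cc by simp_all
  have L: "d1 E A aA c (p, mu n \<otimes>\<^bsub>G\<^esub> k, mu m \<otimes>\<^bsub>G\<^esub> h) \<otimes>\<^bsub>A\<^esub> d1 E A aA c (n \<otimes>\<^bsub>M\<^esub> act k m, k \<otimes>\<^bsub>G\<^esub> h, g)
     = (C2v \<otimes>\<^bsub>A\<^esub> inv\<^bsub>A\<^esub> C2v) \<otimes>\<^bsub>A\<^esub> (C1v \<otimes>\<^bsub>A\<^esub> C3v \<otimes>\<^bsub>A\<^esub> inv\<^bsub>A\<^esub> C4v \<otimes>\<^bsub>A\<^esub> C5v)"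
    unfolding C1v_def C2v_def C3v_def C4v_def C5v_def
    using p n k m h g cc xy by (simp add: d1_val e1 e2 e3 e4 x_def[symmetric] gA.m_ac gA.cancel_l1 gA.cancel_l2)
  have R: "d1 E A aA c (p \<otimes>\<^bsub>M\<^esub> n, k, h \<otimes>\<^bsub>G\<^esub> g) \<otimes>\<^bsub>A\<^esub> aA (proj k) (d1 E A aA c (m, h, g))
     = (C6v \<otimes>\<^bsub>A\<^esub> inv\<^bsub>A\<^esub> C6v) \<otimes>\<^bsub>A\<^esub> (C1v \<otimes>\<^bsub>A\<^esub> C3v \<otimes>\<^bsub>A\<^esub> inv\<^bsub>A\<^esub> C4v \<otimes>\<^bsub>A\<^esub> C5v)"
    unfolding C1v_def C3v_def C4v_def C5v_def C6v_def
    using p n k m h g cc xy by (simp add: d1_val x_def[symmetric] y_def[symmetric] aA_mult aA_inv aA_comp gA.m_ac gA.cancel_l1 gA.cancel_l2)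
  show "d1 E A aA c (p, mu n \<otimes>\<^bsub>G\<^esub> k, mu m \<otimes>\<^bsub>G\<^esub> h) \<otimes>\<^bsub>A\<^esub> d1 E A aA c (n \<otimes>\<^bsub>M\<^esub> act k m, k \<otimes>\<^bsub>G\<^esub> h, g)
     = d1 E A aA c (p \<otimes>\<^bsub>M\<^esub> n, k, h \<otimes>\<^bsub>G\<^esub> g) \<otimes>\<^bsub>A\<^esub> aA (proj k) (d1 E A aA c (m, h, g))"
    unfolding L R using cl by simp
qed

lemma B2st_sub: "B2st E A aA s1 s0 \<subseteq> Z2st E A aA s1 s0"
  unfolding B2st_def Z2st_def B2_def using d1_Z2 by auto

lemma std_coboundary_factors:
  assumes c: "c \<in> C1 E A" and st: "d1 E A aA c \<in> Z2st E A aA s1 s0"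
  shows "c \<one>\<^bsub>G\<^esub> = \<one>\<^bsub>A\<^esub>" and "\<And>g. g \<in> carrier G \<Longrightarrow> c g = c (s0 (proj g))"
proof -
  note cl = C1_closed[OF c]
  have pt: "d1 E A aA c (\<one>\<^bsub>M\<^esub>, \<one>\<^bsub>G\<^esub>, \<one>\<^bsub>G\<^esub>) = \<one>\<^bsub>A\<^esub>" and sp: "vanishes_on_sections (d1 E A aA c)"
    using st Z2st_char by auto
  show c1: "c \<one>\<^bsub>G\<^esub> = \<one>\<^bsub>A\<^esub>" using pt cl[of "\<one>\<^bsub>G\<^esub>"] by (simp add: d1_val)
  fix g assume g: "g \<in> carrier G"
  define y where "y = g \<otimes>\<^bsub>G\<^esub> inv\<^bsub>G\<^esub> s0 (proj g)"
  have y: "y \<in> mu ` carrier M" unfolding y_def by (rule ncomp_arg[OF g])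
  have yg: "y \<otimes>\<^bsub>G\<^esub> s0 (proj g) = g" unfolding y_def using g by (simp add: gG.m_assoc)
  have "d1 E A aA c (s1 y, s0 (proj g), \<one>\<^bsub>G\<^esub>) = \<one>\<^bsub>A\<^esub>" using sp y g unfolding vanishes_on_sections_def by (meson proj_closed)
  then have "c g \<otimes>\<^bsub>A\<^esub> inv\<^bsub>A\<^esub> c (s0 (proj g)) = \<one>\<^bsub>A\<^esub>"
    using y g yg c1 cl[of g] cl[of "s0 (proj g)"] by (simp add: d1_val s1_closed mu_s1)
  then show "c g = c (s0 (proj g))" using cl g gA.inv_solve_right'[of "\<one>\<^bsub>A\<^esub>" "c g" "c (s0 (proj g))"] by simp
qed

end

lemma C2_eqI:
  assumes "z \<in> C2 E A" "w \<in> C2 E A"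
    and "\<And>m h g. m \<in> carrier (xM E) \<Longrightarrow> h \<in> carrier (xG E) \<Longrightarrow> g \<in> carrier (xG E) \<Longrightarrow> z (m,h,g) = w (m,h,g)"
  shows "z = w"
  using assms unfolding C2_def by (intro PiE_ext) (auto simp: dom2_def)

lemma Z2st_grp_simps:
  "carrier (Z2st_grp E A aA s1 s0) = Z2st E A aA s1 s0"
  "monoid.mult (Z2st_grp E A aA s1 s0) = (\<lambda>a b. restrict (\<lambda>x. a x \<otimes>\<^bsub>A\<^esub> b x) (dom2 E))"
  "carrier (B2st_grp E A aA s1 s0) = B2st E A aA s1 s0"
  "monoid.mult (B2st_grp E A aA s1 s0) = (\<lambda>a b. restrict (\<lambda>x. a x \<otimes>\<^bsub>A\<^esub> b x) (dom2 E))"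
  unfolding Z2st_grp_def B2st_grp_def C2grp_def by simp_all

section \<open>Transport along an extension equivalence\<close>

locale sectioned_equiv = e: ext_coeffs P K aK E s1 s0 A aA + e': ext_coeffs P K aK E' s1' s0' A aA
  for P K aK E s1 s0 A aA E' s1' s0' +
  fixes phi0 phi1
  assumes eqv: "ext_equiv K E E' phi0 phi1"
    and s0_compat: "\<forall>x\<in>carrier P. s0' x = phi0 (s0 x)"
    and s1_compat: "\<forall>g\<in>xmu E ` carrier (xM E). phi1 (s1 g) = s1' (phi0 g)"
begin

lemma phi0_hom: "phi0 \<in> hom (xG E) (xG E')" using eqv unfolding ext_equiv_def by auto
lemma phi1_hom: "phi1 \<in> hom (xM E) (xM E')" using eqv unfolding ext_equiv_def by auto
lemma phi0_closed[simp]: "g \<in> carrier (xG E) \<Longrightarrow> phi0 g \<in> carrier (xG E')" using hom_in_carrier[OF phi0_hom] by blast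
lemma phi1_closed[simp]: "m \<in> carrier (xM E) \<Longrightarrow> phi1 m \<in> carrier (xM E')" using hom_in_carrier[OF phi1_hom] by blast
lemma phi0_mult: "g \<in> carrier (xG E) \<Longrightarrow> h \<in> carrier (xG E) \<Longrightarrow> phi0 (g \<otimes>\<^bsub>xG E\<^esub> h) = phi0 g \<otimes>\<^bsub>xG E'\<^esub> phi0 h"
  using hom_mult[OF phi0_hom] by blast
lemma phi1_mult: "m \<in> carrier (xM E) \<Longrightarrow> n \<in> carrier (xM E) \<Longrightarrow> phi1 (m \<otimes>\<^bsub>xM E\<^esub> n) = phi1 m \<otimes>\<^bsub>xM E'\<^esub> phi1 n"
  using hom_mult[OF phi1_hom] by blast
lemma phi0_one[simp]: "phi0 \<one>\<^bsub>xG E\<^esub> = \<one>\<^bsub>xG E'\<^esub>" using hom_one[OF phi0_hom e.grpG e'.grpG] .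
lemma phi1_one[simp]: "phi1 \<one>\<^bsub>xM E\<^esub> = \<one>\<^bsub>xM E'\<^esub>" using hom_one[OF phi1_hom e.grpM e'.grpM] .
lemma phi0_inv: "g \<in> carrier (xG E) \<Longrightarrow> phi0 (inv\<^bsub>xG E\<^esub> g) = inv\<^bsub>xG E'\<^esub> (phi0 g)"
  using hom_inv_general[OF phi0_hom e.grpG e'.grpG] by blast
lemma phi1_inv: "m \<in> carrier (xM E) \<Longrightarrow> phi1 (inv\<^bsub>xM E\<^esub> m) = inv\<^bsub>xM E'\<^esub> (phi1 m)"
  using hom_inv_general[OF phi1_hom e.grpM e'.grpM] by blast
lemma mu_phi: "m \<in> carrier (xM E) \<Longrightarrow> xmu E' (phi1 m) = phi0 (xmu E m)" using eqv unfolding ext_equiv_def by auto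
lemma act_phi: "g \<in> carrier (xG E) \<Longrightarrow> m \<in> carrier (xM E) \<Longrightarrow> phi1 (xact E g m) = xact E' (phi0 g) (phi1 m)"
  using eqv unfolding ext_equiv_def by auto
lemma iota_phi: "k \<in> carrier K \<Longrightarrow> phi1 (xiota E k) = xiota E' k" using eqv unfolding ext_equiv_def by auto
lemma proj_phi[simp]: "g \<in> carrier (xG E) \<Longrightarrow> xpi E' (phi0 g) = xpi E g" using eqv unfolding ext_equiv_def by auto
lemma s0_phi: "x \<in> carrier P \<Longrightarrow> s0' x = phi0 (s0 x)" using s0_compat by auto

text \<open>Compatibility with the sections makes \<open>phi\<close> preserve normal forms, hence all the
  \<open>K\<close>-valued invariants built from them.\<close>
lemma ncomp_transport: "h \<in> carrier (xG E) \<Longrightarrow> e'.ncomp (phi0 h) = phi1 (e.ncomp h)"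
proof -
  assume h: "h \<in> carrier (xG E)"
  have a: "h \<otimes>\<^bsub>xG E\<^esub> inv\<^bsub>xG E\<^esub> s0 (xpi E h) \<in> xmu E ` carrier (xM E)" using e.ncomp_arg[OF h] .
  have "e'.ncomp (phi0 h) = s1' (phi0 h \<otimes>\<^bsub>xG E'\<^esub> inv\<^bsub>xG E'\<^esub> phi0 (s0 (xpi E h)))"
    unfolding e'.ncomp_def using h by (simp add: s0_phi)
  also have "\<dots> = s1' (phi0 (h \<otimes>\<^bsub>xG E\<^esub> inv\<^bsub>xG E\<^esub> s0 (xpi E h)))" using h by (simp add: phi0_mult phi0_inv)
  also have "\<dots> = phi1 (e.ncomp h)" unfolding e.ncomp_def by (rule sym[OF s1_compat[rule_format, OF a]])
  finally show ?thesis .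
qed

lemma defect_transport: "m \<in> carrier (xM E) \<Longrightarrow> h \<in> carrier (xG E) \<Longrightarrow> e'.defect (phi1 m) (phi0 h) = phi1 (e.defect m h)"
  unfolding e.defect_def e'.defect_def by (simp add: phi1_mult phi1_inv mu_phi phi0_mult[symmetric] ncomp_transport)

lemma iota_inv_transport: "u \<in> carrier (xM E) \<Longrightarrow> xmu E u = \<one>\<^bsub>xG E\<^esub> \<Longrightarrow> e'.iota_inv (phi1 u) = e.iota_inv u"
proof -
  assume u: "u \<in> carrier (xM E)" "xmu E u = \<one>\<^bsub>xG E\<^esub>"
  have "phi1 u = xiota E' (e.iota_inv u)" using e.iota_iota_inv[OF u] iota_phi[OF e.iota_inv_closed[OF u]] by simp
  then show ?thesis using e.iota_inv_closed[OF u] by simp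
qed

lemma kappa_transport: "m \<in> carrier (xM E) \<Longrightarrow> h \<in> carrier (xG E) \<Longrightarrow> e'.kappa (phi1 m) (phi0 h) = e.kappa m h"
  unfolding e.kappa_def e'.kappa_def by (simp add: defect_transport iota_inv_transport)

lemma lam_transport: "h \<in> carrier (xG E) \<Longrightarrow> g \<in> carrier (xG E) \<Longrightarrow> e'.lam (phi0 h) (phi0 g) = e.lam h g"
  unfolding e.lam_def e'.lam_def by (simp add: s0_phi ncomp_transport phi0_mult[symmetric] act_phi[symmetric] kappa_transport)

lemma lamL_transport: "k \<in> carrier (xG E) \<Longrightarrow> h \<in> carrier (xG E) \<Longrightarrow> g \<in> carrier (xG E) \<Longrightarrow>
   e'.lamL (phi0 k) (phi0 h) (phi0 g) = e.lamL k h g"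
  unfolding e.lamL_def e'.lamL_def by (simp add: phi0_mult[symmetric] lam_transport)
lemma lamR_transport: "k \<in> carrier (xG E) \<Longrightarrow> h \<in> carrier (xG E) \<Longrightarrow> g \<in> carrier (xG E) \<Longrightarrow>
   e'.lamR (phi0 k) (phi0 h) (phi0 g) = e.lamR k h g"
  unfolding e.lamR_def e'.lamR_def by (simp add: phi0_mult[symmetric] lam_transport)

lemma stdv_transport: "m \<in> carrier (xM E) \<Longrightarrow> h \<in> carrier (xG E) \<Longrightarrow> g \<in> carrier (xG E) \<Longrightarrow>
   e'.stdv f b (phi1 m) (phi0 h) (phi0 g) = e.stdv f b m h g"
  unfolding e.stdv_def e'.stdv_def by (simp add: kappa_transport lam_transport)

lemma assoc_cond_transport: "k \<in> carrier (xG E) \<Longrightarrow> h \<in> carrier (xG E) \<Longrightarrow> g \<in> carrier (xG E) \<Longrightarrow>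
   e'.assoc_cond f b (phi0 k) (phi0 h) (phi0 g) = e.assoc_cond f b k h g"
  unfolding e.assoc_cond_def e'.assoc_cond_def by (simp add: lamL_transport lamR_transport)

text \<open>Standard data live on \<open>K\<close> and \<open>P\<close> only, which are shared by both extensions.\<close>
lemma std_data_transport: "e'.std_data f b = e.std_data f b"
  unfolding e.std_data_def e'.std_data_def ..

abbreviation "pb \<equiv> pullback2 E phi0 phi1"

lemma pb_val: "m \<in> carrier (xM E) \<Longrightarrow> h \<in> carrier (xG E) \<Longrightarrow> g \<in> carrier (xG E) \<Longrightarrow>
  pb z (m,h,g) = z (phi1 m, phi0 h, phi0 g)"
  unfolding pullback2_def dom2_def by simp

lemma pb_C2: "z \<in> C2 E' A \<Longrightarrow> pb z \<in> C2 E A"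
  unfolding pullback2_def C2_def dom2_def by (auto simp: e'.C2_closed[unfolded C2_def dom2_def])

lemma pb_Z2: assumes z: "z \<in> Z2 E' A aA" shows "pb z \<in> Z2 E A aA"
proof (rule e.Z2I)
  have zc: "z \<in> C2 E' A" using z unfolding Z2_def by auto
  show "pb z \<in> C2 E A" by (rule pb_C2[OF zc])
  fix p n k m h g
  assume p: "p \<in> carrier (xM E)" and n: "n \<in> carrier (xM E)" and k: "k \<in> carrier (xG E)"
    and m: "m \<in> carrier (xM E)" and h: "h \<in> carrier (xG E)" and g: "g \<in> carrier (xG E)"
  have "z (phi1 p, xmu E' (phi1 n) \<otimes>\<^bsub>xG E'\<^esub> phi0 k, xmu E' (phi1 m) \<otimes>\<^bsub>xG E'\<^esub> phi0 h) \<otimes>\<^bsub>A\<^esub>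
        z (phi1 n \<otimes>\<^bsub>xM E'\<^esub> xact E' (phi0 k) (phi1 m), phi0 k \<otimes>\<^bsub>xG E'\<^esub> phi0 h, phi0 g)
     = z (phi1 p \<otimes>\<^bsub>xM E'\<^esub> phi1 n, phi0 k, phi0 h \<otimes>\<^bsub>xG E'\<^esub> phi0 g) \<otimes>\<^bsub>A\<^esub> aA (xpi E' (phi0 k)) (z (phi1 m, phi0 h, phi0 g))"
    by (rule e'.Z2_identity[OF z]) (use p n k m h g in simp_all)
  then show "pb z (p, xmu E n \<otimes>\<^bsub>xG E\<^esub> k, xmu E m \<otimes>\<^bsub>xG E\<^esub> h) \<otimes>\<^bsub>A\<^esub> pb z (n \<otimes>\<^bsub>xM E\<^esub> xact E k m, k \<otimes>\<^bsub>xG E\<^esub> h, g) =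
        pb z (p \<otimes>\<^bsub>xM E\<^esub> n, k, h \<otimes>\<^bsub>xG E\<^esub> g) \<otimes>\<^bsub>A\<^esub> aA (xpi E k) (pb z (m, h, g))"
    using p n k m h g by (simp add: pb_val phi0_mult phi1_mult mu_phi act_phi)
qed

lemma pb_vanishes_on_sections: "e'.vanishes_on_sections z \<Longrightarrow> e.vanishes_on_sections (pb z)"
  unfolding e.vanishes_on_sections_def e'.vanishes_on_sections_def
proof (intro ballI)
  fix y x assume sp: "\<forall>y\<in>xmu E' ` carrier (xM E'). \<forall>x\<in>carrier P. z (s1' y, s0' x, \<one>\<^bsub>xG E'\<^esub>) = \<one>\<^bsub>A\<^esub>"
    and y: "y \<in> xmu E ` carrier (xM E)" and x: "x \<in> carrier P"
  obtain m where m: "m \<in> carrier (xM E)" "y = xmu E m" using y by auto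
  have y': "phi0 y \<in> xmu E' ` carrier (xM E')" using m mu_phi[of m] phi1_closed[of m] by (metis image_eqI)
  have "pb z (s1 y, s0 x, \<one>\<^bsub>xG E\<^esub>) = z (phi1 (s1 y), phi0 (s0 x), phi0 \<one>\<^bsub>xG E\<^esub>)"
    using y x e.s1_closed[OF y] by (simp only: pb_val e.s0_closed e.gG.one_closed)
  also have "\<dots> = z (s1' (phi0 y), s0' x, \<one>\<^bsub>xG E'\<^esub>)"
    using s1_compat[rule_format, OF y] y x by (simp add: s0_phi)
  finally show "pb z (s1 y, s0 x, \<one>\<^bsub>xG E\<^esub>) = \<one>\<^bsub>A\<^esub>" using sp y' x by simp
qed

lemma pb_Z2st: assumes z: "z \<in> Z2st E' A aA s1' s0'" shows "pb z \<in> Z2st E A aA s1 s0"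
proof -
  have c: "z \<in> Z2 E' A aA" "z (\<one>\<^bsub>xM E'\<^esub>, \<one>\<^bsub>xG E'\<^esub>, \<one>\<^bsub>xG E'\<^esub>) = \<one>\<^bsub>A\<^esub>" "e'.vanishes_on_sections z"
    using z e'.Z2st_char by auto
  have "pb z (\<one>\<^bsub>xM E\<^esub>, \<one>\<^bsub>xG E\<^esub>, \<one>\<^bsub>xG E\<^esub>) = \<one>\<^bsub>A\<^esub>" using c(2) by (simp add: pb_val)
  then show ?thesis using pb_Z2[OF c(1)] pb_vanishes_on_sections[OF c(3)] e.Z2st_char by blast
qed

text \<open>Injectivity: a standard cocycle on \<open>E'\<close> is determined by its datum, and the datum can be
  read off from the pullback, since \<open>iota\<close> and \<open>s0\<close> factor through \<open>phi\<close>.\<close>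
lemma pb_inj:
  assumes z1: "z1 \<in> Z2st E' A aA s1' s0'" and z2: "z2 \<in> Z2st E' A aA s1' s0'" and eq: "pb z1 = pb z2"
  shows "z1 = z2"
proof (rule C2_eqI[OF e'.Z2st_C2[OF z1] e'.Z2st_C2[OF z2]])
  fix m h g assume a: "m \<in> carrier (xM E')" "h \<in> carrier (xG E')" "g \<in> carrier (xG E')"
  have c1: "z1 \<in> Z2 E' A aA" "z1 (\<one>\<^bsub>xM E'\<^esub>, \<one>\<^bsub>xG E'\<^esub>, \<one>\<^bsub>xG E'\<^esub>) = \<one>\<^bsub>A\<^esub>" "e'.vanishes_on_sections z1" using z1 e'.Z2st_char by auto
  have c2: "z2 \<in> Z2 E' A aA" "z2 (\<one>\<^bsub>xM E'\<^esub>, \<one>\<^bsub>xG E'\<^esub>, \<one>\<^bsub>xG E'\<^esub>) = \<one>\<^bsub>A\<^esub>" "e'.vanishes_on_sections z2" using z2 e'.Z2st_char by auto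
  have f: "\<And>k. k \<in> carrier K \<Longrightarrow> e'.zK z1 k = e'.zK z2 k"
  proof -
    fix k assume k: "k \<in> carrier K"
    have "pb z1 (xiota E k, \<one>\<^bsub>xG E\<^esub>, \<one>\<^bsub>xG E\<^esub>) = pb z2 (xiota E k, \<one>\<^bsub>xG E\<^esub>, \<one>\<^bsub>xG E\<^esub>)" using eq by simp
    then show "e'.zK z1 k = e'.zK z2 k" unfolding e'.zK_def using k by (simp add: pb_val iota_phi)
  qed
  have b: "\<And>x y. x \<in> carrier P \<Longrightarrow> y \<in> carrier P \<Longrightarrow> e'.zP z1 x y = e'.zP z2 x y"
  proof -
    fix x y assume xy: "x \<in> carrier P" "y \<in> carrier P"
    have "pb z1 (\<one>\<^bsub>xM E\<^esub>, s0 x, s0 y) = pb z2 (\<one>\<^bsub>xM E\<^esub>, s0 x, s0 y)" using eq by simp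
    then show "e'.zP z1 x y = e'.zP z2 x y" unfolding e'.zP_def using xy by (simp add: pb_val s0_phi)
  qed
  have "z1 (m,h,g) = e'.stdv (e'.zK z1) (e'.zP z1) m h g" by (rule e'.std_cocycle_formula[OF c1 a])
  also have "\<dots> = e'.stdv (e'.zK z2) (e'.zP z2) m h g"
    unfolding e'.stdv_def using a f b by simp
  also have "\<dots> = z2 (m,h,g)" by (rule e'.std_cocycle_formula[OF c2 a, symmetric])
  finally show "z1 (m,h,g) = z2 (m,h,g)" .
qed

text \<open>Surjectivity: the standard cochain on \<open>E'\<close> of the datum of a standard cocycle on \<open>E\<close> is a
  cocycle (its associativity condition on sections transports from \<open>E\<close>) and pulls back to it.\<close>
lemma pb_surj:
  assumes z: "z \<in> Z2st E A aA s1 s0"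
  shows "\<exists>z'\<in>Z2st E' A aA s1' s0'. pb z' = z"
proof -
  have c: "z \<in> Z2 E A aA" "z (\<one>\<^bsub>xM E\<^esub>, \<one>\<^bsub>xG E\<^esub>, \<one>\<^bsub>xG E\<^esub>) = \<one>\<^bsub>A\<^esub>" "e.vanishes_on_sections z" using z e.Z2st_char by auto
  define f b where "f = e.zK z" and "b = e.zP z"
  have gd: "e.std_data f b" unfolding f_def b_def by (rule e.std_data_of_cocycle[OF c(1,2)])
  have gd': "e'.std_data f b" using gd std_data_transport by simp
  have zv: "\<And>m h g. m \<in> carrier (xM E) \<Longrightarrow> h \<in> carrier (xG E) \<Longrightarrow> g \<in> carrier (xG E) \<Longrightarrow> z (m,h,g) = e.stdv f b m h g"
    unfolding f_def b_def by (rule e.std_cocycle_formula[OF c])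
  have assoc_on_E: "\<And>k h g. k \<in> carrier (xG E) \<Longrightarrow> h \<in> carrier (xG E) \<Longrightarrow> g \<in> carrier (xG E) \<Longrightarrow> e.assoc_cond f b k h g"
  proof -
    fix k h g assume a: "k \<in> carrier (xG E)" "h \<in> carrier (xG E)" "g \<in> carrier (xG E)"
    have "z (\<one>\<^bsub>xM E\<^esub>, k, h) \<otimes>\<^bsub>A\<^esub> z (\<one>\<^bsub>xM E\<^esub>, k \<otimes>\<^bsub>xG E\<^esub> h, g)
           = z (\<one>\<^bsub>xM E\<^esub>, k, h \<otimes>\<^bsub>xG E\<^esub> g) \<otimes>\<^bsub>A\<^esub> aA (xpi E k) (z (\<one>\<^bsub>xM E\<^esub>, h, g))"
      using e.Z2_group_cocycle[OF c(1,2) a] .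
    then show "e.assoc_cond f b k h g" using e.stdv_assoc_iff[OF gd a] a by (simp add: zv)
  qed
  define z' where "z' = e'.std_cochain f b"
  have base: "\<And>x y w. x \<in> carrier P \<Longrightarrow> y \<in> carrier P \<Longrightarrow> w \<in> carrier P \<Longrightarrow> e'.assoc_cond f b (s0' x) (s0' y) (s0' w)"
    using assoc_on_E by (simp add: s0_phi assoc_cond_transport)
  have z'Z: "z' \<in> Z2 E' A aA" unfolding z'_def by (rule e'.std_cochain_Z2[OF gd' base])
  have z'st: "z' \<in> Z2st E' A aA s1' s0'"
    using z'Z e'.std_cochain_pt[OF gd'] e'.std_cochain_vanish[OF gd'] e'.Z2st_char unfolding z'_def e'.vanishes_on_sections_def by auto
  have "pb z' = z"
  proof (rule C2_eqI[OF pb_C2[OF e'.std_cochain_C2[OF gd']] e.Z2st_C2[OF z], folded z'_def])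
    fix m h g assume a: "m \<in> carrier (xM E)" "h \<in> carrier (xG E)" "g \<in> carrier (xG E)"
    show "pb z' (m,h,g) = z (m,h,g)" unfolding z'_def using a
      by (simp add: pb_val e'.std_cochain_val[OF gd'] stdv_transport zv)
  qed
  then show ?thesis using z'st by blast
qed

lemma pb_mult: "pb (restrict (\<lambda>x. a x \<otimes>\<^bsub>A\<^esub> b x) (dom2 E')) = restrict (\<lambda>x. pb a x \<otimes>\<^bsub>A\<^esub> pb b x) (dom2 E)"
  unfolding pullback2_def dom2_def by (auto simp: fun_eq_iff)

lemma pb_bij: "bij_betw pb (Z2st E' A aA s1' s0') (Z2st E A aA s1 s0)"
proof (rule bij_betwI')
  fix x y assume "x \<in> Z2st E' A aA s1' s0'" "y \<in> Z2st E' A aA s1' s0'"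
  then show "(pb x = pb y) = (x = y)" using pb_inj by blast
next
  fix x assume "x \<in> Z2st E' A aA s1' s0'" then show "pb x \<in> Z2st E A aA s1 s0" by (rule pb_Z2st)
next
  fix y assume "y \<in> Z2st E A aA s1 s0" then show "\<exists>x\<in>Z2st E' A aA s1' s0'. y = pb x" using pb_surj by metis
qed

lemma pb_iso: "pb \<in> iso (Z2st_grp E' A aA s1' s0') (Z2st_grp E A aA s1 s0)"
proof (rule isoI)
  show "pb \<in> hom (Z2st_grp E' A aA s1' s0') (Z2st_grp E A aA s1 s0)"
    by (rule homI) (auto simp: Z2st_grp_simps pb_Z2st pb_mult)
  show "bij_betw pb (carrier (Z2st_grp E' A aA s1' s0')) (carrier (Z2st_grp E A aA s1 s0))"
    unfolding Z2st_grp_simps by (rule pb_bij)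
qed

lemma pb_d1: assumes c: "c \<in> C1 E' A"
  shows "pb (d1 E' A aA c) = d1 E A aA (restrict (\<lambda>g. c (phi0 g)) (carrier (xG E)))"
proof -
  have cc: "restrict (\<lambda>g. c (phi0 g)) (carrier (xG E)) \<in> C1 E A"
    using c unfolding C1_def by auto
  show ?thesis
  proof (rule C2_eqI[OF pb_C2[OF e'.d1_C2[OF c]] e.d1_C2[OF cc]])
    fix m h g assume "m \<in> carrier (xM E)" "h \<in> carrier (xG E)" "g \<in> carrier (xG E)"
    then show "pb (d1 E' A aA c) (m,h,g) = d1 E A aA (restrict (\<lambda>g. c (phi0 g)) (carrier (xG E))) (m,h,g)"
      by (simp add: pb_val e.d1_val e'.d1_val mu_phi phi0_mult)
  qed
qed

lemma pb_B2st: assumes b: "b \<in> B2st E' A aA s1' s0'" shows "pb b \<in> B2st E A aA s1 s0"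
proof -
  obtain c where c: "c \<in> C1 E' A" "b = d1 E' A aA c" using b unfolding B2st_def B2_def by auto
  have cc: "restrict (\<lambda>g. c (phi0 g)) (carrier (xG E)) \<in> C1 E A" using c unfolding C1_def by auto
  have "pb b \<in> B2 E A aA" unfolding B2_def c(2) pb_d1[OF c(1)] using cc by blast
  moreover have "pb b \<in> Z2st E A aA s1 s0" using pb_Z2st b e'.B2st_sub by blast
  ultimately show ?thesis unfolding B2st_def Z2st_def by auto
qed

text \<open>A standard coboundary on \<open>E\<close> is \<open>d c\<close> with \<open>c\<close> factoring through \<open>proj\<close>; the same formula
  defines a standard coboundary on \<open>E'\<close> pulling back to it.\<close>
lemma B2st_surj: assumes b: "b \<in> B2st E A aA s1 s0" shows "\<exists>b'\<in>B2st E' A aA s1' s0'. pb b' = b"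
proof -
  obtain c where c: "c \<in> C1 E A" "b = d1 E A aA c" using b unfolding B2st_def B2_def by auto
  have "d1 E A aA c \<in> Z2st E A aA s1 s0" using b e.B2st_sub c(2) by blast
  note c1 = e.std_coboundary_factors(1)[OF c(1) this] and cs = e.std_coboundary_factors(2)[OF c(1) this]
  note cl = e.C1_closed[OF c(1)]
  define c' where "c' = restrict (\<lambda>g'. c (s0 (xpi E' g'))) (carrier (xG E'))"
  have c'c: "c' \<in> C1 E' A" unfolding c'_def C1_def using cl by auto
  have c'v: "\<And>g'. g' \<in> carrier (xG E') \<Longrightarrow> c' g' = c (s0 (xpi E' g'))" unfolding c'_def by simp
  define b' where "b' = d1 E' A aA c'"
  have b'Z: "b' \<in> Z2 E' A aA" unfolding b'_def by (rule e'.d1_Z2[OF c'c])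
  have b'pt: "b' (\<one>\<^bsub>xM E'\<^esub>, \<one>\<^bsub>xG E'\<^esub>, \<one>\<^bsub>xG E'\<^esub>) = \<one>\<^bsub>A\<^esub>"
    unfolding b'_def using c1 cl by (simp add: e'.d1_val c'v)
  have b'std: "e'.vanishes_on_sections b'" unfolding e'.vanishes_on_sections_def
  proof (intro ballI)
    fix y x assume y: "y \<in> xmu E' ` carrier (xM E')" and x: "x \<in> carrier P"
    obtain m where m: "m \<in> carrier (xM E')" "y = xmu E' m" using y by auto
    show "b' (s1' y, s0' x, \<one>\<^bsub>xG E'\<^esub>) = \<one>\<^bsub>A\<^esub>" unfolding b'_def
      using y x m c1 cl by (simp add: e'.d1_val e'.s1_closed e'.mu_s1 c'v e'.proj_mult)
  qed
  have b'st: "b' \<in> B2st E' A aA s1' s0'"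
  proof -
    have "b' \<in> Z2st E' A aA s1' s0'" using b'Z b'pt b'std e'.Z2st_char by blast
    moreover have "b' \<in> B2 E' A aA" unfolding b'_def B2_def using c'c by blast
    ultimately show ?thesis unfolding B2st_def Z2st_def by auto
  qed
  have "pb b' = b"
  proof (rule C2_eqI[OF pb_C2[OF e'.d1_C2[OF c'c], folded b'_def] e.d1_C2[OF c(1), folded c(2)]])
    fix m h g assume a: "m \<in> carrier (xM E)" "h \<in> carrier (xG E)" "g \<in> carrier (xG E)"
    have cmh: "c (xmu E m \<otimes>\<^bsub>xG E\<^esub> h) = c h" using cs[of "xmu E m \<otimes>\<^bsub>xG E\<^esub> h"] cs[of h] a by simp
    show "pb b' (m,h,g) = b (m,h,g)" unfolding b'_def c(2) using a cmh
      by (simp add: pb_val e'.d1_val e.d1_val c'v mu_phi phi0_mult[symmetric] cs[symmetric])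
  qed
  then show ?thesis using b'st by blast
qed

lemma pb_iso_B: "pb \<in> iso (B2st_grp E' A aA s1' s0') (B2st_grp E A aA s1 s0)"
proof (rule isoI)
  show "pb \<in> hom (B2st_grp E' A aA s1' s0') (B2st_grp E A aA s1 s0)"
    by (rule homI) (auto simp: Z2st_grp_simps pb_B2st pb_mult)
  show "bij_betw pb (carrier (B2st_grp E' A aA s1' s0')) (carrier (B2st_grp E A aA s1 s0))"
    unfolding Z2st_grp_simps
  proof (rule bij_betwI')
    fix x y assume "x \<in> B2st E' A aA s1' s0'" "y \<in> B2st E' A aA s1' s0'"
    then show "(pb x = pb y) = (x = y)" using pb_inj e'.B2st_sub by blast
  next
    fix x assume "x \<in> B2st E' A aA s1' s0'" then show "pb x \<in> B2st E A aA s1 s0" by (rule pb_B2st)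
  next
    fix y assume "y \<in> B2st E A aA s1 s0" then show "\<exists>x\<in>B2st E' A aA s1' s0'. y = pb x" using B2st_surj by metis
  qed
qed

lemma pb_iso_H: "(\<lambda>S. pb ` S) \<in> iso (H2st_grp E' A aA s1' s0') (H2st_grp E A aA s1 s0)"
  unfolding H2st_grp_def
proof (rule iso_image_Mod)
  show "pb \<in> hom (Z2st_grp E' A aA s1' s0') (Z2st_grp E A aA s1 s0)" using pb_iso by (simp add: iso_def)
  show "bij_betw pb (carrier (Z2st_grp E' A aA s1' s0')) (carrier (Z2st_grp E A aA s1 s0))"
    unfolding Z2st_grp_simps by (rule pb_bij)
  show "B2st E' A aA s1' s0' \<subseteq> carrier (Z2st_grp E' A aA s1' s0')"
    unfolding Z2st_grp_simps by (rule e'.B2st_sub)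
  show "pb ` B2st E' A aA s1' s0' = B2st E A aA s1 s0"
    using pb_B2st B2st_surj by blast
  fix x y assume "x \<in> carrier (Z2st_grp E' A aA s1' s0')" "y \<in> carrier (Z2st_grp E' A aA s1' s0')"
  then show "x \<otimes>\<^bsub>Z2st_grp E' A aA s1' s0'\<^esub> y \<in> carrier (Z2st_grp E' A aA s1' s0')"
    unfolding Z2st_grp_simps by (rule e'.Z2st_mult)
qed

end

theorem proposition4p11:
  fixes P :: "'p monoid" and K :: "'k monoid" and aK :: "'p \<Rightarrow> 'k \<Rightarrow> 'k"
    and A :: "'a monoid" and aA :: "'p \<Rightarrow> 'a \<Rightarrow> 'a"
    and E :: "('p,'k,'g,'m) cmext" and E' :: "('p,'k,'g2,'m2) cmext"
    and phi0 :: "'g \<Rightarrow> 'g2" and phi1 :: "'m \<Rightarrow> 'm2"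
    and s1 :: "'g \<Rightarrow> 'm" and s0 :: "'p \<Rightarrow> 'g"
    and s1' :: "'g2 \<Rightarrow> 'm2" and s0' :: "'p \<Rightarrow> 'g2"
  assumes "crossed_ext P K aK E" and "crossed_ext P K aK E'"
    and "ext_equiv K E E' phi0 phi1"
    and "section_system P E s1 s0" and "section_system P E' s1' s0'"
    and "\<forall>x\<in>carrier P. s0' x = phi0 (s0 x)"
    and "\<forall>g\<in>xmu E ` carrier (xM E). phi1 (s1 g) = s1' (phi0 g)"
    and "abelian_module P A aA"
  shows "pullback2 E phi0 phi1 ` Z2 E' A aA \<subseteq> Z2 E A aA
    \<and> pullback2 E phi0 phi1 \<in> iso (Z2st_grp E' A aA s1' s0') (Z2st_grp E A aA s1 s0)
    \<and> pullback2 E phi0 phi1 \<in> iso (B2st_grp E' A aA s1' s0') (B2st_grp E A aA s1 s0)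
    \<and> (\<lambda>S. pullback2 E phi0 phi1 ` S) \<in> iso (H2st_grp E' A aA s1' s0') (H2st_grp E A aA s1 s0)"
proof -
  interpret sectioned_equiv P K aK E s1 s0 A aA E' s1' s0' phi0 phi1
    by unfold_locales (fact assms)+
  show ?thesis
    using pb_Z2 pb_iso pb_iso_B pb_iso_H by blast
qed

end
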